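(* In the polar Brauer category $\mathcal{AB}(\delta)$ over a commutative ring $K$, $\delta\in K$, with $\mathbb G_i=Z_i\otimes I-\mathbb H^i$ and $\Phi=(1-\delta)\mathbb I_1-\mathbb H$, the following hold in $\mathrm{End}_{\mathcal{AB}(\delta)}(1)$ for all $\ell\ge0$: $$(\mathbb H^{\ell+1})^T=\sum_{i=1}^\ell\mathbb G_i\Phi^{\ell-i}-\mathbb H\Phi^\ell,\qquad (\mathbb H^{\ell+1})^T=\sum_{i=1}^\ell\Phi^{\ell-i}\mathbb G_i-\Phi^\ell\mathbb H,$$ and in particular $\sum_{i=1}^{\ell-1}[Z_i\otimes I,\Phi^{\ell-i}]=0$ for all $\ell$.
   Context: Let $K$ be a commutative ring and $\delta\in K$. The Brauer category $\mathcal B(\delta)$ has objects $\mathbb N$; $\mathrm{Hom}_{\mathcal B(\delta)}(r,s)$ is the free $K$-module on Brauer $(r,s)$-diagrams; composition $BA$ (first $A$, then $B$) is stacking with closed loops replaced by a factor $\delta$; $\otimes$ is juxtaposition. $I$ is the identity of $1$, $I_r=I^{\otimes r}$, $X$ the crossing, $\cap:2\to0$ the cap, $\cup:0\to2$ the cup, $H=X-\cup\circ\cap$. The polar Brauer category $\mathcal{AB}(\delta)$ is the $K$-linear category with objects $\mathbb N$ generated, under composition and the right action $\mathbb D\mapsto\mathbb D\otimes B$ of morphisms $B$ of $\mathcal B(\delta)$ (juxtaposing $B$ on the right; $\mathbb D:r\to s$, $B:k\to\ell$ give $\mathbb D\otimes B:r+k\to s+\ell$), by $\mathbb I_0$ (a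 vertical pole, identity of $0$) and $\mathbb H:1\to1$ (pole joined by a horizontal connector to one thin strand), subject to: (i) $(\mathbb I_0\otimes B)(\mathbb I_0\otimes A)=\mathbb I_0\otimes BA$, $(\mathbb H\otimes B)(\mathbb I_1\otimes A)=(\mathbb I_1\otimes B)(\mathbb H\otimes A)=\mathbb H\otimes BA$, with $\mathbb I_r=\mathbb I_0\otimes I_r$; (ii) $[\mathbb H_{01},\mathbb H_{02}+\mathbb H_{12}]=0$ with $[a,b]=ab-ba$, $\mathbb H_{01}=\mathbb H\otimes I$, $\mathbb X_0=\mathbb I_0\otimes X$, $\mathbb H_{02}=\mathbb X_0\mathbb H_{01}\mathbb X_0$, $\mathbb H_{12}=\mathbb I_0\otimes H$; (iii) $\mathbb H^T=-\mathbb H$, where for $\mathbb D:1\to1$ we write $\mathbb D^T=(\mathbb I_0\otimes\cap\otimes I)(\mathbb D\otimes X)(\mathbb I_0\otimes\cup\otimes I)$; relations are imposed in all composites and right tensor products. Products denote composition, powers are composition powers ($\mathbb H^0=\Phi^0=\mathbb I_1$). Let $\Pi=\mathbb I_0\otimes\cap$, $\amalg=\mathbb I_0\otimes\cup$ and $Z_\ell=\Pi(\mathbb H^\ell\otimes I)\amalg\in\mathrm{End}(0)$ for $\ell\ge1$. *)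

theory Defs
  imports Main
begin

text \<open>Points of a Brauer (r,s)-diagram: Inl i (i < r) are the source (bottom) points,
  Inr j (j < s) the target (top) points. A diagram is a perfect matching, stored as a
  symmetric irreflexive relation. A morphism r -> s is a K-valued function on diagrams;
  only its values on (r,s)-diagrams matter (free K-module on (r,s)-diagrams).\<close>

type_synonym pt = "nat + nat"
type_synonym bdiagram = "(pt \<times> pt) set"
type_synonym 'k bmor = "bdiagram \<Rightarrow> 'k"

definition bpts :: "nat \<Rightarrow> nat \<Rightarrow> pt set" where
  "bpts r s = Inl ` {..<r} \<union> Inr ` {..<s}"

definition brauer_diag :: "nat \<Rightarrow> nat \<Rightarrow> bdiagram \<Rightarrow> bool" where
  "brauer_diag r s d \<longleftrightarrow> d \<subseteq> bpts r s \<times> bpts r s \<and> sym d \<and> (\<forall>p. (p, p) \<notin> d)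
     \<and> (\<forall>p\<in>bpts r s. \<exists>!q. (p, q) \<in> d)"

definition bdiags :: "nat \<Rightarrow> nat \<Rightarrow> bdiagram set" where
  "bdiags r s = {d. brauer_diag r s d}"

text \<open>Stacking: the lower diagram d1 : r -> s occupies levels 0 (its source) and 1 (middle),
  the upper diagram d2 : s -> t occupies levels 1 (middle) and 2 (its target).\<close>

definition lift_lo :: "pt \<Rightarrow> nat \<times> nat" where
  "lift_lo p = (case p of Inl i \<Rightarrow> (0, i) | Inr j \<Rightarrow> (1, j))"

definition lift_hi :: "pt \<Rightarrow> nat \<times> nat" where
  "lift_hi p = (case p of Inl j \<Rightarrow> (1, j) | Inr k \<Rightarrow> (2, k))"

definition lift_ext :: "pt \<Rightarrow> nat \<times> nat" where
  "lift_ext p = (case p of Inl i \<Rightarrow> (0, i) | Inr k \<Rightarrow> (2, k))"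

definition glue_rel :: "bdiagram \<Rightarrow> bdiagram \<Rightarrow> ((nat \<times> nat) \<times> (nat \<times> nat)) set" where
  "glue_rel d2 d1 = (map_prod lift_lo lift_lo ` d1 \<union> map_prod lift_hi lift_hi ` d2)\<^sup>*"

definition diag_comp :: "nat \<Rightarrow> nat \<Rightarrow> bdiagram \<Rightarrow> bdiagram \<Rightarrow> bdiagram" where
  "diag_comp r t d2 d1 = {(p, q). p \<in> bpts r t \<and> q \<in> bpts r t \<and> p \<noteq> q
      \<and> (lift_ext p, lift_ext q) \<in> glue_rel d2 d1}"

text \<open>Number of closed loops (components consisting only of middle points).\<close>
definition diag_loops :: "nat \<Rightarrow> bdiagram \<Rightarrow> bdiagram \<Rightarrow> nat" where
  "diag_loops s d2 d1 = card {glue_rel d2 d1 `` {(1, j)} | j. j < s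
      \<and> glue_rel d2 d1 `` {(1, j)} \<subseteq> {(1, j') | j'. j' < s}}"

text \<open>Composition B A (first A : r -> s, then B : s -> t), bilinear extension.\<close>
definition bcomp :: "'k::comm_ring_1 \<Rightarrow> nat \<Rightarrow> nat \<Rightarrow> nat \<Rightarrow> 'k bmor \<Rightarrow> 'k bmor \<Rightarrow> 'k bmor" where
  "bcomp \<delta> r s t B A = (\<lambda>d. \<Sum>d1\<in>bdiags r s. \<Sum>d2\<in>bdiags s t.
      if diag_comp r t d2 d1 = d then \<delta> ^ diag_loops s d2 d1 * (B d2 * A d1) else 0)"

definition bshift :: "nat \<Rightarrow> nat \<Rightarrow> pt \<Rightarrow> pt" where
  "bshift r s p = (case p of Inl i \<Rightarrow> Inl (i + r) | Inr j \<Rightarrow> Inr (j + s))"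

definition diag_tens :: "nat \<Rightarrow> nat \<Rightarrow> bdiagram \<Rightarrow> bdiagram \<Rightarrow> bdiagram" where
  "diag_tens r1 s1 d1 d2 = d1 \<union> map_prod (bshift r1 s1) (bshift r1 s1) ` d2"

definition btens :: "nat \<Rightarrow> nat \<Rightarrow> nat \<Rightarrow> nat \<Rightarrow> 'k::comm_ring_1 bmor \<Rightarrow> 'k bmor \<Rightarrow> 'k bmor" where
  "btens r1 s1 r2 s2 B A = (\<lambda>d. \<Sum>d1\<in>bdiags r1 s1. \<Sum>d2\<in>bdiags r2 s2.
      if diag_tens r1 s1 d1 d2 = d then B d1 * A d2 else 0)"

definition bbasis :: "bdiagram \<Rightarrow> 'k::comm_ring_1 bmor" where
  "bbasis d = (\<lambda>e. if e = d then 1 else 0)"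

definition idd :: "nat \<Rightarrow> bdiagram" where
  "idd r = {(Inl i, Inr i) | i. i < r} \<union> {(Inr i, Inl i) | i. i < r}"

definition crossd :: bdiagram where
  "crossd = {(Inl 0, Inr 1), (Inr 1, Inl 0), (Inl 1, Inr 0), (Inr 0, Inl 1)}"

definition capd :: bdiagram where
  "capd = {(Inl 0, Inl 1), (Inl 1, Inl 0)}"

definition cupd :: bdiagram where
  "cupd = {(Inr 0, Inr 1), (Inr 1, Inr 0)}"

definition bI :: "'k::comm_ring_1 bmor" where "bI = bbasis (idd 1)"
definition bX :: "'k::comm_ring_1 bmor" where "bX = bbasis crossd"
definition bcap :: "'k::comm_ring_1 bmor" where "bcap = bbasis capd"
definition bcup :: "'k::comm_ring_1 bmor" where "bcup = bbasis cupd"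

definition bH :: "'k::comm_ring_1 \<Rightarrow> 'k bmor" where
  "bH \<delta> = (\<lambda>d. bX d - bcomp \<delta> 2 0 2 bcup bcap d)"

text \<open>Formal expressions: Pole = I_0 : 0 -> 0, HH = H : 1 -> 1, Comp D E = D E (first E),
  Tens D k l B = D (x) B with B : k -> l, Zer r s the zero morphism, Add, Smul.\<close>

datatype 'k abt =
    Pole
  | HH
  | Comp "'k abt" "'k abt"
  | Tens "'k abt" nat nat "'k bmor"
  | Zer nat nat
  | Add "'k abt" "'k abt"
  | Smul 'k "'k abt"

inductive wt :: "'k abt \<Rightarrow> nat \<Rightarrow> nat \<Rightarrow> bool" where
  "wt Pole 0 0"
| "wt HH 1 1"
| "wt D s t \<Longrightarrow> wt E r s \<Longrightarrow> wt (Comp D E) r t"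
| "wt D r s \<Longrightarrow> wt (Tens D k l B) (r + k) (s + l)"
| "wt (Zer r s) r s"
| "wt D r s \<Longrightarrow> wt E r s \<Longrightarrow> wt (Add D E) r s"
| "wt D r s \<Longrightarrow> wt (Smul c D) r s"

definition aI :: "nat \<Rightarrow> 'k::comm_ring_1 abt" where
  "aI r = Tens Pole r r (bbasis (idd r))"

definition asub :: "'k::comm_ring_1 abt \<Rightarrow> 'k abt \<Rightarrow> 'k abt" where
  "asub D E = Add D (Smul (-1) E)"

definition aX0 :: "'k::comm_ring_1 abt" where "aX0 = Tens Pole 2 2 bX"
definition aH01 :: "'k::comm_ring_1 abt" where "aH01 = Tens HH 1 1 bI"
definition aH02 :: "'k::comm_ring_1 abt" where "aH02 = Comp aX0 (Comp aH01 aX0)"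
definition aH12 :: "'k::comm_ring_1 \<Rightarrow> 'k abt" where "aH12 \<delta> = Tens Pole 2 2 (bH \<delta>)"

definition atransp :: "'k::comm_ring_1 abt \<Rightarrow> 'k abt" where
  "atransp D = Comp (Tens Pole 3 1 (btens 2 0 1 1 bcap bI))
     (Comp (Tens D 2 2 bX) (Tens Pole 1 3 (btens 0 2 1 1 bcup bI)))"

text \<open>The least congruence on well-typed expressions making them the morphisms of a
  K-linear category with a K-linear right action of B(delta), and imposing (i)-(iii).
  abeq delta r s D E: D = E in Hom(r,s).\<close>

inductive abeq :: "'k::comm_ring_1 \<Rightarrow> nat \<Rightarrow> nat \<Rightarrow> 'k abt \<Rightarrow> 'k abt \<Rightarrow> bool" for \<delta> :: "'k" where
  ab_refl: "wt D r s \<Longrightarrow> abeq \<delta> r s D D"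
| ab_sym: "abeq \<delta> r s D E \<Longrightarrow> abeq \<delta> r s E D"
| ab_trans: "abeq \<delta> r s D E \<Longrightarrow> abeq \<delta> r s E F \<Longrightarrow> abeq \<delta> r s D F"
| ab_comp_cong: "abeq \<delta> s t D D' \<Longrightarrow> abeq \<delta> r s E E' \<Longrightarrow> abeq \<delta> r t (Comp D E) (Comp D' E')"
| ab_tens_cong: "abeq \<delta> r s D D' \<Longrightarrow> (\<forall>d. brauer_diag k l d \<longrightarrow> B d = B' d) \<Longrightarrow>
     abeq \<delta> (r + k) (s + l) (Tens D k l B) (Tens D' k l B')"
| ab_add_cong: "abeq \<delta> r s D D' \<Longrightarrow> abeq \<delta> r s E E' \<Longrightarrow> abeq \<delta> r s (Add D E) (Add D' E')"
| ab_smul_cong: "abeq \<delta> r s D D' \<Longrightarrow> abeq \<delta> r s (Smul c D) (Smul c D')"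
| ab_add_assoc: "wt D r s \<Longrightarrow> wt E r s \<Longrightarrow> wt F r s \<Longrightarrow>
     abeq \<delta> r s (Add (Add D E) F) (Add D (Add E F))"
| ab_add_comm: "wt D r s \<Longrightarrow> wt E r s \<Longrightarrow> abeq \<delta> r s (Add D E) (Add E D)"
| ab_add_zero: "wt D r s \<Longrightarrow> abeq \<delta> r s (Add (Zer r s) D) D"
| ab_add_neg: "wt D r s \<Longrightarrow> abeq \<delta> r s (Add D (Smul (-1) D)) (Zer r s)"
| ab_smul_add: "wt D r s \<Longrightarrow> wt E r s \<Longrightarrow>
     abeq \<delta> r s (Smul c (Add D E)) (Add (Smul c D) (Smul c E))"
| ab_add_smul: "wt D r s \<Longrightarrow> abeq \<delta> r s (Smul (c + c') D) (Add (Smul c D) (Smul c' D))"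
| ab_smul_smul: "wt D r s \<Longrightarrow> abeq \<delta> r s (Smul (c * c') D) (Smul c (Smul c' D))"
| ab_smul_one: "wt D r s \<Longrightarrow> abeq \<delta> r s (Smul 1 D) D"
| ab_comp_assoc: "wt D t u \<Longrightarrow> wt E s t \<Longrightarrow> wt F r s \<Longrightarrow>
     abeq \<delta> r u (Comp (Comp D E) F) (Comp D (Comp E F))"
| ab_id_left: "wt D r s \<Longrightarrow> abeq \<delta> r s (Comp (aI s) D) D"
| ab_id_right: "wt D r s \<Longrightarrow> abeq \<delta> r s (Comp D (aI r)) D"
| ab_comp_add_left: "wt D s t \<Longrightarrow> wt D' s t \<Longrightarrow> wt E r s \<Longrightarrow>
     abeq \<delta> r t (Comp (Add D D') E) (Add (Comp D E) (Comp D' E))"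
| ab_comp_add_right: "wt D s t \<Longrightarrow> wt E r s \<Longrightarrow> wt E' r s \<Longrightarrow>
     abeq \<delta> r t (Comp D (Add E E')) (Add (Comp D E) (Comp D E'))"
| ab_comp_smul_left: "wt D s t \<Longrightarrow> wt E r s \<Longrightarrow>
     abeq \<delta> r t (Comp (Smul c D) E) (Smul c (Comp D E))"
| ab_comp_smul_right: "wt D s t \<Longrightarrow> wt E r s \<Longrightarrow>
     abeq \<delta> r t (Comp D (Smul c E)) (Smul c (Comp D E))"
| ab_tens_add: "wt D r s \<Longrightarrow> wt D' r s \<Longrightarrow>
     abeq \<delta> (r + k) (s + l) (Tens (Add D D') k l B) (Add (Tens D k l B) (Tens D' k l B))"
| ab_tens_smul: "wt D r s \<Longrightarrow>
     abeq \<delta> (r + k) (s + l) (Tens (Smul c D) k l B) (Smul c (Tens D k l B))"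
| ab_tens_badd: "wt D r s \<Longrightarrow>
     abeq \<delta> (r + k) (s + l) (Tens D k l (\<lambda>d. B d + B' d)) (Add (Tens D k l B) (Tens D k l B'))"
| ab_tens_bsmul: "wt D r s \<Longrightarrow>
     abeq \<delta> (r + k) (s + l) (Tens D k l (\<lambda>d. c * B d)) (Smul c (Tens D k l B))"
| ab_tens_unit: "wt D r s \<Longrightarrow> abeq \<delta> r s (Tens D 0 0 (bbasis {})) D"
| ab_tens_assoc: "wt D r s \<Longrightarrow>
     abeq \<delta> (r + k + k') (s + l + l') (Tens (Tens D k l B) k' l' C)
       (Tens D (k + k') (l + l') (btens k l k' l' B C))"
| ab_interchange: "wt D s t \<Longrightarrow> wt E r s \<Longrightarrow>
     abeq \<delta> (r + k) (t + m) (Comp (Tens D l m B) (Tens E k l A))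
       (Tens (Comp D E) k m (bcomp \<delta> k l m B A))"
| ab_rel_i1: "abeq \<delta> k m (Comp (Tens Pole l m B) (Tens Pole k l A)) (Tens Pole k m (bcomp \<delta> k l m B A))"
| ab_rel_i2: "abeq \<delta> (1 + k) (1 + m) (Comp (Tens HH l m B) (Tens (aI 1) k l A))
     (Tens HH k m (bcomp \<delta> k l m B A))"
| ab_rel_i3: "abeq \<delta> (1 + k) (1 + m) (Comp (Tens (aI 1) l m B) (Tens HH k l A))
     (Tens HH k m (bcomp \<delta> k l m B A))"
| ab_rel_ii: "abeq \<delta> 2 2 (Comp aH01 (Add aH02 (aH12 \<delta>))) (Comp (Add aH02 (aH12 \<delta>)) aH01)"
| ab_rel_iii: "abeq \<delta> 1 1 (atransp HH) (Smul (-1) HH)"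

definition apow :: "'k::comm_ring_1 abt \<Rightarrow> nat \<Rightarrow> 'k abt" where
  "apow D n = ((Comp D) ^^ n) (aI 1)"

definition aPi :: "'k::comm_ring_1 abt" where "aPi = Tens Pole 2 0 bcap"
definition aAmalg :: "'k::comm_ring_1 abt" where "aAmalg = Tens Pole 0 2 bcup"

definition aZ :: "nat \<Rightarrow> 'k::comm_ring_1 abt" where
  "aZ l = Comp aPi (Comp (Tens (apow HH l) 1 1 bI) aAmalg)"

definition aPhi :: "'k::comm_ring_1 \<Rightarrow> 'k abt" where
  "aPhi \<delta> = asub (Smul (1 - \<delta>) (aI 1)) HH"

definition aG :: "nat \<Rightarrow> 'k::comm_ring_1 abt" where
  "aG i = asub (Tens (aZ i) 1 1 bI) (apow HH i)"

definition asum :: "(nat \<Rightarrow> 'k abt) \<Rightarrow> nat list \<Rightarrow> 'k abt" where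
  "asum f xs = foldr (\<lambda>i acc. Add (f i) acc) xs (Zer 1 1)"

end

theory Submission
  imports Defs
begin

(* The transpose of D : 1 -> 1 is recovered from the bent morphism \<Pi> (D \<otimes> I) X\<^sub>0 : 2 -> 0 by
   straightening, and bending is a bijection End(1) \<cong> Hom(2,0). Write Y = H\<^sub>0\<^sub>2 + H\<^sub>1\<^sub>2.
   Relation (ii) says that H\<^sub>0\<^sub>1 commutes with Y, and relation (iii) together with
   \<Pi> X\<^sub>0 = \<Pi> and \<Pi> \<amalg> = \<delta> gives \<Pi> Y = \<Pi> (\<Phi> \<otimes> I). Hence bending intertwines right
   multiplication by \<Phi> with right multiplication by Y, for every morphism built from powers
   of H and the central elements Z\<^sub>i \<otimes> I. Expanding H\<^sub>0\<^sub>1 X\<^sub>0 = X\<^sub>0 Y - (1 - \<amalg>\<Pi>) inside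
   \<Pi> (H\<^sup>l\<^sup>+\<^sup>1 \<otimes> I) X\<^sub>0 then yields the recursion
   (H\<^sup>l\<^sup>+\<^sup>1)\<^sup>T = (H\<^sup>l)\<^sup>T \<Phi> + G\<^sub>l, whose solution is the first formula. The second formula is
   the mirror image (bending with cups), and subtracting the two gives the commutator identity,
   because \<Phi> commutes with H. *)

section \<open>Composites of concrete Brauer diagrams\<close>

lemma finite_bpts: "finite (bpts r s)" by (simp add: bpts_def)

lemma finite_bdiags: "finite (bdiags r s)"
proof -
  have "bdiags r s \<subseteq> Pow (bpts r s \<times> bpts r s)"
    by (auto simp: bdiags_def brauer_diag_def)
  then show ?thesis by (rule finite_subset) (simp add: finite_bpts)
qed

lemma sum_if_eq_conj:
  "finite S \<Longrightarrow> a \<in> S \<Longrightarrow> (\<Sum>x\<in>S. if x = a \<and> P x then f x else 0) = (if P a then f a else 0)"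
proof -
  assume "finite S" "a \<in> S"
  have "(\<lambda>x. if x = a \<and> P x then f x else 0) = (\<lambda>x. if x = a then (if P x then f x else 0) else 0)"
    by auto
  then show ?thesis using \<open>finite S\<close> \<open>a \<in> S\<close> by (simp only:) (simp add: sum.delta)
qed

lemma bcomp_bbasis:
  assumes "d1 \<in> bdiags r s" "d2 \<in> bdiags s t"
  shows "bcomp \<delta> r s t (bbasis d2) (bbasis d1) =
    (\<lambda>d. if diag_comp r t d2 d1 = d then \<delta> ^ diag_loops s d2 d1 else 0)"
proof
  fix d
  have "bcomp \<delta> r s t (bbasis d2) (bbasis d1) d =
     (\<Sum>d1'\<in>bdiags r s. \<Sum>d2'\<in>bdiags s t. if d2' = d2 \<and> (d1' = d1 \<and>
        diag_comp r t d2' d1' = d) then \<delta> ^ diag_loops s d2' d1' else 0)"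
    unfolding bcomp_def bbasis_def
    by (intro sum.cong refl) simp
  also have "\<dots> = (\<Sum>d1'\<in>bdiags r s.
      if d1' = d1 \<and> diag_comp r t d2 d1' = d then \<delta> ^ diag_loops s d2 d1' else 0)"
    by (simp only: sum_if_eq_conj[OF finite_bdiags assms(2)])
  also have "\<dots> = (if diag_comp r t d2 d1 = d then \<delta> ^ diag_loops s d2 d1 else 0)"
    using assms finite_bdiags by (simp add: sum_if_eq_conj)
  finally show "bcomp \<delta> r s t (bbasis d2) (bbasis d1) d =
    (if diag_comp r t d2 d1 = d then \<delta> ^ diag_loops s d2 d1 else 0)" .
qed

lemma bcomp_bbasis_loopfree:
  assumes "d1 \<in> bdiags r s" "d2 \<in> bdiags s t" "diag_comp r t d2 d1 = D" "diag_loops s d2 d1 = 0"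
  shows "bcomp \<delta> r s t (bbasis d2) (bbasis d1) = bbasis D"
  unfolding bcomp_bbasis[OF assms(1,2)] assms(3,4) by (rule ext) (simp add: bbasis_def)

lemma btens_bbasis:
  assumes "d1 \<in> bdiags r1 s1" "d2 \<in> bdiags r2 s2"
  shows "btens r1 s1 r2 s2 (bbasis d1) (bbasis d2) = bbasis (diag_tens r1 s1 d1 d2)"
proof
  fix d
  have "btens r1 s1 r2 s2 (bbasis d1) (bbasis d2) d =
     (\<Sum>d1'\<in>bdiags r1 s1. \<Sum>d2'\<in>bdiags r2 s2. if d2' = d2 \<and> (d1' = d1 \<and>
        diag_tens r1 s1 d1' d2' = d) then 1 else 0)"
    unfolding btens_def bbasis_def
    by (intro sum.cong refl) simp
  also have "\<dots> = (\<Sum>d1'\<in>bdiags r1 s1. if d1' = d1 \<and> diag_tens r1 s1 d1' d2 = d then 1 else 0)"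
    by (simp only: sum_if_eq_conj[OF finite_bdiags assms(2)])
  also have "\<dots> = bbasis (diag_tens r1 s1 d1 d2) d"
    using assms finite_bdiags by (auto simp: sum_if_eq_conj bbasis_def)
  finally show "btens r1 s1 r2 s2 (bbasis d1) (bbasis d2) d = bbasis (diag_tens r1 s1 d1 d2) d" .
qed

text \<open>To compute a composite of two concrete diagrams, one guesses the connected components of
  the glued graph, each given as a path listed in \<open>cs\<close>; a point is then labelled by the first
  point of the path through it.\<close>

definition comp_rep :: "'a list list \<Rightarrow> 'a \<Rightarrow> 'a" where
  "comp_rep cs a = (case find (\<lambda>c. a \<in> set c) cs of Some c \<Rightarrow> hd c | None \<Rightarrow> a)"

lemma successively_rtrancl:
  "successively (\<lambda>x y. (x, y) \<in> R) (x # xs) \<Longrightarrow> y \<in> set (x # xs) \<Longrightarrow> (x, y) \<in> R\<^sup>*"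
proof (induction xs arbitrary: x)
  case Nil then show ?case by simp
next
  case (Cons z zs)
  then show ?case
    by (auto intro: converse_rtrancl_into_rtrancl)
qed

lemma rtrancl_comp_rep:
  assumes "sym R" "\<forall>c\<in>set cs. c \<noteq> [] \<and> successively (\<lambda>x y. (x, y) \<in> R) c"
  shows "(a, comp_rep cs a) \<in> R\<^sup>*"
proof (cases "find (\<lambda>c. a \<in> set c) cs")
  case None then show ?thesis by (simp add: comp_rep_def)
next
  case (Some c)
  then have c: "c \<in> set cs" "a \<in> set c"
    by (auto simp: find_Some_iff)
  then obtain x xs where cx: "c = x # xs" using assms(2) by (meson list.exhaust)
  with c assms have "(x, a) \<in> R\<^sup>*" by (auto intro: successively_rtrancl)
  then have "(a, x) \<in> R\<^sup>*"
    using sym_rtrancl[OF assms(1)] by (rule symD[rotated])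
  then show ?thesis using Some cx by (simp add: comp_rep_def)
qed

lemma rtrancl_eq_same_comp_rep:
  assumes "sym R" "\<forall>c\<in>set cs. c \<noteq> [] \<and> successively (\<lambda>x y. (x, y) \<in> R) c"
    "\<forall>(a, b)\<in>R. comp_rep cs a = comp_rep cs b"
  shows "R\<^sup>* = {(a, b). comp_rep cs a = comp_rep cs b}"
proof
  show "R\<^sup>* \<subseteq> {(a, b). comp_rep cs a = comp_rep cs b}"
  proof clarify
    fix a b assume "(a, b) \<in> R\<^sup>*"
    then show "comp_rep cs a = comp_rep cs b"
      by (induction rule: rtrancl_induct) (use assms(3) in auto)
  qed
next
  show "{(a, b). comp_rep cs a = comp_rep cs b} \<subseteq> R\<^sup>*"
  proof clarify
    fix a b assume e: "comp_rep cs a = comp_rep cs b"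
    have 1: "(a, comp_rep cs a) \<in> R\<^sup>*" by (rule rtrancl_comp_rep[OF assms(1,2)])
    have "(b, comp_rep cs b) \<in> R\<^sup>*" by (rule rtrancl_comp_rep[OF assms(1,2)])
    then have 2: "(comp_rep cs b, b) \<in> R\<^sup>*"
      using sym_rtrancl[OF assms(1)] by (rule symD[rotated])
    show "(a, b) \<in> R\<^sup>*" using rtrancl_trans[OF 1[unfolded e] 2] .
  qed
qed

lemma sym_map_prod_image: "sym d \<Longrightarrow> sym (map_prod f f ` d)"
  by (auto simp: sym_def)

lemma glue_rel_eq_same_comp_rep:
  assumes "d1 \<in> bdiags r s" "d2 \<in> bdiags s t"
    and "\<forall>c\<in>set cs. c \<noteq> [] \<and> successively (\<lambda>x y. (x, y) \<in>
           map_prod lift_lo lift_lo ` d1 \<union> map_prod lift_hi lift_hi ` d2) c"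
    and "\<forall>(a, b)\<in>map_prod lift_lo lift_lo ` d1 \<union> map_prod lift_hi lift_hi ` d2.
           comp_rep cs a = comp_rep cs b"
  shows "glue_rel d2 d1 = {(a, b). comp_rep cs a = comp_rep cs b}"
proof -
  have "sym d1" "sym d2" using assms(1,2) by (auto simp: bdiags_def brauer_diag_def)
  then have "sym (map_prod lift_lo lift_lo ` d1 \<union> map_prod lift_hi lift_hi ` d2)"
    by (intro sym_Un sym_map_prod_image)
  then show ?thesis unfolding glue_rel_def using assms(3,4) by (rule rtrancl_eq_same_comp_rep)
qed

lemma diag_loops_eq_0:
  assumes g: "glue_rel d2 d1 = {(a, b). comp_rep cs a = comp_rep cs b}"
    and h: "\<forall>j<s. fst (comp_rep cs (1, j)) \<noteq> 1 \<and> comp_rep cs (comp_rep cs (1, j)) = comp_rep cs (1, j)"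
  shows "diag_loops s d2 d1 = 0"
proof -
  have no_loop: "\<not> glue_rel d2 d1 `` {(1, j)} \<subseteq> {(1, j') | j'. j' < s}" if j: "j < s" for j
  proof
    assume sub: "glue_rel d2 d1 `` {(1, j)} \<subseteq> {(1, j') | j'. j' < s}"
    have "comp_rep cs (comp_rep cs (1, j)) = comp_rep cs (1, j)" using h j by blast
    then have "comp_rep cs (1, j) \<in> glue_rel d2 d1 `` {(1, j)}" unfolding g by simp
    with sub have "fst (comp_rep cs (1, j)) = 1" by auto
    with h j show False by blast
  qed
  have "{glue_rel d2 d1 `` {(1, j)} | j. j < s
      \<and> glue_rel d2 d1 `` {(1, j)} \<subseteq> {(1, j') | j'. j' < s}} = {}"
    using no_loop by (simp only: Collect_empty_eq) blast
  then show ?thesis unfolding diag_loops_def by (simp only: card.empty)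
qed

lemma diag_comp_eq_filter:
  assumes "glue_rel d2 d1 = {(a, b). comp_rep cs a = comp_rep cs b}"
  shows "diag_comp r t d2 d1 =
    set (filter (\<lambda>(p, q). p \<noteq> q \<and> comp_rep cs (lift_ext p) = comp_rep cs (lift_ext q))
      (List.product (map Inl [0..<r] @ map Inr [0..<t]) (map Inl [0..<r] @ map Inr [0..<t])))"
proof -
  have "bpts r t = set (map Inl [0..<r] @ map Inr [0..<t])"
    by (auto simp: bpts_def)
  then show ?thesis
    unfolding diag_comp_def assms by auto
qed

lemma bcomp_bbasis_by_components:
  assumes "d1 \<in> bdiags r s" "d2 \<in> bdiags s t"
    and "\<forall>c\<in>set cs. c \<noteq> [] \<and> successively (\<lambda>x y. (x, y) \<in>
           map_prod lift_lo lift_lo ` d1 \<union> map_prod lift_hi lift_hi ` d2) c"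
    and "\<forall>(a, b)\<in>map_prod lift_lo lift_lo ` d1 \<union> map_prod lift_hi lift_hi ` d2.
           comp_rep cs a = comp_rep cs b"
    and "set (filter (\<lambda>(p, q). p \<noteq> q \<and> comp_rep cs (lift_ext p) = comp_rep cs (lift_ext q))
     (List.product (map Inl [0..<r] @ map Inr [0..<t]) (map Inl [0..<r] @ map Inr [0..<t]))) = D"
    and "\<forall>j<s. fst (comp_rep cs (1, j)) \<noteq> 1 \<and> comp_rep cs (comp_rep cs (1, j)) = comp_rep cs (1, j)"
  shows "bcomp \<delta> r s t (bbasis d2) (bbasis d1) = bbasis D"
proof -
  have g: "glue_rel d2 d1 = {(a, b). comp_rep cs a = comp_rep cs b}"
    using glue_rel_eq_same_comp_rep[OF assms(1-4)] .
  show ?thesis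
    by (rule bcomp_bbasis_loopfree[OF assms(1,2)])
      (use diag_comp_eq_filter[OF g] assms(5) diag_loops_eq_0[OF g assms(6)] in auto)
qed

definition "cap_I_d = {(Inl 0, Inl 1), (Inl 1, Inl 0), (Inl 2, Inr 0), (Inr 0, Inl 2)}"
definition "cup_I_d = {(Inr 0, Inr 1), (Inr 1, Inr 0), (Inl 0, Inr 2), (Inr 2, Inl 0)}"
definition "I_X_d = {(Inl 0, Inr 0), (Inr 0, Inl 0), (Inl 1, Inr 2), (Inr 2, Inl 1), (Inl 2, Inr 1),
  (Inr 1, Inl 2)}"
definition "X_I_d = {(Inl 0, Inr 1), (Inr 1, Inl 0), (Inl 1, Inr 0), (Inr 0, Inl 1), (Inl 2, Inr 2),
  (Inr 2, Inl 2)}"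
definition "I_cup_d = {(Inl 0, Inr 0), (Inr 0, Inl 0), (Inr 1, Inr 2), (Inr 2, Inr 1)}"
definition "I_cap_d = {(Inl 0, Inr 0), (Inr 0, Inl 0), (Inl 1, Inl 2), (Inl 2, Inl 1)}"
definition "cup_wide_d = {(Inl 0, Inr 1), (Inr 1, Inl 0), (Inr 0, Inr 2), (Inr 2, Inr 0)}"
definition "cap_wide_d = {(Inl 0, Inl 2), (Inl 2, Inl 0), (Inl 1, Inr 0), (Inr 0, Inl 1)}"
definition "I_cup_I_d = {(Inl 0, Inr 0), (Inr 0, Inl 0), (Inr 1, Inr 2), (Inr 2, Inr 1), (Inl 1, Inr 3),
  (Inr 3, Inl 1)}"
definition "I2_cap_d = {(Inl 0, Inr 0), (Inr 0, Inl 0), (Inl 1, Inr 1), (Inr 1, Inl 1), (Inl 2, Inl 3),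
  (Inl 3, Inl 2)}"
definition "I_cap_I_d = {(Inl 0, Inr 0), (Inr 0, Inl 0), (Inl 1, Inl 2), (Inl 2, Inl 1), (Inl 3, Inr 1),
  (Inr 1, Inl 3)}"
definition "I2_cup_d = {(Inl 0, Inr 0), (Inr 0, Inl 0), (Inl 1, Inr 1), (Inr 1, Inl 1), (Inr 2, Inr 3),
  (Inr 3, Inr 2)}"

lemma idd_simps: "idd 0 = {}" "idd (Suc n) = insert (Inl n, Inr n) (insert (Inr n, Inl n) (idd n))"
  unfolding idd_def by auto

lemma idd_1: "idd 1 = {(Inl 0, Inr 0), (Inr 0, Inl 0)}" by (auto simp: idd_def)
lemma idd_2: "idd 2 = {(Inl 0, Inr 0), (Inr 0, Inl 0), (Inl 1, Inr 1), (Inr 1, Inl 1)}"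
  by (auto simp: idd_def less_Suc_eq numeral_eq_Suc)

lemmas diagram_defs = cap_I_d_def cup_I_d_def I_X_d_def X_I_d_def I_cup_d_def I_cap_d_def
  cup_wide_d_def cap_wide_d_def I_cup_I_d_def I2_cap_d_def I_cap_I_d_def I2_cup_d_def
  crossd_def capd_def cupd_def idd_1 idd_2

lemma basic_bdiags:
  "{} \<in> bdiags 0 0" "idd 1 \<in> bdiags 1 1" "idd 2 \<in> bdiags 2 2" "crossd \<in> bdiags 2 2"
  "capd \<in> bdiags 2 0" "cupd \<in> bdiags 0 2" "cap_I_d \<in> bdiags 3 1" "cup_I_d \<in> bdiags 1 3"
  "I_X_d \<in> bdiags 3 3" "X_I_d \<in> bdiags 3 3" "I_cup_d \<in> bdiags 1 3" "I_cap_d \<in> bdiags 3 1"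
  "cup_wide_d \<in> bdiags 1 3" "cap_wide_d \<in> bdiags 3 1" "I_cup_I_d \<in> bdiags 2 4"
  "I2_cap_d \<in> bdiags 4 2" "I_cap_I_d \<in> bdiags 4 2" "I2_cup_d \<in> bdiags 2 4"
  by (unfold bdiags_def brauer_diag_def bpts_def sym_def diagram_defs,
      auto simp: lessThan_Suc numeral_eq_Suc)

lemma diag_tens_basic:
  "diag_tens 1 1 (idd 1) (idd 1) = idd 2"
  "diag_tens 2 0 capd (idd 1) = cap_I_d"
  "diag_tens 0 2 cupd (idd 1) = cup_I_d"
  "diag_tens 1 1 (idd 1) crossd = I_X_d"
  "diag_tens 2 2 crossd (idd 1) = X_I_d"
  "diag_tens 1 1 (idd 1) cupd = I_cup_d"
  "diag_tens 1 1 (idd 1) capd = I_cap_d"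
  "diag_tens 1 3 I_cup_d (idd 1) = I_cup_I_d"
  "diag_tens 2 2 (idd 2) capd = I2_cap_d"
  "diag_tens 3 1 I_cap_d (idd 1) = I_cap_I_d"
  "diag_tens 2 2 (idd 2) cupd = I2_cup_d"
  by (unfold diag_tens_def diagram_defs; auto simp: bshift_def)+

lemma btens_basic:
  "btens 1 1 1 1 bI bI = bbasis (idd 2)"
  "btens 2 0 1 1 bcap bI = bbasis cap_I_d"
  "btens 0 2 1 1 bcup bI = bbasis cup_I_d"
  "btens 1 1 2 2 bI bX = bbasis I_X_d"
  "btens 2 2 1 1 bX bI = bbasis X_I_d"
  "btens 1 1 0 2 bI bcup = bbasis I_cup_d"
  "btens 1 1 2 0 bI bcap = bbasis I_cap_d"
  "btens 1 3 1 1 (bbasis I_cup_d) bI = bbasis I_cup_I_d"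
  "btens 2 2 2 0 (bbasis (idd 2)) bcap = bbasis I2_cap_d"
  "btens 3 1 1 1 (bbasis I_cap_d) bI = bbasis I_cap_I_d"
  "btens 2 2 0 2 (bbasis (idd 2)) bcup = bbasis I2_cup_d"
  unfolding bI_def bX_def bcap_def bcup_def
  by (simp_all only: btens_bbasis basic_bdiags diag_tens_basic)

lemmas glue_calc_simps = diagram_defs idd_simps lift_lo_def lift_hi_def lift_ext_def comp_rep_def
  upt_rec numeral_eq_Suc less_Suc_eq

lemma bcomp_X_X: "bcomp \<delta> 2 2 2 bX bX = bbasis (idd 2)"
  unfolding bX_def
  by (rule bcomp_bbasis_by_components[where cs = "[[(0,0),(1,1),(2,0)],[(0,1),(1,0),(2,1)]]"],
      (rule basic_bdiags)+,
      simp_all add: glue_calc_simps, blast?)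

lemma bcomp_cap_X: "bcomp \<delta> 2 2 0 bcap bX = bcap"
  unfolding bX_def bcap_def
  by (rule bcomp_bbasis_by_components[where cs = "[[(0,0),(1,1),(1,0),(0,1)]]"], (rule basic_bdiags)+,
      simp_all add: glue_calc_simps, blast?)

lemma bcomp_X_cup: "bcomp \<delta> 0 2 2 bX bcup = bcup"
  unfolding bX_def bcup_def
  by (rule bcomp_bbasis_by_components[where cs = "[[(2,1),(1,0),(1,1),(2,0)]]"], (rule basic_bdiags)+,
      simp_all add: glue_calc_simps, blast?)

lemma bcomp_I_I: "bcomp \<delta> 1 1 1 bI bI = bI"
  unfolding bI_def
  by (rule bcomp_bbasis_by_components[where cs = "[[(0,0),(1,0),(2,0)]]"], (rule basic_bdiags)+,
      simp_all add: glue_calc_simps, blast?)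

lemma bcomp_I2_X: "bcomp \<delta> 2 2 2 (bbasis (idd 2)) bX = bX"
  unfolding bX_def
  by (rule bcomp_bbasis_by_components[where cs = "[[(0,0),(1,1),(2,1)],[(0,1),(1,0),(2,0)]]"],
      (rule basic_bdiags)+,
      simp_all add: glue_calc_simps, blast?)

lemma bcomp_X_I2: "bcomp \<delta> 2 2 2 bX (bbasis (idd 2)) = bX"
  unfolding bX_def
  by (rule bcomp_bbasis_by_components[where cs = "[[(0,0),(1,0),(2,1)],[(0,1),(1,1),(2,0)]]"],
      (rule basic_bdiags)+,
      simp_all add: glue_calc_simps, blast?)

lemma bcomp_X_I_I_cup: "bcomp \<delta> 1 3 3 (bbasis X_I_d) (bbasis I_cup_d) = bbasis cup_wide_d"
  by (rule bcomp_bbasis_by_components[where cs = "[[(0,0),(1,0),(2,1)],[(2,0),(1,1),(1,2),(2,2)]]"],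
      (rule basic_bdiags)+,
      simp_all add: glue_calc_simps, blast?)

lemma bcomp_I_X_cup_I: "bcomp \<delta> 1 3 3 (bbasis I_X_d) (bbasis cup_I_d) = bbasis cup_wide_d"
  by (rule bcomp_bbasis_by_components[where cs = "[[(0,0),(1,2),(2,1)],[(2,0),(1,0),(1,1),(2,2)]]"],
      (rule basic_bdiags)+,
      simp_all add: glue_calc_simps, blast?)

lemma bcomp_I_cap_X_I: "bcomp \<delta> 3 3 1 (bbasis I_cap_d) (bbasis X_I_d) = bbasis cap_wide_d"
  by (rule bcomp_bbasis_by_components[where cs = "[[(0,1),(1,0),(2,0)],[(0,0),(1,1),(1,2),(0,2)]]"],
      (rule basic_bdiags)+,
      simp_all add: glue_calc_simps, blast?)

lemma bcomp_cap_I_I_X: "bcomp \<delta> 3 3 1 (bbasis cap_I_d) (bbasis I_X_d) = bbasis cap_wide_d"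
  by (rule bcomp_bbasis_by_components[where cs = "[[(0,0),(1,0),(1,1),(0,2)],[(0,1),(1,2),(2,0)]]"],
      (rule basic_bdiags)+,
      simp_all add: glue_calc_simps, blast?)

lemma bcomp_cap_I_I_cup: "bcomp \<delta> 1 3 1 (bbasis cap_I_d) (bbasis I_cup_d) = bI"
  unfolding bI_def
  by (rule bcomp_bbasis_by_components[where cs = "[[(0,0),(1,0),(1,1),(1,2),(2,0)]]"],
      (rule basic_bdiags)+,
      simp_all add: glue_calc_simps, blast?)

lemma bcomp_I_cap_cup_I: "bcomp \<delta> 1 3 1 (bbasis I_cap_d) (bbasis cup_I_d) = bI"
  unfolding bI_def
  by (rule bcomp_bbasis_by_components[where cs = "[[(0,0),(1,2),(1,1),(1,0),(2,0)]]"],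
      (rule basic_bdiags)+,
      simp_all add: glue_calc_simps, blast?)

lemma bcomp_cap_I2: "bcomp \<delta> 2 2 0 bcap (bbasis (idd 2)) = bcap"
  unfolding bcap_def
  by (rule bcomp_bbasis_by_components[where cs = "[[(0,0),(1,0),(1,1),(0,1)]]"], (rule basic_bdiags)+,
      simp_all add: glue_calc_simps, blast?)

lemma bcomp_I2_cup: "bcomp \<delta> 0 2 2 (bbasis (idd 2)) bcup = bcup"
  unfolding bcup_def
  by (rule bcomp_bbasis_by_components[where cs = "[[(2,0),(1,0),(1,1),(2,1)]]"], (rule basic_bdiags)+,
      simp_all add: glue_calc_simps, blast?)

lemma bcomp_empty_cap: "bcomp \<delta> 2 0 0 (bbasis {}) bcap = bcap"
  unfolding bcap_def
  by (rule bcomp_bbasis_by_components[where cs = "[[(0,0),(0,1)]]"], (rule basic_bdiags)+,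
      simp_all add: glue_calc_simps, blast?)

lemma bcomp_cup_empty: "bcomp \<delta> 0 0 2 bcup (bbasis {}) = bcup"
  unfolding bcup_def
  by (rule bcomp_bbasis_by_components[where cs = "[[(2,0),(2,1)]]"], (rule basic_bdiags)+,
      simp_all add: glue_calc_simps, blast?)

lemma bcomp_I2_cap_I_cup_I:
  "bcomp \<delta> 2 4 2 (bbasis I2_cap_d) (bbasis I_cup_I_d) = bbasis (idd 2)"
  by (rule bcomp_bbasis_by_components[where cs =
      "[[(0,0),(1,0),(2,0)],[(0,1),(1,3),(1,2),(1,1),(2,1)]]"], (rule basic_bdiags)+,
      simp_all add: glue_calc_simps, blast?)

lemma bcomp_I_cap_I_I2_cup:
  "bcomp \<delta> 2 4 2 (bbasis I_cap_I_d) (bbasis I2_cup_d) = bbasis (idd 2)"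
  by (rule bcomp_bbasis_by_components[where cs =
      "[[(0,0),(1,0),(2,0)],[(0,1),(1,1),(1,2),(1,3),(2,1)]]"], (rule basic_bdiags)+,
      simp_all add: glue_calc_simps, blast?)

text \<open>The only composite with a closed loop.\<close>

lemma bcomp_cap_cup: "bcomp \<delta> 0 2 0 bcap bcup = (\<lambda>d. \<delta> * bbasis {} d)"
proof -
  define cs where "cs = [[(1::nat, 0::nat), (1, 1)]]"
  have g: "glue_rel capd cupd = {(a, b). comp_rep cs a = comp_rep cs b}"
    by (rule glue_rel_eq_same_comp_rep[OF basic_bdiags(6,5)])
      (simp_all add: cs_def capd_def cupd_def lift_lo_def lift_hi_def comp_rep_def)
  have "comp_rep cs b = (if b = (1, 0) \<or> b = (1, 1) then (1, 0) else b)" for b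
    by (auto simp: cs_def comp_rep_def)
  then have loop: "glue_rel capd cupd `` {(1, j)} = {(1, 0), (1, 1)}" if "j < 2" for j
    using that unfolding g by (auto simp: less_Suc_eq numeral_eq_Suc)
  have "{glue_rel capd cupd `` {(1, j)} | j. j < 2
      \<and> glue_rel capd cupd `` {(1, j)} \<subseteq> {(1, j') | j'. j' < 2}} =
      {u. \<exists>j. u = {(1, 0), (1, 1)} \<and> j < (2::nat)
        \<and> {(1::nat, 0::nat), (1, 1)} \<subseteq> {(1, j') | j'. j' < (2::nat)}}"
    by (intro Collect_cong ex_cong1, case_tac "j < 2") (simp only: loop, auto)
  also have "\<dots> = {{(1, 0), (1, 1)}}"
    by (auto intro: exI[of _ "0::nat"])
  finally have "{glue_rel capd cupd `` {(1, j)} | j. j < 2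
      \<and> glue_rel capd cupd `` {(1, j)} \<subseteq> {(1, j') | j'. j' < 2}} = {{(1, 0), (1, 1)}}" .
  then have "diag_loops 2 capd cupd = 1" unfolding diag_loops_def by simp
  moreover have "diag_comp 0 0 capd cupd = {}" by (simp add: diag_comp_def bpts_def)
  ultimately show ?thesis unfolding bcap_def bcup_def bcomp_bbasis[OF basic_bdiags(6,5)]
    by (auto simp: bbasis_def)
qed

text \<open>Numerals stay numerals, so that the diagram computations above apply syntactically.\<close>

declare One_nat_def[simp del]
declare add_numeral_special[simp]

lemmas bcomp_basic = bcomp_X_X bcomp_cap_X bcomp_X_cup bcomp_cap_cup bcomp_I_I bcomp_I2_X bcomp_X_I2
  bcomp_cap_I2 bcomp_I2_cup bcomp_empty_cap bcomp_cup_empty bcomp_cap_I_I_cup bcomp_I_cap_cup_I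

declare ab_trans[trans]

section \<open>Typing and \<open>K\<close>-linear normal forms\<close>

text \<open>\<open>atype D = Some (r, s)\<close> decides \<open>wt D r s\<close>, so that simp discharges the typing side
  conditions of the rules of \<open>abeq\<close>.\<close>

fun atype :: "'k abt \<Rightarrow> (nat \<times> nat) option" where
  "atype Pole = Some (0, 0)"
| "atype HH = Some (1, 1)"
| "atype (Comp D E) = (case atype D of None \<Rightarrow> None | Some (s, t) \<Rightarrow>
     (case atype E of None \<Rightarrow> None | Some (r, s') \<Rightarrow> if s = s' then Some (r, t) else None))"
| "atype (Tens D k l B) = (case atype D of None \<Rightarrow> None | Some (r, s) \<Rightarrow> Some (r + k, s + l))"
| "atype (Zer r s) = Some (r, s)"
| "atype (Add D E) = (if atype D = atype E then atype D else None)"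
| "atype (Smul c D) = atype D"

lemma wt_iff_atype: "wt D r s \<longleftrightarrow> atype D = Some (r, s)"
proof
  assume "wt D r s" then show "atype D = Some (r, s)"
    by (induction rule: wt.induct) auto
next
  assume "atype D = Some (r, s)" then show "wt D r s"
  proof (induction D arbitrary: r s)
    case Pole then show ?case by (auto intro: wt.intros)
  next
    case HH then have "r = 1" "s = 1" by simp_all
    then show ?case using wt.intros(2) by simp
  next
    case (Comp D E)
    then obtain m where "atype D = Some (m, s)" "atype E = Some (r, m)"
      by (auto split: option.splits if_splits)
    then show ?case using Comp.IH wt.intros(3) by blast
  next
    case (Tens D k l B)
    then show ?case by (auto intro: wt.intros split: option.splits)
  next
    case (Zer r s) then show ?case by (auto intro: wt.intros)
  next
    case (Add D E) then show ?case by (auto intro: wt.intros split: if_splits)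
  next
    case (Smul c D) then show ?case by (auto intro: wt.intros)
  qed
qed

lemma atype_aI[simp]: "atype (aI r) = Some (r, r)" by (simp add: aI_def)
lemma atype_asub[simp]: "atype (asub D E) = atype (Add D E)" by (simp add: asub_def)
lemma atype_aX0[simp]: "atype aX0 = Some (2, 2)" by (simp add: aX0_def)
lemma atype_aH01[simp]: "atype aH01 = Some (2, 2)" by (simp add: aH01_def)
lemma atype_aH02[simp]: "atype aH02 = Some (2, 2)" by (simp add: aH02_def)
lemma atype_aH12[simp]: "atype (aH12 \<delta>) = Some (2, 2)" by (simp add: aH12_def)
lemma atype_aPi[simp]: "atype aPi = Some (2, 0)" by (simp add: aPi_def)
lemma atype_aAmalg[simp]: "atype aAmalg = Some (0, 2)" by (simp add: aAmalg_def)
lemma atype_atransp[simp]: "atype D = Some (1, 1) \<Longrightarrow> atype (atransp D) = Some (1, 1)"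
  by (simp add: atransp_def)
lemma atype_apow[simp]: "atype D = Some (1, 1) \<Longrightarrow> atype (apow D n) = Some (1, 1)"
  by (induction n) (simp_all add: apow_def)
lemma atype_aPhi[simp]: "atype (aPhi \<delta>) = Some (1, 1)" by (simp add: aPhi_def)
lemma atype_aZ[simp]: "atype (aZ n) = Some (0, 0)" by (simp add: aZ_def)
lemma atype_aG[simp]: "atype (aG n) = Some (1, 1)" by (simp add: aG_def)
lemma atype_asum[simp]: "(\<forall>i\<in>set xs. atype (f i) = Some (1, 1)) \<Longrightarrow> atype (asum f xs) = Some (1, 1)"
  by (induction xs) (simp_all add: asum_def)

lemma abeq_refl: "atype D = Some (r, s) \<Longrightarrow> abeq \<delta> r s D D"
  by (rule ab_refl) (simp add: wt_iff_atype)

lemma comp_congL: "abeq \<delta> s t D D' \<Longrightarrow> atype E = Some (r, s) \<Longrightarrow> abeq \<delta> r t (Comp D E) (Comp D' E)"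
  by (rule ab_comp_cong) (auto intro: abeq_refl)
lemma comp_congR: "abeq \<delta> r s E E' \<Longrightarrow> atype D = Some (s, t) \<Longrightarrow> abeq \<delta> r t (Comp D E) (Comp D E')"
  by (rule ab_comp_cong) (auto intro: abeq_refl)
lemma add_congL: "abeq \<delta> r s D D' \<Longrightarrow> atype E = Some (r, s) \<Longrightarrow> abeq \<delta> r s (Add D E) (Add D' E)"
  by (rule ab_add_cong) (auto intro: abeq_refl)
lemma add_congR: "abeq \<delta> r s E E' \<Longrightarrow> atype D = Some (r, s) \<Longrightarrow> abeq \<delta> r s (Add D E) (Add D E')"
  by (rule ab_add_cong) (auto intro: abeq_refl)
lemma asub_cong: "abeq \<delta> r s D D' \<Longrightarrow> abeq \<delta> r s E E' \<Longrightarrow> abeq \<delta> r s (asub D E) (asub D' E')"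
  unfolding asub_def by (intro ab_add_cong ab_smul_cong)
lemma tens_cong: "abeq \<delta> r s D D' \<Longrightarrow> r' = r + k \<Longrightarrow> s' = s + l \<Longrightarrow>
  abeq \<delta> r' s' (Tens D k l B) (Tens D' k l B)"
  using ab_tens_cong[of \<delta> r s D D' k l B B] by simp

lemma Add_Zer_right: "atype D = Some (r, s) \<Longrightarrow> abeq \<delta> r s (Add D (Zer r s)) D"
proof -
  assume t: "atype D = Some (r, s)"
  have "abeq \<delta> r s (Add D (Zer r s)) (Add (Zer r s) D)"
    by (rule ab_add_comm) (simp_all add: t wt_iff_atype)
  also have "abeq \<delta> r s \<dots> D" by (rule ab_add_zero) (simp add: t wt_iff_atype)
  finally show ?thesis .
qed

lemma Smul_0: "atype D = Some (r, s) \<Longrightarrow> abeq \<delta> r s (Smul 0 D) (Zer r s)"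
proof -
  assume t: "atype D = Some (r, s)"
  let ?Z = "Smul 0 D"
  have tz: "atype ?Z = Some (r, s)" using t by simp
  have zz: "abeq \<delta> r s ?Z (Add ?Z ?Z)"
    using ab_add_smul[of D r s \<delta> 0 0] t by (simp add: wt_iff_atype)
  have "abeq \<delta> r s (Zer r s) (Add ?Z (Smul (-1) ?Z))"
    by (rule ab_sym, rule ab_add_neg) (simp add: t wt_iff_atype)
  also have "abeq \<delta> r s \<dots> (Add (Add ?Z ?Z) (Smul (-1) ?Z))" by (rule add_congL[OF zz]) (simp add: t)
  also have "abeq \<delta> r s \<dots> (Add ?Z (Add ?Z (Smul (-1) ?Z)))"
    by (rule ab_add_assoc) (simp_all add: t wt_iff_atype)
  also have "abeq \<delta> r s \<dots> (Add ?Z (Zer r s))"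
    by (rule add_congR, rule ab_add_neg) (simp_all add: t wt_iff_atype)
  also have "abeq \<delta> r s \<dots> ?Z" by (rule Add_Zer_right[OF tz])
  finally show ?thesis by (rule ab_sym)
qed

lemma Smul_Zer: "abeq \<delta> r s (Smul c (Zer r s)) (Zer r s)"
proof -
  have "abeq \<delta> r s (Smul c (Zer r s)) (Smul c (Smul 0 (Zer r s)))"
    by (rule ab_smul_cong, rule ab_sym, rule Smul_0) simp
  also have "abeq \<delta> r s \<dots> (Smul (c * 0) (Zer r s))"
    by (rule ab_sym, rule ab_smul_smul) (simp add: wt_iff_atype)
  also have "abeq \<delta> r s \<dots> (Zer r s)" using Smul_0[of "Zer r s" r s] by simp
  finally show ?thesis .
qed

lemma Add_left_commute: "atype A = Some (r, s) \<Longrightarrow> atype B = Some (r, s) \<Longrightarrow> atype C = Some (r, s) \<Longrightarrow>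
  abeq \<delta> r s (Add A (Add B C)) (Add B (Add A C))"
proof -
  assume t: "atype A = Some (r, s)" "atype B = Some (r, s)" "atype C = Some (r, s)"
  have "abeq \<delta> r s (Add A (Add B C)) (Add (Add A B) C)"
    by (rule ab_sym, rule ab_add_assoc) (simp_all add: t wt_iff_atype)
  also have "abeq \<delta> r s \<dots> (Add (Add B A) C)"
    by (rule add_congL, rule ab_add_comm) (simp_all add: t wt_iff_atype)
  also have "abeq \<delta> r s \<dots> (Add B (Add A C))" by (rule ab_add_assoc) (simp_all add: t wt_iff_atype)
  finally show ?thesis .
qed

lemma Add_Add_swap: "atype A = Some (r, s) \<Longrightarrow> atype B = Some (r, s) \<Longrightarrow> atype C = Some (r, s) \<Longrightarrow>
  atype D = Some (r, s) \<Longrightarrow>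
  abeq \<delta> r s (Add (Add A B) (Add C D)) (Add (Add A C) (Add B D))"
proof -
  assume t: "atype A = Some (r, s)" "atype B = Some (r, s)" "atype C = Some (r, s)" "atype D = Some
      (r, s)"
  have "abeq \<delta> r s (Add (Add A B) (Add C D)) (Add A (Add B (Add C D)))"
    by (rule ab_add_assoc) (simp_all add: t wt_iff_atype)
  also have "abeq \<delta> r s \<dots> (Add A (Add C (Add B D)))"
    by (rule add_congR, rule Add_left_commute) (simp_all add: t)
  also have "abeq \<delta> r s \<dots> (Add (Add A C) (Add B D))"
    by (rule ab_sym, rule ab_add_assoc) (simp_all add: t wt_iff_atype)
  finally show ?thesis .
qed

text \<open>Every identity that follows from the \<open>K\<close>-module axioms alone is settled by comparing
  formal coefficients, treating all expressions that are not sums or scalar multiples as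
  independent atoms (\<open>abeq_by_lin_coeff\<close>).\<close>

fun lin_coeff :: "'k::comm_ring_1 abt \<Rightarrow> 'k abt \<Rightarrow> 'k" where
  "lin_coeff (Add a b) = (\<lambda>y. lin_coeff a y + lin_coeff b y)"
| "lin_coeff (Smul c a) = (\<lambda>y. c * lin_coeff a y)"
| "lin_coeff (Zer r s) = (\<lambda>y. 0)"
| "lin_coeff Pole = (\<lambda>y. if y = Pole then 1 else 0)"
| "lin_coeff HH = (\<lambda>y. if y = HH then 1 else 0)"
| "lin_coeff (Comp a b) = (\<lambda>y. if y = Comp a b then 1 else 0)"
| "lin_coeff (Tens a k l B) = (\<lambda>y. if y = Tens a k l B then 1 else 0)"

fun lin_atoms :: "'k abt \<Rightarrow> 'k abt list" where
  "lin_atoms (Add a b) = lin_atoms a @ lin_atoms b"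
| "lin_atoms (Smul c a) = lin_atoms a"
| "lin_atoms (Zer r s) = []"
| "lin_atoms x = [x]"

definition lin_comb :: "nat \<Rightarrow> nat \<Rightarrow> 'k abt list \<Rightarrow> ('k abt \<Rightarrow> 'k) \<Rightarrow> 'k abt" where
  "lin_comb r s xs f = foldr (\<lambda>x acc. Add (Smul (f x) x) acc) xs (Zer r s)"

lemma lin_comb_simps: "lin_comb r s [] f = Zer r s" "lin_comb r s (x # xs) f = Add (Smul (f x) x)
  (lin_comb r s xs f)"
  by (simp_all add: lin_comb_def)

lemma atype_lin_comb: "\<forall>x\<in>set xs. atype x = Some (r, s) \<Longrightarrow> atype (lin_comb r s xs f) = Some (r, s)"
  by (induction xs) (simp_all add: lin_comb_simps)

lemma lin_comb_cong: "\<forall>x\<in>set xs. f x = g x \<Longrightarrow> lin_comb r s xs f = lin_comb r s xs g"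
  by (induction xs) (simp_all add: lin_comb_simps)

lemma lin_comb_zero: "\<forall>x\<in>set xs. atype x = Some (r, s) \<Longrightarrow> abeq \<delta> r s (lin_comb r s xs (\<lambda>y. 0)) (Zer r s)"
proof (induction xs)
  case Nil then show ?case by (simp add: lin_comb_simps abeq_refl)
next
  case (Cons x xs)
  then have tx: "atype x = Some (r, s)" and tc: "atype (lin_comb r s xs (\<lambda>y. 0)) = Some (r, s)"
    by (simp_all add: atype_lin_comb)
  have "abeq \<delta> r s (lin_comb r s (x # xs) (\<lambda>y. 0)) (Add (Zer r s) (lin_comb r s xs (\<lambda>y. 0)))"
    unfolding lin_comb_simps by (rule add_congL, rule Smul_0[OF tx]) (simp add: tc)
  also have "abeq \<delta> r s \<dots> (lin_comb r s xs (\<lambda>y. 0))" by (rule ab_add_zero) (simp add: tc wt_iff_atype)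
  also have "abeq \<delta> r s \<dots> (Zer r s)" using Cons by simp
  finally show ?case .
qed

lemma lin_comb_add: "\<forall>x\<in>set xs. atype x = Some (r, s) \<Longrightarrow>
  abeq \<delta> r s (lin_comb r s xs (\<lambda>y. f y + g y)) (Add (lin_comb r s xs f) (lin_comb r s xs g))"
proof (induction xs)
  case Nil then show ?case
    by (simp add: lin_comb_simps) (rule ab_sym, rule Add_Zer_right, simp)
next
  case (Cons x xs)
  then have tx: "atype x = Some (r, s)" and tc: "\<And>h. atype (lin_comb r s xs h) = Some (r, s)"
    by (simp_all add: atype_lin_comb)
  have "abeq \<delta> r s (lin_comb r s (x # xs) (\<lambda>y. f y + g y))
      (Add (Add (Smul (f x) x) (Smul (g x) x)) (Add (lin_comb r s xs f) (lin_comb r s xs g)))"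
    unfolding lin_comb_simps by (rule ab_add_cong, rule ab_add_smul) (use Cons tx wt_iff_atype in auto)
  also have "abeq \<delta> r s \<dots> (Add (Add (Smul (f x) x) (lin_comb r s xs f)) (Add (Smul (g x) x)
      (lin_comb r s xs g)))"
    by (rule Add_Add_swap) (simp_all add: tx tc)
  finally show ?case by (simp add: lin_comb_simps)
qed

lemma lin_comb_smul: "\<forall>x\<in>set xs. atype x = Some (r, s) \<Longrightarrow>
  abeq \<delta> r s (lin_comb r s xs (\<lambda>y. c * f y)) (Smul c (lin_comb r s xs f))"
proof (induction xs)
  case Nil then show ?case
    by (simp add: lin_comb_simps) (rule ab_sym, rule Smul_Zer)
next
  case (Cons x xs)
  then have tx: "atype x = Some (r, s)" and tc: "\<And>h. atype (lin_comb r s xs h) = Some (r, s)"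
    by (simp_all add: atype_lin_comb)
  have "abeq \<delta> r s (lin_comb r s (x # xs) (\<lambda>y. c * f y))
      (Add (Smul c (Smul (f x) x)) (Smul c (lin_comb r s xs f)))"
    unfolding lin_comb_simps by (rule ab_add_cong, rule ab_smul_smul) (use Cons tx wt_iff_atype in auto)
  also have "abeq \<delta> r s \<dots> (Smul c (lin_comb r s (x # xs) f))"
    unfolding lin_comb_simps by (rule ab_sym, rule ab_smul_add) (simp_all add: tx tc wt_iff_atype)
  finally show ?case .
qed

lemma lin_comb_indicator: "\<forall>x\<in>set xs. atype x = Some (r, s) \<Longrightarrow> distinct xs \<Longrightarrow> a \<in> set xs \<Longrightarrow>
  abeq \<delta> r s (lin_comb r s xs (\<lambda>y. if y = a then 1 else 0)) a"
proof (induction xs)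
  case Nil then show ?case by simp
next
  case (Cons x xs)
  then have tx: "atype x = Some (r, s)" and tc: "\<And>h. atype (lin_comb r s xs h) = Some (r, s)"
    and ta: "atype a = Some (r, s)" by (auto simp: atype_lin_comb)
  show ?case
  proof (cases "x = a")
    case True
    then have "a \<notin> set xs" using Cons by auto
    then have "lin_comb r s xs (\<lambda>y. if y = a then 1 else 0) = lin_comb r s xs (\<lambda>y. 0)"
      by (intro lin_comb_cong) auto
    then have "abeq \<delta> r s (lin_comb r s (x # xs) (\<lambda>y. if y = a then 1 else 0)) (Add (Smul 1 a)
        (Zer r s))"
      unfolding lin_comb_simps using True by (auto intro!: add_congR lin_comb_zero simp: Cons ta)
    also have "abeq \<delta> r s \<dots> (Smul 1 a)" by (rule Add_Zer_right) (simp add: ta)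
    also have "abeq \<delta> r s \<dots> a" by (rule ab_smul_one) (simp add: ta wt_iff_atype)
    finally show ?thesis .
  next
    case False
    then have "abeq \<delta> r s (lin_comb r s (x # xs) (\<lambda>y. if y = a then 1 else 0))
       (Add (Zer r s) (lin_comb r s xs (\<lambda>y. if y = a then 1 else 0)))"
      unfolding lin_comb_simps by (auto intro!: add_congL Smul_0 simp: tx tc)
    also have "abeq \<delta> r s \<dots> (lin_comb r s xs (\<lambda>y. if y = a then 1 else 0))"
      by (rule ab_add_zero) (simp add: tc wt_iff_atype)
    also have "abeq \<delta> r s \<dots> a" using Cons False by auto
    finally show ?thesis .
  qed
qed

lemma atype_lin_atoms: "atype a = Some (r, s) \<Longrightarrow> x \<in> set (lin_atoms a) \<Longrightarrow> atype x = Some (r, s)"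
proof (induction a arbitrary: r s)
  case (Add a b)
  then have "atype a = Some (r, s)" "atype b = Some (r, s)" by (auto split: if_splits)
  then show ?case using Add by auto
qed (auto split: if_splits)

lemma lin_comb_lin_coeff: "atype a = Some (r, s) \<Longrightarrow> set (lin_atoms a) \<subseteq> set xs \<Longrightarrow> distinct xs \<Longrightarrow>
  \<forall>x\<in>set xs. atype x = Some (r, s) \<Longrightarrow> abeq \<delta> r s a (lin_comb r s xs (lin_coeff a))"
proof (induction a arbitrary: r s)
  case (Add a b)
  then have "atype a = Some (r, s)" "atype b = Some (r, s)" by (auto split: if_splits)
  with Add have "abeq \<delta> r s (Add a b) (Add (lin_comb r s xs (lin_coeff a)) (lin_comb r s xs
      (lin_coeff b)))"
    by (intro ab_add_cong) auto
  also have "abeq \<delta> r s \<dots> (lin_comb r s xs (lin_coeff (Add a b)))"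
    using lin_comb_add[OF Add.prems(4), where f = "lin_coeff a" and g = "lin_coeff b"]
      by (simp add: ab_sym)
  finally show ?case .
next
  case (Smul c a)
  then have "abeq \<delta> r s (Smul c a) (Smul c (lin_comb r s xs (lin_coeff a)))" by (intro ab_smul_cong) auto
  also have "abeq \<delta> r s \<dots> (lin_comb r s xs (lin_coeff (Smul c a)))"
    using lin_comb_smul[OF Smul.prems(4), where c = c and f = "lin_coeff a"] by (simp add: ab_sym)
  finally show ?case .
next
  case (Zer r' s')
  then show ?case using lin_comb_zero[OF Zer.prems(4)] by (simp add: ab_sym)
next
  case Pole then show ?case using lin_comb_indicator[OF Pole.prems(4,3), of Pole] by (simp add: ab_sym)
next
  case HH then show ?case using lin_comb_indicator[OF HH.prems(4,3), of HH] by (simp add: ab_sym)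
next
  case (Comp a b) then show ?case using lin_comb_indicator[OF Comp.prems(4,3), of "Comp a b"]
    by (simp add: ab_sym)
next
  case (Tens a k l B) then show ?case using lin_comb_indicator[OF Tens.prems(4,3), of "Tens a k l
      B"] by (simp add: ab_sym)
qed

lemma abeq_by_lin_coeff: "atype a = Some (r, s) \<Longrightarrow> atype b = Some (r, s) \<Longrightarrow>
  lin_coeff a = lin_coeff b \<Longrightarrow> abeq \<delta> r s a b"
proof -
  assume ta: "atype a = Some (r, s)" and tb: "atype b = Some (r, s)" and l: "lin_coeff a = lin_coeff b"
  let ?xs = "remdups (lin_atoms a @ lin_atoms b)"
  have tx: "\<forall>x\<in>set ?xs. atype x = Some (r, s)"
  proof
    fix x assume "x \<in> set ?xs"
    then have "x \<in> set (lin_atoms a) \<or> x \<in> set (lin_atoms b)" by simp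
    then show "atype x = Some (r, s)" using atype_lin_atoms[OF ta] atype_lin_atoms[OF tb] by blast
  qed
  have s1: "set (lin_atoms a) \<subseteq> set ?xs" "set (lin_atoms b) \<subseteq> set ?xs" "distinct ?xs" by auto
  have "abeq \<delta> r s a (lin_comb r s ?xs (lin_coeff a))" by (rule lin_comb_lin_coeff[OF ta s1(1) s1(3) tx])
  also have "abeq \<delta> r s (lin_comb r s ?xs (lin_coeff a)) b" unfolding l
    by (rule ab_sym, rule lin_comb_lin_coeff[OF tb s1(2) s1(3) tx])
  finally show ?thesis .
qed

lemma aI_1: "aI 1 = Tens Pole 1 1 bI" by (simp add: aI_def bI_def)
lemma aI_2: "aI 2 = Tens Pole 2 2 (bbasis (idd 2))" by (simp add: aI_def)
lemma aI_0: "aI 0 = Tens Pole 0 0 (bbasis {})" by (simp add: aI_def idd_simps)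

lemma Pole_tens_comp: "bcomp \<delta> k l m B A = C \<Longrightarrow> abeq \<delta> k m (Comp (Tens Pole l m B) (Tens Pole k l A))
  (Tens Pole k m C)"
  using ab_rel_i1[of \<delta> k m l B A] by simp

lemma tens_comp_tens: "atype D = Some (s, t) \<Longrightarrow> atype E = Some (r, s) \<Longrightarrow> bcomp \<delta> k l m B A = C \<Longrightarrow>
  r' = r + k \<Longrightarrow> t' = t + m \<Longrightarrow>
  abeq \<delta> r' t' (Comp (Tens D l m B) (Tens E k l A)) (Tens (Comp D E) k m C)"
proof -
  assume a: "atype D = Some (s, t)" "atype E = Some
      (r, s)" "bcomp \<delta> k l m B A = C" "r' = r + k" "t' = t + m"
  have "abeq \<delta> (r + k) (t + m) (Comp (Tens D l m B) (Tens E k l A)) (Tens (Comp D E) k m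
      (bcomp \<delta> k l m B A))"
    by (rule ab_interchange) (simp_all add: wt_iff_atype a)
  then show ?thesis using a by simp
qed

lemma tens_tens: "atype D = Some (r, s) \<Longrightarrow> btens k l k' l' B C = C' \<Longrightarrow> K = k + k' \<Longrightarrow> L = l + l' \<Longrightarrow>
  r'' = r + k + k' \<Longrightarrow> s'' = s + l + l' \<Longrightarrow>
  abeq \<delta> r'' s'' (Tens (Tens D k l B) k' l' C) (Tens D K L C')"
proof -
  assume a: "atype D = Some (r, s)" "btens k l k' l' B C = C'" "K = k + k'" "L = l + l'" "r'' = r +
      k + k'" "s'' = s + l + l'"
  have "abeq \<delta> (r + k + k') (s + l + l') (Tens (Tens D k l B) k' l' C) (Tens D (k + k') (l + l')
      (btens k l k' l' B C))"
    by (rule ab_tens_assoc) (simp add: wt_iff_atype a)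
  then show ?thesis using a by simp
qed

lemma tens_unit: "atype D = Some (r, s) \<Longrightarrow> abeq \<delta> r s (Tens D 0 0 (bbasis {})) D"
  by (rule ab_tens_unit) (simp add: wt_iff_atype)

lemma aI_0_eq_Pole: "abeq \<delta> 0 0 (aI 0) Pole"
  unfolding aI_0 by (rule tens_unit) simp

lemma comp_aI_left: "atype D = Some (r, s) \<Longrightarrow> abeq \<delta> r s (Comp (aI s) D) D"
  by (rule ab_id_left) (simp add: wt_iff_atype)
lemma comp_aI_right: "atype D = Some (r, s) \<Longrightarrow> abeq \<delta> r s (Comp D (aI r)) D"
  by (rule ab_id_right) (simp add: wt_iff_atype)

lemma comp_Pole_left: "atype F = Some (r, 0) \<Longrightarrow> abeq \<delta> r 0 (Comp Pole F) F"
proof -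
  assume t: "atype F = Some (r, 0)"
  have "abeq \<delta> r 0 (Comp Pole F) (Comp (aI 0) F)"
    by (rule comp_congL[OF ab_sym[OF aI_0_eq_Pole]]) (simp add: t)
  also have "abeq \<delta> r 0 \<dots> F" by (rule comp_aI_left[OF t])
  finally show ?thesis .
qed

lemma comp_Pole_right: "atype F = Some (0, t) \<Longrightarrow> abeq \<delta> 0 t (Comp F Pole) F"
proof -
  assume tt: "atype F = Some (0, t)"
  have "abeq \<delta> 0 t (Comp F Pole) (Comp F (aI 0))"
    by (rule comp_congR[OF ab_sym[OF aI_0_eq_Pole]]) (simp add: tt)
  also have "abeq \<delta> 0 t \<dots> F" by (rule comp_aI_right[OF tt])
  finally show ?thesis .
qed

lemma comp_assoc: "atype D = Some (t, u) \<Longrightarrow> atype E = Some (s, t) \<Longrightarrow> atype F = Some (r, s) \<Longrightarrow>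
  abeq \<delta> r u (Comp (Comp D E) F) (Comp D (Comp E F))"
  by (rule ab_comp_assoc) (simp_all add: wt_iff_atype)

lemma aI_1_tens_I: "abeq \<delta> 2 2 (Tens (aI 1) 1 1 bI) (aI 2)"
  unfolding aI_1 aI_2 by (rule tens_tens) (simp_all add: btens_basic)

abbreviation pole_diag :: "nat \<Rightarrow> nat \<Rightarrow> bdiagram \<Rightarrow> 'k::comm_ring_1 abt" where
  "pole_diag k l d \<equiv> Tens Pole k l (bbasis d)"
abbreviation "bI2 \<equiv> bbasis (idd 2)"

lemma comp_Add_right: "atype D = Some (s, t) \<Longrightarrow> atype E = Some (r, s) \<Longrightarrow> atype F = Some (r, s) \<Longrightarrow>
  abeq \<delta> r t (Comp D (Add E F)) (Add (Comp D E) (Comp D F))"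
  by (rule ab_comp_add_right) (simp_all add: wt_iff_atype)
lemma comp_Add_left: "atype D = Some (s, t) \<Longrightarrow> atype D' = Some (s, t) \<Longrightarrow> atype E = Some (r, s) \<Longrightarrow>
  abeq \<delta> r t (Comp (Add D D') E) (Add (Comp D E) (Comp D' E))"
  by (rule ab_comp_add_left) (simp_all add: wt_iff_atype)
lemma comp_Smul_right: "atype D = Some (s, t) \<Longrightarrow> atype E = Some (r, s) \<Longrightarrow>
  abeq \<delta> r t (Comp D (Smul c E)) (Smul c (Comp D E))"
  by (rule ab_comp_smul_right) (simp_all add: wt_iff_atype)
lemma comp_Smul_left: "atype D = Some (s, t) \<Longrightarrow> atype E = Some (r, s) \<Longrightarrow>
  abeq \<delta> r t (Comp (Smul c D) E) (Smul c (Comp D E))"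
  by (rule ab_comp_smul_left) (simp_all add: wt_iff_atype)

lemma comp_asub_right: "atype D = Some (s, t) \<Longrightarrow> atype E = Some (r, s) \<Longrightarrow> atype F = Some (r, s) \<Longrightarrow>
  abeq \<delta> r t (Comp D (asub E F)) (asub (Comp D E) (Comp D F))"
proof -
  assume a: "atype D = Some (s, t)" "atype E = Some (r, s)" "atype F = Some (r, s)"
  have "abeq \<delta> r t (Comp D (asub E F)) (Add (Comp D E) (Comp D (Smul (-1) F)))"
    unfolding asub_def by (rule comp_Add_right) (simp_all add: a)
  also have "abeq \<delta> r t \<dots> (asub (Comp D E) (Comp D F))"
    unfolding asub_def by (rule add_congR, rule comp_Smul_right) (simp_all add: a)
  finally show ?thesis .
qed

lemma comp_asub_left: "atype D = Some (s, t) \<Longrightarrow> atype D' = Some (s, t) \<Longrightarrow> atype E = Some (r, s) \<Longrightarrow>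
  abeq \<delta> r t (Comp (asub D D') E) (asub (Comp D E) (Comp D' E))"
proof -
  assume a: "atype D = Some (s, t)" "atype D' = Some (s, t)" "atype E = Some (r, s)"
  have "abeq \<delta> r t (Comp (asub D D') E) (Add (Comp D E) (Comp (Smul (-1) D') E))"
    unfolding asub_def by (rule comp_Add_left) (simp_all add: a)
  also have "abeq \<delta> r t \<dots> (asub (Comp D E) (Comp D' E))"
    unfolding asub_def by (rule add_congR, rule comp_Smul_left) (simp_all add: a)
  finally show ?thesis .
qed

lemma tens_I_Add: "atype A = Some (r, s) \<Longrightarrow> atype B = Some (r, s) \<Longrightarrow>
  abeq \<delta> (r + 1) (s + 1) (Tens (Add A B) 1 1 bI) (Add (Tens A 1 1 bI) (Tens B 1 1 bI))"
  by (rule ab_tens_add) (simp_all add: wt_iff_atype)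
lemma tens_I_Smul: "atype A = Some (r, s) \<Longrightarrow>
  abeq \<delta> (r + 1) (s + 1) (Tens (Smul c A) 1 1 bI) (Smul c (Tens A 1 1 bI))"
  by (rule ab_tens_smul) (simp_all add: wt_iff_atype)
lemma tens_I_asub: "atype A = Some (r, s) \<Longrightarrow> atype B = Some (r, s) \<Longrightarrow>
  abeq \<delta> (r + 1) (s + 1) (Tens (asub A B) 1 1 bI) (asub (Tens A 1 1 bI) (Tens B 1 1 bI))"
proof -
  assume a: "atype A = Some (r, s)" "atype B = Some (r, s)"
  have "abeq \<delta> (r + 1) (s + 1) (Tens (asub A B) 1 1 bI) (Add (Tens A 1 1 bI) (Tens (Smul
      (-1) B) 1 1 bI))"
    unfolding asub_def by (rule tens_I_Add) (simp_all add: a)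
  also have "abeq \<delta> (r + 1) (s + 1) \<dots> (asub (Tens A 1 1 bI) (Tens B 1 1 bI))"
    unfolding asub_def by (rule add_congR, rule tens_I_Smul) (simp_all add: a)
  finally show ?thesis .
qed

lemma apow_0: "apow D 0 = aI 1" by (simp add: apow_def)
lemma apow_Suc: "apow D (Suc n) = Comp D (apow D n)" by (simp add: apow_def)

section \<open>Bending and transposition\<close>

text \<open>\<open>cap_bend\<close> and \<open>cap_unbend\<close> are mutually inverse bijections between \<open>End(1)\<close> and
  \<open>Hom(2,0)\<close> by the snake identities, and likewise \<open>cup_bend\<close>, \<open>cup_unbend\<close> for \<open>Hom(0,2)\<close>.\<close>

definition "aI1_cup = Tens (aI 1) 0 2 bcup"
definition "aI1_cap = Tens (aI 1) 2 0 bcap"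
definition "cap_unbend F = Comp (Tens F 1 1 bI) aI1_cup"
definition "cup_unbend G = Comp aI1_cap (Tens G 1 1 bI)"
definition "cap_bend A = Comp aPi (Tens A 1 1 bI)"
definition "cup_bend A = Comp (Tens A 1 1 bI) aAmalg"

lemma atype_aI1_cup[simp]: "atype aI1_cup = Some (1, 3)" by (simp add: aI1_cup_def)
lemma atype_aI1_cap[simp]: "atype aI1_cap = Some (3, 1)" by (simp add: aI1_cap_def)
lemma atype_cap_unbend[simp]: "atype F = Some (2, 0) \<Longrightarrow> atype (cap_unbend F) = Some (1, 1)"
  by (simp add: cap_unbend_def)
lemma atype_cup_unbend[simp]: "atype F = Some (0, 2) \<Longrightarrow> atype (cup_unbend F) = Some (1, 1)"
  by (simp add: cup_unbend_def)
lemma atype_cap_bend[simp]: "atype F = Some (1, 1) \<Longrightarrow> atype (cap_bend F) = Some (2, 0)"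
  by (simp add: cap_bend_def)
lemma atype_cup_bend[simp]: "atype F = Some (1, 1) \<Longrightarrow> atype (cup_bend F) = Some (0, 2)"
  by (simp add: cup_bend_def)

text \<open>Congruence rules stating the typing premise first, so that resolution fixes the middle
  object before the equation is proved.\<close>

lemma comp_cong_ty: "atype E = Some (r, s) \<Longrightarrow> abeq \<delta> s t D D' \<Longrightarrow> abeq \<delta> r s E E' \<Longrightarrow>
  abeq \<delta> r t (Comp D E) (Comp D' E')"
  by (rule ab_comp_cong)
lemma comp_congL_ty: "atype E = Some (r, s) \<Longrightarrow> abeq \<delta> s t D D' \<Longrightarrow> abeq \<delta> r t (Comp D E) (Comp D' E)"
  by (rule comp_congL)
lemma comp_congR_ty: "atype D = Some (s, t) \<Longrightarrow> abeq \<delta> r s E E' \<Longrightarrow> abeq \<delta> r t (Comp D E) (Comp D E')"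
  by (rule comp_congR)

lemma tens_I_comp: "atype D = Some (s, t) \<Longrightarrow> atype E = Some (r, s) \<Longrightarrow> r' = r + 1 \<Longrightarrow> t' = t + 1 \<Longrightarrow>
  abeq \<delta> r' t' (Tens (Comp D E) 1 1 bI) (Comp (Tens D 1 1 bI) (Tens E 1 1 bI))"
  by (rule ab_sym, rule tens_comp_tens) (simp_all add: bcomp_basic)

lemma tens_I_tens_I: "atype D = Some (r, s) \<Longrightarrow> r' = r + 2 \<Longrightarrow> s' = s + 2 \<Longrightarrow>
  abeq \<delta> r' s' (Tens (Tens D 1 1 bI) 1 1 bI) (Tens D 2 2 (bbasis (idd 2)))"
  by (rule tens_tens) (simp_all add: btens_basic)

lemma aI1_cup_eq: "abeq \<delta> 1 3 aI1_cup (pole_diag 1 3 I_cup_d)"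
  unfolding aI1_cup_def aI_1 by (rule tens_tens) (simp_all add: btens_basic)
lemma aI1_cap_eq: "abeq \<delta> 3 1 aI1_cap (pole_diag 3 1 I_cap_d)"
  unfolding aI1_cap_def aI_1 by (rule tens_tens) (simp_all add: btens_basic)
lemma aPi_tens_I_eq: "abeq \<delta> 3 1 (Tens aPi 1 1 bI) (pole_diag 3 1 cap_I_d)"
  unfolding aPi_def by (rule tens_tens) (simp_all add: btens_basic)
lemma aAmalg_tens_I_eq: "abeq \<delta> 1 3 (Tens aAmalg 1 1 bI) (pole_diag 1 3 cup_I_d)"
  unfolding aAmalg_def by (rule tens_tens) (simp_all add: btens_basic)
lemma aX0_tens_I_eq: "abeq \<delta> 3 3 (Tens aX0 1 1 bI) (pole_diag 3 3 X_I_d)"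
  unfolding aX0_def by (rule tens_tens) (simp_all add: btens_basic)
lemma aI1_tens_X_eq: "abeq \<delta> 3 3 (Tens (aI 1) 2 2 bX) (pole_diag 3 3 I_X_d)"
  unfolding aI_1 by (rule tens_tens) (simp_all add: btens_basic)
lemma aI1_cup_tens_I_eq: "abeq \<delta> 2 4 (Tens aI1_cup 1 1 bI) (pole_diag 2 4 I_cup_I_d)"
proof -
  have "abeq \<delta> 2 4 (Tens aI1_cup 1 1 bI) (Tens (pole_diag 1 3 I_cup_d) 1 1 bI)"
    by (rule tens_cong[OF aI1_cup_eq]) simp_all
  also have "abeq \<delta> 2 4 \<dots> (pole_diag 2 4 I_cup_I_d)" by (rule tens_tens) (simp_all add: btens_basic)
  finally show ?thesis .
qed
lemma aI1_cap_tens_I_eq: "abeq \<delta> 4 2 (Tens aI1_cap 1 1 bI) (pole_diag 4 2 I_cap_I_d)"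
proof -
  have "abeq \<delta> 4 2 (Tens aI1_cap 1 1 bI) (Tens (pole_diag 3 1 I_cap_d) 1 1 bI)"
    by (rule tens_cong[OF aI1_cap_eq]) simp_all
  also have "abeq \<delta> 4 2 \<dots> (pole_diag 4 2 I_cap_I_d)" by (rule tens_tens) (simp_all add: btens_basic)
  finally show ?thesis .
qed
lemma aI2_tens_cap_eq: "abeq \<delta> 4 2 (Tens (aI 2) 2 0 bcap) (pole_diag 4 2 I2_cap_d)"
  unfolding aI_2 by (rule tens_tens) (simp_all add: btens_basic)
lemma aI2_tens_cup_eq: "abeq \<delta> 2 4 (Tens (aI 2) 0 2 bcup) (pole_diag 2 4 I2_cup_d)"
  unfolding aI_2 by (rule tens_tens) (simp_all add: btens_basic)

lemma tens_X_factor: "atype D = Some (1, 1) \<Longrightarrow> abeq \<delta> 3 3 (Tens D 2 2 bX) (Comp (Tens D 2 2 bI2)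
  (pole_diag 3 3 I_X_d))"
proof -
  assume t: "atype D = Some (1, 1)"
  have "abeq \<delta> 3 3 (Tens D 2 2 bX) (Tens (Comp D (aI 1)) 2 2 bX)"
    by (rule tens_cong[OF ab_sym[OF comp_aI_right[OF t]]]) simp_all
  also have "abeq \<delta> 3 3 \<dots> (Comp (Tens D 2 2 bI2) (Tens (aI 1) 2 2 bX))"
    by (rule ab_sym, rule tens_comp_tens) (simp_all add: t bcomp_basic)
  also have "abeq \<delta> 3 3 \<dots> (Comp (Tens D 2 2 bI2) (pole_diag 3 3 I_X_d))"
    by (rule comp_congR[OF aI1_tens_X_eq]) (simp add: t)
  finally show ?thesis .
qed

lemma tens_X_factor': "atype D = Some (1, 1) \<Longrightarrow> abeq \<delta> 3 3 (Tens D 2 2 bX) (Comp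
  (pole_diag 3 3 I_X_d) (Tens D 2 2 bI2))"
proof -
  assume t: "atype D = Some (1, 1)"
  have "abeq \<delta> 3 3 (Tens D 2 2 bX) (Tens (Comp (aI 1) D) 2 2 bX)"
    by (rule tens_cong[OF ab_sym[OF comp_aI_left[OF t]]]) simp_all
  also have "abeq \<delta> 3 3 \<dots> (Comp (Tens (aI 1) 2 2 bX) (Tens D 2 2 bI2))"
    by (rule ab_sym, rule tens_comp_tens) (simp_all add: t bcomp_basic)
  also have "abeq \<delta> 3 3 \<dots> (Comp (pole_diag 3 3 I_X_d) (Tens D 2 2 bI2))"
    by (rule comp_congL[OF aI1_tens_X_eq]) (simp add: t)
  finally show ?thesis .
qed

lemma atransp_eq_pole_diags: "atransp D = Comp (pole_diag 3 1 cap_I_d) (Comp (Tens D 2 2 bX)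
  (pole_diag 1 3 cup_I_d))"
  unfolding atransp_def by (simp only: btens_basic)

lemma atransp_eq_cap_unbend: "atype D = Some (1, 1) \<Longrightarrow>
  abeq \<delta> 1 1 (atransp D) (cap_unbend (Comp aPi (Comp (Tens D 1 1 bI) aX0)))"
proof -
  assume t: "atype D = Some (1, 1)"
  have "abeq \<delta> 1 1 (atransp D) (Comp (pole_diag 3 1 cap_I_d) (Comp (Comp (Tens D 2 2 bI2)
      (pole_diag 3 3 I_X_d)) (pole_diag 1 3 cup_I_d)))"
    unfolding atransp_eq_pole_diags by (rule comp_congR, rule comp_congL[OF tens_X_factor[OF t]])
        simp_all
  also have "abeq \<delta> 1 1 \<dots> (Comp (pole_diag 3 1 cap_I_d) (Comp (Tens D 2 2 bI2) (Comp
      (pole_diag 3 3 I_X_d) (pole_diag 1 3 cup_I_d))))"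
    by (rule comp_congR, rule comp_assoc) (simp_all add: t)
  also have "abeq \<delta> 1 1 \<dots> (Comp (pole_diag 3 1 cap_I_d) (Comp (Tens D 2 2 bI2)
      (pole_diag 1 3 cup_wide_d)))"
    by (rule comp_congR, rule comp_congR, rule Pole_tens_comp, rule bcomp_I_X_cup_I) (simp_all add: t)
  finally have L: "abeq \<delta> 1 1 (atransp D) (Comp (pole_diag 3 1 cap_I_d) (Comp (Tens D 2 2 bI2)
      (pole_diag 1 3 cup_wide_d)))" .
  have "abeq \<delta> 1 1 (cap_unbend (Comp aPi (Comp (Tens D 1 1 bI) aX0)))
     (Comp (Comp (Tens aPi 1 1 bI) (Tens (Comp (Tens D 1 1 bI) aX0) 1 1 bI)) aI1_cup)"
    unfolding cap_unbend_def by (rule comp_congL_ty, simp, rule tens_I_comp, (simp add: t)+)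
  also have "abeq \<delta> 1 1 \<dots> (Comp (Comp (pole_diag 3 1 cap_I_d) (Comp (Tens (Tens D 1 1 bI) 1 1 bI)
      (Tens aX0 1 1 bI))) (pole_diag 1 3 I_cup_d))"
    by (rule comp_cong_ty, simp, rule comp_cong_ty, simp add: t, rule aPi_tens_I_eq,
        rule tens_I_comp, (simp add: t)+, rule aI1_cup_eq)
  also have "abeq \<delta> 1 1 \<dots> (Comp (Comp (pole_diag 3 1 cap_I_d) (Comp (Tens D 2 2 bI2)
      (pole_diag 3 3 X_I_d))) (pole_diag 1 3 I_cup_d))"
    by (rule comp_congL_ty, simp, rule comp_congR_ty, simp, rule comp_cong_ty, simp,
        rule tens_I_tens_I, (simp add: t)+, rule aX0_tens_I_eq)
  also have "abeq \<delta> 1 1 \<dots> (Comp (pole_diag 3 1 cap_I_d) (Comp (Comp (Tens D 2 2 bI2)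
      (pole_diag 3 3 X_I_d)) (pole_diag 1 3 I_cup_d)))"
    by (rule comp_assoc) (simp_all add: t)
  also have "abeq \<delta> 1 1 \<dots> (Comp (pole_diag 3 1 cap_I_d) (Comp (Tens D 2 2 bI2) (Comp
      (pole_diag 3 3 X_I_d) (pole_diag 1 3 I_cup_d))))"
    by (rule comp_congR, rule comp_assoc) (simp_all add: t)
  also have "abeq \<delta> 1 1 \<dots> (Comp (pole_diag 3 1 cap_I_d) (Comp (Tens D 2 2 bI2)
      (pole_diag 1 3 cup_wide_d)))"
    by (rule comp_congR, rule comp_congR, rule Pole_tens_comp, rule bcomp_X_I_I_cup) (simp_all add: t)
  finally have R: "abeq \<delta> 1 1 (cap_unbend (Comp aPi (Comp (Tens D 1 1 bI) aX0))) (Comp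
      (pole_diag 3 1 cap_I_d) (Comp (Tens D 2 2 bI2) (pole_diag 1 3 cup_wide_d)))" .
  show ?thesis using L R by (blast intro: ab_trans ab_sym)
qed

lemma aPi_comp_tens_I2: "atype F = Some (r, 0) \<Longrightarrow> abeq \<delta> (r + 2) 0 (Comp aPi (Tens F 2 2 bI2))
  (Tens F 2 0 bcap)"
proof -
  assume t: "atype F = Some (r, 0)"
  have "abeq \<delta> (r + 2) 0 (Comp aPi (Tens F 2 2 bI2)) (Tens (Comp Pole F) 2 0 bcap)"
    unfolding aPi_def by (rule tens_comp_tens) (simp_all add: t bcomp_basic)
  also have "abeq \<delta> (r + 2) 0 \<dots> (Tens F 2 0 bcap)" by (rule tens_cong[OF comp_Pole_left[OF t]]) simp_all
  finally show ?thesis .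
qed

lemma tens_cap_factor: "atype F = Some (r, t) \<Longrightarrow> abeq \<delta> (r + 2) t (Tens F 2 0 bcap) (Comp F (Tens
  (aI r) 2 0 bcap))"
proof -
  assume tt: "atype F = Some (r, t)"
  have "abeq \<delta> (r + 2) t (Tens F 2 0 bcap) (Tens (Comp F (aI r)) 2 0 bcap)"
    by (rule tens_cong[OF ab_sym[OF comp_aI_right[OF tt]]]) simp_all
  also have "abeq \<delta> (r + 2) t \<dots> (Comp (Tens F 0 0 (bbasis {})) (Tens (aI r) 2 0 bcap))"
    by (rule ab_sym, rule tens_comp_tens) (simp_all add: tt bcomp_basic)
  also have "abeq \<delta> (r + 2) t \<dots> (Comp F (Tens (aI r) 2 0 bcap))"
    by (rule comp_congL[OF tens_unit[OF tt]]) simp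
  finally show ?thesis .
qed

lemma tens_cup_factor: "atype D = Some (r, t) \<Longrightarrow> abeq \<delta> r (t + 2) (Tens D 0 2 bcup) (Comp (Tens
  (aI t) 0 2 bcup) D)"
proof -
  assume tt: "atype D = Some (r, t)"
  have "abeq \<delta> r (t + 2) (Tens D 0 2 bcup) (Tens (Comp (aI t) D) 0 2 bcup)"
    by (rule tens_cong[OF ab_sym[OF comp_aI_left[OF tt]]]) simp_all
  also have "abeq \<delta> r (t + 2) \<dots> (Comp (Tens (aI t) 0 2 bcup) (Tens D 0 0 (bbasis {})))"
    by (rule ab_sym, rule tens_comp_tens) (simp_all add: tt bcomp_basic)
  also have "abeq \<delta> r (t + 2) \<dots> (Comp (Tens (aI t) 0 2 bcup) D)"
    by (rule comp_congR[OF tens_unit[OF tt]]) simp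
  finally show ?thesis .
qed

lemma tens_I2_comp_aAmalg: "atype G = Some (0, t) \<Longrightarrow>
  abeq \<delta> 0 (t + 2) (Comp (Tens G 2 2 bI2) aAmalg) (Tens G 0 2 bcup)"
proof -
  assume tt: "atype G = Some (0, t)"
  have "abeq \<delta> 0 (t + 2) (Comp (Tens G 2 2 bI2) aAmalg) (Tens (Comp G Pole) 0 2 bcup)"
    unfolding aAmalg_def by (rule tens_comp_tens) (simp_all add: tt bcomp_basic)
  also have "abeq \<delta> 0 (t + 2) \<dots> (Tens G 0 2 bcup)"
    by (rule tens_cong[OF comp_Pole_right[OF tt]]) simp_all
  finally show ?thesis .
qed

lemma tens_I2_comp_aI1_cup: "atype D = Some (1, 1) \<Longrightarrow>
  abeq \<delta> 1 3 (Comp (Tens D 2 2 bI2) aI1_cup) (Tens D 0 2 bcup)"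
proof -
  assume tt: "atype D = Some (1, 1)"
  have "abeq \<delta> 1 3 (Comp (Tens D 2 2 bI2) aI1_cup) (Tens (Comp D (aI 1)) 0 2 bcup)"
    unfolding aI1_cup_def by (rule tens_comp_tens) (simp_all add: tt bcomp_basic)
  also have "abeq \<delta> 1 3 \<dots> (Tens D 0 2 bcup)" by (rule tens_cong[OF comp_aI_right[OF tt]]) simp_all
  finally show ?thesis .
qed

lemma aI1_cap_comp_tens_I2: "atype D = Some (1, 1) \<Longrightarrow>
  abeq \<delta> 3 1 (Comp aI1_cap (Tens D 2 2 bI2)) (Tens D 2 0 bcap)"
proof -
  assume tt: "atype D = Some (1, 1)"
  have "abeq \<delta> 3 1 (Comp aI1_cap (Tens D 2 2 bI2)) (Tens (Comp (aI 1) D) 2 0 bcap)"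
    unfolding aI1_cap_def by (rule tens_comp_tens) (simp_all add: tt bcomp_basic)
  also have "abeq \<delta> 3 1 \<dots> (Tens D 2 0 bcap)" by (rule tens_cong[OF comp_aI_left[OF tt]]) simp_all
  finally show ?thesis .
qed

lemma cap_bend_unbend: "atype F = Some (2, 0) \<Longrightarrow> abeq \<delta> 2 0 (cap_bend (cap_unbend F)) F"
proof -
  assume t: "atype F = Some (2, 0)"
  have "abeq \<delta> 2 0 (cap_bend (cap_unbend F)) (Comp aPi (Comp (Tens (Tens F 1 1 bI) 1 1 bI)
      (Tens aI1_cup 1 1 bI)))"
    unfolding cap_bend_def cap_unbend_def by (rule comp_congR_ty, simp, rule tens_I_comp, (simp add: t)+)
  also have "abeq \<delta> 2 0 \<dots> (Comp aPi (Comp (Tens F 2 2 bI2) (pole_diag 2 4 I_cup_I_d)))"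
    by (rule comp_congR_ty, simp, rule comp_cong_ty, simp, rule tens_I_tens_I,
        (simp add: t)+, rule aI1_cup_tens_I_eq)
  also have "abeq \<delta> 2 0 \<dots> (Comp (Comp aPi (Tens F 2 2 bI2)) (pole_diag 2 4 I_cup_I_d))"
    by (rule ab_sym, rule comp_assoc) (simp_all add: t)
  also have "abeq \<delta> 2 0 \<dots> (Comp (Tens F 2 0 bcap) (pole_diag 2 4 I_cup_I_d))"
    by (rule comp_congL_ty, simp, rule aPi_comp_tens_I2[OF t, simplified])
  also have "abeq \<delta> 2 0 \<dots> (Comp (Comp F (Tens (aI 2) 2 0 bcap)) (pole_diag 2 4 I_cup_I_d))"
    by (rule comp_congL_ty, simp, rule tens_cap_factor[OF t, simplified])
  also have "abeq \<delta> 2 0 \<dots> (Comp (Comp F (pole_diag 4 2 I2_cap_d)) (pole_diag 2 4 I_cup_I_d))"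
    by (rule comp_congL_ty, simp, rule comp_congR_ty, simp add: t, rule aI2_tens_cap_eq)
  also have "abeq \<delta> 2 0 \<dots> (Comp F (Comp (pole_diag 4 2 I2_cap_d) (pole_diag 2 4 I_cup_I_d)))"
    by (rule comp_assoc) (simp_all add: t)
  also have "abeq \<delta> 2 0 \<dots> (Comp F (aI 2))"
    unfolding aI_2 by (rule comp_congR_ty, simp add: t, rule Pole_tens_comp, rule bcomp_I2_cap_I_cup_I)
  also have "abeq \<delta> 2 0 \<dots> F" by (rule comp_aI_right[OF t])
  finally show ?thesis .
qed

lemma cap_unbend_bend: "atype D = Some (1, 1) \<Longrightarrow> abeq \<delta> 1 1 (cap_unbend (cap_bend D)) D"
proof -
  assume t: "atype D = Some (1, 1)"
  have "abeq \<delta> 1 1 (cap_unbend (cap_bend D)) (Comp (Comp (Tens aPi 1 1 bI) (Tens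
      (Tens D 1 1 bI) 1 1 bI)) aI1_cup)"
    unfolding cap_bend_def cap_unbend_def by (rule comp_congL_ty, simp, rule tens_I_comp, (simp add: t)+)
  also have "abeq \<delta> 1 1 \<dots> (Comp (Comp (pole_diag 3 1 cap_I_d) (Tens D 2 2 bI2)) aI1_cup)"
    by (rule comp_congL_ty, simp, rule comp_cong_ty, simp add: t, rule aPi_tens_I_eq,
        rule tens_I_tens_I, (simp add: t)+)
  also have "abeq \<delta> 1 1 \<dots> (Comp (pole_diag 3 1 cap_I_d) (Comp (Tens D 2 2 bI2) aI1_cup))"
    by (rule comp_assoc) (simp_all add: t)
  also have "abeq \<delta> 1 1 \<dots> (Comp (pole_diag 3 1 cap_I_d) (Tens D 0 2 bcup))"
    by (rule comp_congR_ty, simp, rule tens_I2_comp_aI1_cup[OF t])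
  also have "abeq \<delta> 1 1 \<dots> (Comp (pole_diag 3 1 cap_I_d) (Comp aI1_cup D))"
    unfolding aI1_cup_def by (rule comp_congR_ty, simp, rule tens_cup_factor[OF t, simplified])
  also have "abeq \<delta> 1 1 \<dots> (Comp (Comp (pole_diag 3 1 cap_I_d) aI1_cup) D)"
    by (rule ab_sym, rule comp_assoc) (simp_all add: t)
  also have "abeq \<delta> 1 1 \<dots> (Comp (Comp (pole_diag 3 1 cap_I_d) (pole_diag 1 3 I_cup_d)) D)"
    by (rule comp_congL_ty, simp add: t, rule comp_congR_ty, simp, rule aI1_cup_eq)
  also have "abeq \<delta> 1 1 \<dots> (Comp (aI 1) D)"
    unfolding aI_1 by (rule comp_congL_ty, simp add: t, rule Pole_tens_comp, rule bcomp_cap_I_I_cup)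
  also have "abeq \<delta> 1 1 \<dots> D" by (rule comp_aI_left[OF t])
  finally show ?thesis .
qed

lemma atransp_eq_cup_unbend: "atype D = Some (1, 1) \<Longrightarrow>
  abeq \<delta> 1 1 (atransp D) (cup_unbend (Comp aX0 (Comp (Tens D 1 1 bI) aAmalg)))"
proof -
  assume t: "atype D = Some (1, 1)"
  have "abeq \<delta> 1 1 (atransp D) (Comp (pole_diag 3 1 cap_I_d) (Comp (Comp (pole_diag 3 3 I_X_d)
      (Tens D 2 2 bI2)) (pole_diag 1 3 cup_I_d)))"
    unfolding atransp_eq_pole_diags by (rule comp_congR, rule comp_congL[OF tens_X_factor'[OF t]])
        simp_all
  also have "abeq \<delta> 1 1 \<dots> (Comp (pole_diag 3 1 cap_I_d) (Comp (pole_diag 3 3 I_X_d) (Comp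
      (Tens D 2 2 bI2) (pole_diag 1 3 cup_I_d))))"
    by (rule comp_congR, rule comp_assoc) (simp_all add: t)
  also have "abeq \<delta> 1 1 \<dots> (Comp (Comp (pole_diag 3 1 cap_I_d) (pole_diag 3 3 I_X_d)) (Comp
      (Tens D 2 2 bI2) (pole_diag 1 3 cup_I_d)))"
    by (rule ab_sym, rule comp_assoc) (simp_all add: t)
  also have "abeq \<delta> 1 1 \<dots> (Comp (pole_diag 3 1 cap_wide_d) (Comp (Tens D 2 2 bI2)
      (pole_diag 1 3 cup_I_d)))"
    by (rule comp_congL_ty, simp add: t, rule Pole_tens_comp, rule bcomp_cap_I_I_X)
  finally have L: "abeq \<delta> 1 1 (atransp D) (Comp (pole_diag 3 1 cap_wide_d) (Comp (Tens D 2 2 bI2)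
      (pole_diag 1 3 cup_I_d)))" .
  have "abeq \<delta> 1 1 (cup_unbend (Comp aX0 (Comp (Tens D 1 1 bI) aAmalg)))
      (Comp aI1_cap (Comp (Tens aX0 1 1 bI) (Tens (Comp (Tens D 1 1 bI) aAmalg) 1 1 bI)))"
    unfolding cup_unbend_def by (rule comp_congR_ty, simp, rule tens_I_comp, (simp add: t)+)
  also have "abeq \<delta> 1 1 \<dots> (Comp aI1_cap (Comp (Tens aX0 1 1 bI) (Comp (Tens (Tens D 1 1 bI) 1 1 bI)
      (Tens aAmalg 1 1 bI))))"
    by (rule comp_congR_ty, simp, rule comp_congR_ty, simp, rule tens_I_comp, (simp add: t)+)
  also have "abeq \<delta> 1 1 \<dots> (Comp (pole_diag 3 1 I_cap_d) (Comp (pole_diag 3 3 X_I_d) (Comp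
      (Tens D 2 2 bI2) (pole_diag 1 3 cup_I_d))))"
    by (rule comp_cong_ty, simp add: t, rule aI1_cap_eq, rule comp_cong_ty, simp add: t,
        rule aX0_tens_I_eq, rule comp_cong_ty, simp,
        rule tens_I_tens_I, (simp add: t)+, rule aAmalg_tens_I_eq)
  also have "abeq \<delta> 1 1 \<dots> (Comp (Comp (pole_diag 3 1 I_cap_d) (pole_diag 3 3 X_I_d)) (Comp
      (Tens D 2 2 bI2) (pole_diag 1 3 cup_I_d)))"
    by (rule ab_sym, rule comp_assoc) (simp_all add: t)
  also have "abeq \<delta> 1 1 \<dots> (Comp (pole_diag 3 1 cap_wide_d) (Comp (Tens D 2 2 bI2)
      (pole_diag 1 3 cup_I_d)))"
    by (rule comp_congL_ty, simp add: t, rule Pole_tens_comp, rule bcomp_I_cap_X_I)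
  finally have R: "abeq \<delta> 1 1 (cup_unbend (Comp aX0 (Comp (Tens D 1 1 bI) aAmalg))) (Comp
      (pole_diag 3 1 cap_wide_d) (Comp (Tens D 2 2 bI2) (pole_diag 1 3 cup_I_d)))" .
  show ?thesis using L R by (blast intro: ab_trans ab_sym)
qed

lemma cup_bend_unbend: "atype G = Some (0, 2) \<Longrightarrow> abeq \<delta> 0 2 (cup_bend (cup_unbend G)) G"
proof -
  assume t: "atype G = Some (0, 2)"
  have "abeq \<delta> 0 2 (cup_bend (cup_unbend G)) (Comp (Comp (Tens aI1_cap 1 1 bI) (Tens
      (Tens G 1 1 bI) 1 1 bI)) aAmalg)"
    unfolding cup_bend_def cup_unbend_def by (rule comp_congL_ty, simp, rule tens_I_comp, (simp add: t)+)
  also have "abeq \<delta> 0 2 \<dots> (Comp (Comp (pole_diag 4 2 I_cap_I_d) (Tens G 2 2 bI2)) aAmalg)"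
    by (rule comp_congL_ty, simp, rule comp_cong_ty, simp add: t, rule aI1_cap_tens_I_eq,
        rule tens_I_tens_I, (simp add: t)+)
  also have "abeq \<delta> 0 2 \<dots> (Comp (pole_diag 4 2 I_cap_I_d) (Comp (Tens G 2 2 bI2) aAmalg))"
    by (rule comp_assoc) (simp_all add: t)
  also have "abeq \<delta> 0 2 \<dots> (Comp (pole_diag 4 2 I_cap_I_d) (Tens G 0 2 bcup))"
    by (rule comp_congR_ty, simp, rule tens_I2_comp_aAmalg[OF t, simplified])
  also have "abeq \<delta> 0 2 \<dots> (Comp (pole_diag 4 2 I_cap_I_d) (Comp (Tens (aI 2) 0 2 bcup) G))"
    by (rule comp_congR_ty, simp, rule tens_cup_factor[OF t, simplified])
  also have "abeq \<delta> 0 2 \<dots> (Comp (pole_diag 4 2 I_cap_I_d) (Comp (pole_diag 2 4 I2_cup_d) G))"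
    by (rule comp_congR_ty, simp, rule comp_congL_ty, simp add: t, rule aI2_tens_cup_eq)
  also have "abeq \<delta> 0 2 \<dots> (Comp (Comp (pole_diag 4 2 I_cap_I_d) (pole_diag 2 4 I2_cup_d)) G)"
    by (rule ab_sym, rule comp_assoc) (simp_all add: t)
  also have "abeq \<delta> 0 2 \<dots> (Comp (aI 2) G)"
    unfolding aI_2 by (rule comp_congL_ty, simp add: t, rule Pole_tens_comp, rule bcomp_I_cap_I_I2_cup)
  also have "abeq \<delta> 0 2 \<dots> G" by (rule comp_aI_left[OF t])
  finally show ?thesis .
qed

lemma cup_unbend_bend: "atype D = Some (1, 1) \<Longrightarrow> abeq \<delta> 1 1 (cup_unbend (cup_bend D)) D"
proof -
  assume t: "atype D = Some (1, 1)"
  have "abeq \<delta> 1 1 (cup_unbend (cup_bend D)) (Comp aI1_cap (Comp (Tens (Tens D 1 1 bI) 1 1 bI)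
      (Tens aAmalg 1 1 bI)))"
    unfolding cup_bend_def cup_unbend_def by (rule comp_congR_ty, simp, rule tens_I_comp, (simp add: t)+)
  also have "abeq \<delta> 1 1 \<dots> (Comp aI1_cap (Comp (Tens D 2 2 bI2) (pole_diag 1 3 cup_I_d)))"
    by (rule comp_congR_ty, simp, rule comp_cong_ty, simp, rule tens_I_tens_I,
        (simp add: t)+, rule aAmalg_tens_I_eq)
  also have "abeq \<delta> 1 1 \<dots> (Comp (Comp aI1_cap (Tens D 2 2 bI2)) (pole_diag 1 3 cup_I_d))"
    by (rule ab_sym, rule comp_assoc) (simp_all add: t)
  also have "abeq \<delta> 1 1 \<dots> (Comp (Tens D 2 0 bcap) (pole_diag 1 3 cup_I_d))"
    by (rule comp_congL_ty, simp, rule aI1_cap_comp_tens_I2[OF t])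
  also have "abeq \<delta> 1 1 \<dots> (Comp (Comp D aI1_cap) (pole_diag 1 3 cup_I_d))"
    unfolding aI1_cap_def by (rule comp_congL_ty, simp, rule tens_cap_factor[OF t, simplified])
  also have "abeq \<delta> 1 1 \<dots> (Comp D (Comp aI1_cap (pole_diag 1 3 cup_I_d)))"
    by (rule comp_assoc) (simp_all add: t)
  also have "abeq \<delta> 1 1 \<dots> (Comp D (Comp (pole_diag 3 1 I_cap_d) (pole_diag 1 3 cup_I_d)))"
    by (rule comp_congR_ty, simp add: t, rule comp_congL_ty, simp, rule aI1_cap_eq)
  also have "abeq \<delta> 1 1 \<dots> (Comp D (aI 1))"
    unfolding aI_1 by (rule comp_congR_ty, simp add: t, rule Pole_tens_comp, rule bcomp_I_cap_cup_I)
  also have "abeq \<delta> 1 1 \<dots> D" by (rule comp_aI_right[OF t])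
  finally show ?thesis .
qed

lemma cap_bend_HH: "cap_bend HH = Comp aPi aH01" by (simp add: cap_bend_def aH01_def)
lemma cup_bend_HH: "cup_bend HH = Comp aH01 aAmalg" by (simp add: cup_bend_def aH01_def)

lemma cap_bend_cong: "abeq \<delta> 1 1 A B \<Longrightarrow> abeq \<delta> 2 0 (cap_bend A) (cap_bend B)"
  unfolding cap_bend_def by (rule comp_congR, rule tens_cong[where r=1 and s=1]) simp_all
lemma cup_bend_cong: "abeq \<delta> 1 1 A B \<Longrightarrow> abeq \<delta> 0 2 (cup_bend A) (cup_bend B)"
  unfolding cup_bend_def by (rule comp_congL, rule tens_cong[where r=1 and s=1]) simp_all
lemma cap_unbend_cong: "abeq \<delta> 2 0 A B \<Longrightarrow> abeq \<delta> 1 1 (cap_unbend A) (cap_unbend B)"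
  unfolding cap_unbend_def by (rule comp_congL, rule tens_cong[where r=2 and s=0]) simp_all
lemma cup_unbend_cong: "abeq \<delta> 0 2 A B \<Longrightarrow> abeq \<delta> 1 1 (cup_unbend A) (cup_unbend B)"
  unfolding cup_unbend_def by (rule comp_congR, rule tens_cong[where r=0 and s=2]) simp_all

lemma cap_bend_Add: "atype A = Some (1, 1) \<Longrightarrow> atype B = Some (1, 1) \<Longrightarrow>
  abeq \<delta> 2 0 (cap_bend (Add A B)) (Add (cap_bend A) (cap_bend B))"
proof -
  assume a: "atype A = Some (1, 1)" "atype B = Some (1, 1)"
  have "abeq \<delta> 2 0 (cap_bend (Add A B)) (Comp aPi (Add (Tens A 1 1 bI) (Tens B 1 1 bI)))"
    unfolding cap_bend_def using tens_I_Add[OF a, of \<delta>] by (intro comp_congR) simp_all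
  also have "abeq \<delta> 2 0 \<dots> (Add (cap_bend A) (cap_bend B))" unfolding cap_bend_def
    by (rule comp_Add_right) (simp_all add: a)
  finally show ?thesis .
qed
lemma cap_bend_Smul: "atype A = Some (1, 1) \<Longrightarrow> abeq \<delta> 2 0 (cap_bend (Smul c A)) (Smul c (cap_bend A))"
proof -
  assume a: "atype A = Some (1, 1)"
  have "abeq \<delta> 2 0 (cap_bend (Smul c A)) (Comp aPi (Smul c (Tens A 1 1 bI)))"
    unfolding cap_bend_def using tens_I_Smul[OF a, of \<delta> c] by (intro comp_congR) simp_all
  also have "abeq \<delta> 2 0 \<dots> (Smul c (cap_bend A))" unfolding cap_bend_def
    by (rule comp_Smul_right) (simp_all add: a)
  finally show ?thesis .
qed
lemma cap_bend_asub: "atype A = Some (1, 1) \<Longrightarrow> atype B = Some (1, 1) \<Longrightarrow>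
  abeq \<delta> 2 0 (cap_bend (asub A B)) (asub (cap_bend A) (cap_bend B))"
proof -
  assume a: "atype A = Some (1, 1)" "atype B = Some (1, 1)"
  have "abeq \<delta> 2 0 (cap_bend (asub A B)) (Add (cap_bend A) (cap_bend (Smul (-1) B)))"
    unfolding asub_def by (rule cap_bend_Add) (simp_all add: a)
  also have "abeq \<delta> 2 0 \<dots> (asub (cap_bend A) (cap_bend B))" unfolding asub_def
    by (rule add_congR, rule cap_bend_Smul) (simp_all add: a)
  finally show ?thesis .
qed
lemma cap_bend_Comp: "atype A = Some (1, 1) \<Longrightarrow> atype B = Some (1, 1) \<Longrightarrow>
  abeq \<delta> 2 0 (cap_bend (Comp A B)) (Comp (cap_bend A) (Tens B 1 1 bI))"
proof -
  assume a: "atype A = Some (1, 1)" "atype B = Some (1, 1)"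
  have "abeq \<delta> 2 0 (cap_bend (Comp A B)) (Comp aPi (Comp (Tens A 1 1 bI) (Tens B 1 1 bI)))"
    unfolding cap_bend_def by (rule comp_congR, rule tens_I_comp) (simp_all add: a)
  also have "abeq \<delta> 2 0 \<dots> (Comp (cap_bend A) (Tens B 1 1 bI))" unfolding cap_bend_def
    by (rule ab_sym, rule comp_assoc) (simp_all add: a)
  finally show ?thesis .
qed

lemma cup_bend_Add: "atype A = Some (1, 1) \<Longrightarrow> atype B = Some (1, 1) \<Longrightarrow>
  abeq \<delta> 0 2 (cup_bend (Add A B)) (Add (cup_bend A) (cup_bend B))"
proof -
  assume a: "atype A = Some (1, 1)" "atype B = Some (1, 1)"
  have "abeq \<delta> 0 2 (cup_bend (Add A B)) (Comp (Add (Tens A 1 1 bI) (Tens B 1 1 bI)) aAmalg)"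
    unfolding cup_bend_def using tens_I_Add[OF a, of \<delta>] by (intro comp_congL) simp_all
  also have "abeq \<delta> 0 2 \<dots> (Add (cup_bend A) (cup_bend B))" unfolding cup_bend_def
    by (rule comp_Add_left) (simp_all add: a)
  finally show ?thesis .
qed
lemma cup_bend_Smul: "atype A = Some (1, 1) \<Longrightarrow> abeq \<delta> 0 2 (cup_bend (Smul c A)) (Smul c (cup_bend A))"
proof -
  assume a: "atype A = Some (1, 1)"
  have "abeq \<delta> 0 2 (cup_bend (Smul c A)) (Comp (Smul c (Tens A 1 1 bI)) aAmalg)"
    unfolding cup_bend_def using tens_I_Smul[OF a, of \<delta> c] by (intro comp_congL) simp_all
  also have "abeq \<delta> 0 2 \<dots> (Smul c (cup_bend A))" unfolding cup_bend_def
    by (rule comp_Smul_left) (simp_all add: a)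
  finally show ?thesis .
qed
lemma cup_bend_asub: "atype A = Some (1, 1) \<Longrightarrow> atype B = Some (1, 1) \<Longrightarrow>
  abeq \<delta> 0 2 (cup_bend (asub A B)) (asub (cup_bend A) (cup_bend B))"
proof -
  assume a: "atype A = Some (1, 1)" "atype B = Some (1, 1)"
  have "abeq \<delta> 0 2 (cup_bend (asub A B)) (Add (cup_bend A) (cup_bend (Smul (-1) B)))"
    unfolding asub_def by (rule cup_bend_Add) (simp_all add: a)
  also have "abeq \<delta> 0 2 \<dots> (asub (cup_bend A) (cup_bend B))" unfolding asub_def
    by (rule add_congR, rule cup_bend_Smul) (simp_all add: a)
  finally show ?thesis .
qed
lemma cup_bend_Comp: "atype A = Some (1, 1) \<Longrightarrow> atype B = Some (1, 1) \<Longrightarrow>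
  abeq \<delta> 0 2 (cup_bend (Comp A B)) (Comp (Tens A 1 1 bI) (cup_bend B))"
proof -
  assume a: "atype A = Some (1, 1)" "atype B = Some (1, 1)"
  have "abeq \<delta> 0 2 (cup_bend (Comp A B)) (Comp (Comp (Tens A 1 1 bI) (Tens B 1 1 bI)) aAmalg)"
    unfolding cup_bend_def by (rule comp_congL, rule tens_I_comp) (simp_all add: a)
  also have "abeq \<delta> 0 2 \<dots> (Comp (Tens A 1 1 bI) (cup_bend B))" unfolding cup_bend_def
    by (rule comp_assoc) (simp_all add: a)
  finally show ?thesis .
qed

lemma cap_bend_scalar: "atype Z = Some (0, 0) \<Longrightarrow> abeq \<delta> 2 0 (cap_bend (Tens Z 1 1 bI)) (Comp Z aPi)"
proof -
  assume t: "atype Z = Some (0, 0)"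
  have "abeq \<delta> 2 0 (cap_bend (Tens Z 1 1 bI)) (Comp aPi (Tens Z 2 2 bI2))"
    unfolding cap_bend_def by (rule comp_congR, rule tens_I_tens_I) (simp_all add: t)
  also have "abeq \<delta> 2 0 \<dots> (Tens Z 2 0 bcap)" using aPi_comp_tens_I2[OF t, of \<delta>, unfolded add_0] by simp
  also have "abeq \<delta> 2 0 \<dots> (Comp Z (Tens (aI 0) 2 0 bcap))"
    using tens_cap_factor[OF t, of \<delta>, unfolded add_0] by simp
  also have "abeq \<delta> 2 0 \<dots> (Comp Z aPi)"
    unfolding aPi_def by (rule comp_congR, rule tens_cong[where r=0 and s=0, OF aI_0_eq_Pole])
        (simp_all add: t)
  finally show ?thesis .
qed

lemma cup_bend_scalar: "atype Z = Some (0, 0) \<Longrightarrow> abeq \<delta> 0 2 (cup_bend (Tens Z 1 1 bI)) (Comp aAmalg Z)"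
proof -
  assume t: "atype Z = Some (0, 0)"
  have "abeq \<delta> 0 2 (cup_bend (Tens Z 1 1 bI)) (Comp (Tens Z 2 2 bI2) aAmalg)"
    unfolding cup_bend_def by (rule comp_congL, rule tens_I_tens_I) (simp_all add: t)
  also have "abeq \<delta> 0 2 \<dots> (Tens Z 0 2 bcup)" using tens_I2_comp_aAmalg[OF t, of \<delta>, unfolded add_0]
    by simp
  also have "abeq \<delta> 0 2 \<dots> (Comp (Tens (aI 0) 0 2 bcup) Z)"
    using tens_cup_factor[OF t, of \<delta>, unfolded add_0] by simp
  also have "abeq \<delta> 0 2 \<dots> (Comp aAmalg Z)"
    unfolding aAmalg_def by (rule comp_congL, rule tens_cong[where r=0 and s=0, OF aI_0_eq_Pole])
        (simp_all add: t)
  finally show ?thesis .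
qed

definition "aY \<delta> = Add aH02 (aH12 \<delta>)"
definition "aE = Comp aAmalg aPi"
definition "aPhi01 \<delta> = Tens (aPhi \<delta>) 1 1 bI"
definition "aHpow01 m = Tens (apow HH m) 1 1 bI"

lemma atype_aY[simp]: "atype (aY \<delta>) = Some (2, 2)" by (simp add: aY_def)
lemma atype_aE[simp]: "atype aE = Some (2, 2)" by (simp add: aE_def)
lemma atype_aPhi01[simp]: "atype (aPhi01 \<delta>) = Some (2, 2)" by (simp add: aPhi01_def)
lemma atype_aHpow01[simp]: "atype (aHpow01 m) = Some (2, 2)" by (simp add: aHpow01_def)

lemma aX0_aX0: "abeq \<delta> 2 2 (Comp aX0 aX0) (aI 2)"
  unfolding aX0_def aI_2 by (rule Pole_tens_comp, rule bcomp_X_X)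
lemma aPi_aX0: "abeq \<delta> 2 0 (Comp aPi aX0) aPi"
  unfolding aX0_def aPi_def by (rule Pole_tens_comp, rule bcomp_cap_X)
lemma aX0_aAmalg: "abeq \<delta> 0 2 (Comp aX0 aAmalg) aAmalg"
  unfolding aX0_def aAmalg_def by (rule Pole_tens_comp, rule bcomp_X_cup)
lemma aPi_aAmalg: "abeq \<delta> 0 0 (Comp aPi aAmalg) (Smul \<delta> Pole)"
proof -
  have "abeq \<delta> 0 0 (Comp aPi aAmalg) (Tens Pole 0 0 (\<lambda>d. \<delta> * bbasis {} d))"
    unfolding aPi_def aAmalg_def by (rule Pole_tens_comp, rule bcomp_cap_cup)
  also have "abeq \<delta> 0 0 \<dots> (Smul \<delta> (Tens Pole 0 0 (bbasis {})))"
    using ab_tens_bsmul[of Pole 0 0 \<delta> 0 0 \<delta> "bbasis {}"] by (simp add: wt_iff_atype)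
  also have "abeq \<delta> 0 0 \<dots> (Smul \<delta> Pole)" by (rule ab_smul_cong, rule tens_unit) simp
  finally show ?thesis .
qed

lemma aH12_eq: "abeq \<delta> 2 2 (aH12 \<delta>) (asub aX0 aE)"
proof -
  define B' where "B' = (\<lambda>d. (-1) * bcomp \<delta> 2 0 2 bcup bcap d)"
  have f: "bH \<delta> = (\<lambda>d. bX d + B' d)" by (simp add: bH_def B'_def fun_eq_iff)
  have 1: "abeq \<delta> (0 + 2) (0 + 2) (Tens Pole 2 2 (\<lambda>d. bX d + B' d)) (Add (Tens Pole 2 2 bX)
      (Tens Pole 2 2 B'))"
    by (rule ab_tens_badd) (simp add: wt_iff_atype)
  have 2: "abeq \<delta> (0 + 2) (0 + 2) (Tens Pole 2 2 B') (Smul (-1) (Tens Pole 2 2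
      (bcomp \<delta> 2 0 2 bcup bcap)))"
    unfolding B'_def by (rule ab_tens_bsmul) (simp add: wt_iff_atype)
  have "abeq \<delta> 2 2 (aH12 \<delta>) (Add (Tens Pole 2 2 bX) (Tens Pole 2 2 B'))"
    unfolding aH12_def f using 1 by (simp only: add_0)
  also have "abeq \<delta> 2 2 \<dots> (Add aX0 (Smul (-1) (Tens Pole 2 2 (bcomp \<delta> 2 0 2 bcup bcap))))"
    unfolding aX0_def using 2 by (intro add_congR) (simp_all only: add_0, simp)
  also have "abeq \<delta> 2 2 \<dots> (asub aX0 aE)"
    unfolding asub_def aE_def aAmalg_def aPi_def
    by (rule add_congR, rule ab_smul_cong, rule ab_sym, rule Pole_tens_comp) simp_all
  finally show ?thesis .
qed

lemma aX0_aE: "abeq \<delta> 2 2 (Comp aX0 aE) aE"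
proof -
  have "abeq \<delta> 2 2 (Comp aX0 aE) (Comp (Comp aX0 aAmalg) aPi)"
    unfolding aE_def by (rule ab_sym, rule comp_assoc) simp_all
  also have "abeq \<delta> 2 2 \<dots> aE" unfolding aE_def by (rule comp_congL[OF aX0_aAmalg]) simp
  finally show ?thesis .
qed

lemma aE_aX0: "abeq \<delta> 2 2 (Comp aE aX0) aE"
proof -
  have "abeq \<delta> 2 2 (Comp aE aX0) (Comp aAmalg (Comp aPi aX0))"
    unfolding aE_def by (rule comp_assoc) simp_all
  also have "abeq \<delta> 2 2 \<dots> aE" unfolding aE_def by (rule comp_congR[OF aPi_aX0]) simp
  finally show ?thesis .
qed

lemma aPi_aE: "abeq \<delta> 2 0 (Comp aPi aE) (Smul \<delta> aPi)"
proof -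
  have "abeq \<delta> 2 0 (Comp aPi aE) (Comp (Comp aPi aAmalg) aPi)"
    unfolding aE_def by (rule ab_sym, rule comp_assoc) simp_all
  also have "abeq \<delta> 2 0 \<dots> (Comp (Smul \<delta> Pole) aPi)" by (rule comp_congL[OF aPi_aAmalg]) simp
  also have "abeq \<delta> 2 0 \<dots> (Smul \<delta> (Comp Pole aPi))" by (rule comp_Smul_left) simp_all
  also have "abeq \<delta> 2 0 \<dots> (Smul \<delta> aPi)" by (rule ab_smul_cong, rule comp_Pole_left) simp
  finally show ?thesis .
qed

lemma aE_aAmalg: "abeq \<delta> 0 2 (Comp aE aAmalg) (Smul \<delta> aAmalg)"
proof -
  have "abeq \<delta> 0 2 (Comp aE aAmalg) (Comp aAmalg (Comp aPi aAmalg))"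
    unfolding aE_def by (rule comp_assoc) simp_all
  also have "abeq \<delta> 0 2 \<dots> (Comp aAmalg (Smul \<delta> Pole))" by (rule comp_congR[OF aPi_aAmalg]) simp
  also have "abeq \<delta> 0 2 \<dots> (Smul \<delta> (Comp aAmalg Pole))" by (rule comp_Smul_right) simp_all
  also have "abeq \<delta> 0 2 \<dots> (Smul \<delta> aAmalg)" by (rule ab_smul_cong, rule comp_Pole_right) simp
  finally show ?thesis .
qed

lemma aH01_aX0: "abeq \<delta> 2 2 (Comp aH01 aX0) (asub (Comp aX0 (aY \<delta>)) (asub (aI 2) aE))"
proof -
  have "abeq \<delta> 2 2 (Comp aX0 (aY \<delta>)) (Add (Comp aX0 aH02) (Comp aX0 (aH12 \<delta>)))"
    unfolding aY_def by (rule comp_Add_right) simp_all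
  also have "abeq \<delta> 2 2 \<dots> (Add (Comp aH01 aX0) (asub (aI 2) aE))"
  proof (rule ab_add_cong)
    have "abeq \<delta> 2 2 (Comp aX0 aH02) (Comp (Comp aX0 aX0) (Comp aH01 aX0))"
      unfolding aH02_def by (rule ab_sym, rule comp_assoc) simp_all
    also have "abeq \<delta> 2 2 \<dots> (Comp (aI 2) (Comp aH01 aX0))" by (rule comp_congL[OF aX0_aX0]) simp
    also have "abeq \<delta> 2 2 \<dots> (Comp aH01 aX0)" by (rule comp_aI_left) simp
    finally show "abeq \<delta> 2 2 (Comp aX0 aH02) (Comp aH01 aX0)" .
    have "abeq \<delta> 2 2 (Comp aX0 (aH12 \<delta>)) (Comp aX0 (asub aX0 aE))" by (rule comp_congR[OF aH12_eq]) simp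
    also have "abeq \<delta> 2 2 \<dots> (asub (Comp aX0 aX0) (Comp aX0 aE))" by (rule comp_asub_right) simp_all
    also have "abeq \<delta> 2 2 \<dots> (asub (aI 2) aE)" by (rule asub_cong[OF aX0_aX0 aX0_aE])
    finally show "abeq \<delta> 2 2 (Comp aX0 (aH12 \<delta>)) (asub (aI 2) aE)" .
  qed
  finally have sy: "abeq \<delta> 2 2 (Comp aX0 (aY \<delta>)) (Add (Comp aH01 aX0) (asub (aI 2) aE))" .
  have "abeq \<delta> 2 2 (asub (Comp aX0 (aY \<delta>)) (asub (aI 2) aE)) (asub (Add (Comp aH01 aX0) (asub
      (aI 2) aE)) (asub (aI 2) aE))"
    by (rule asub_cong[OF sy], rule abeq_refl) simp
  also have "abeq \<delta> 2 2 \<dots> (Comp aH01 aX0)"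
    by (rule abeq_by_lin_coeff) (simp_all add: asub_def fun_eq_iff algebra_simps)
  finally show ?thesis by (rule ab_sym)
qed

lemma aX0_aH01: "abeq \<delta> 2 2 (Comp aX0 aH01) (asub (Comp (aY \<delta>) aX0) (asub (aI 2) aE))"
proof -
  have "abeq \<delta> 2 2 (Comp (aY \<delta>) aX0) (Add (Comp aH02 aX0) (Comp (aH12 \<delta>) aX0))"
    unfolding aY_def by (rule comp_Add_left) simp_all
  also have "abeq \<delta> 2 2 \<dots> (Add (Comp aX0 aH01) (asub (aI 2) aE))"
  proof (rule ab_add_cong)
    have "abeq \<delta> 2 2 (Comp aH02 aX0) (Comp aX0 (Comp (Comp aH01 aX0) aX0))"
      unfolding aH02_def by (rule comp_assoc) simp_all
    also have "abeq \<delta> 2 2 \<dots> (Comp aX0 (Comp aH01 (Comp aX0 aX0)))"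
      by (rule comp_congR, rule comp_assoc) simp_all
    also have "abeq \<delta> 2 2 \<dots> (Comp aX0 (Comp aH01 (aI 2)))"
      by (rule comp_congR, rule comp_congR[OF aX0_aX0]) simp_all
    also have "abeq \<delta> 2 2 \<dots> (Comp aX0 aH01)" by (rule comp_congR, rule comp_aI_right) simp_all
    finally show "abeq \<delta> 2 2 (Comp aH02 aX0) (Comp aX0 aH01)" .
    have "abeq \<delta> 2 2 (Comp (aH12 \<delta>) aX0) (Comp (asub aX0 aE) aX0)" by (rule comp_congL[OF aH12_eq]) simp
    also have "abeq \<delta> 2 2 \<dots> (asub (Comp aX0 aX0) (Comp aE aX0))" by (rule comp_asub_left) simp_all
    also have "abeq \<delta> 2 2 \<dots> (asub (aI 2) aE)" by (rule asub_cong[OF aX0_aX0 aE_aX0])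
    finally show "abeq \<delta> 2 2 (Comp (aH12 \<delta>) aX0) (asub (aI 2) aE)" .
  qed
  finally have sy: "abeq \<delta> 2 2 (Comp (aY \<delta>) aX0) (Add (Comp aX0 aH01) (asub (aI 2) aE))" .
  have "abeq \<delta> 2 2 (asub (Comp (aY \<delta>) aX0) (asub (aI 2) aE)) (asub (Add (Comp aX0 aH01) (asub
      (aI 2) aE)) (asub (aI 2) aE))"
    by (rule asub_cong[OF sy], rule abeq_refl) simp
  also have "abeq \<delta> 2 2 \<dots> (Comp aX0 aH01)"
    by (rule abeq_by_lin_coeff) (simp_all add: asub_def fun_eq_iff algebra_simps)
  finally show ?thesis by (rule ab_sym)
qed

lemma aH01_aY: "abeq \<delta> 2 2 (Comp aH01 (aY \<delta>)) (Comp (aY \<delta>) aH01)"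
  unfolding aY_def by (rule ab_rel_ii)

lemma aPhi01_eq: "abeq \<delta> 2 2 (aPhi01 \<delta>) (asub (Smul (1 - \<delta>) (aI 2)) aH01)"
proof -
  have "abeq \<delta> 2 2 (aPhi01 \<delta>) (asub (Tens (Smul (1 - \<delta>) (aI 1)) 1 1 bI) (Tens HH 1 1 bI))"
    unfolding aPhi01_def aPhi_def using tens_I_asub[of "Smul (1 - \<delta>) (aI 1)" 1 1 HH] by simp
  also have "abeq \<delta> 2 2 \<dots> (asub (Smul (1 - \<delta>) (aI 2)) aH01)"
    unfolding aH01_def
  proof (rule asub_cong)
    have "abeq \<delta> 2 2 (Tens (Smul (1 - \<delta>) (aI 1)) 1 1 bI) (Smul (1 - \<delta>) (Tens (aI 1) 1 1 bI))"
      using tens_I_Smul[of "aI 1" 1 1 \<delta> "1 - \<delta>"] by simp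
    also have "abeq \<delta> 2 2 \<dots> (Smul (1 - \<delta>) (aI 2))" by (rule ab_smul_cong[OF aI_1_tens_I])
    finally show "abeq \<delta> 2 2 (Tens (Smul (1 - \<delta>) (aI 1)) 1 1 bI) (Smul (1 - \<delta>) (aI 2))" .
  qed (rule abeq_refl, simp)
  finally show ?thesis .
qed

lemma aPhi01_aY: "abeq \<delta> 2 2 (Comp (aPhi01 \<delta>) (aY \<delta>)) (Comp (aY \<delta>) (aPhi01 \<delta>))"
proof -
  have "abeq \<delta> 2 2 (Comp (aPhi01 \<delta>) (aY \<delta>)) (Comp (asub (Smul (1 - \<delta>) (aI 2)) aH01) (aY \<delta>))"
    by (rule comp_congL[OF aPhi01_eq]) simp
  also have "abeq \<delta> 2 2 \<dots> (asub (Comp (Smul (1 - \<delta>) (aI 2)) (aY \<delta>)) (Comp aH01 (aY \<delta>)))"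
    by (rule comp_asub_left) simp_all
  also have "abeq \<delta> 2 2 \<dots> (asub (Smul (1 - \<delta>) (aY \<delta>)) (Comp (aY \<delta>) aH01))"
  proof (rule asub_cong[OF _ aH01_aY])
    have "abeq \<delta> 2 2 (Comp (Smul (1 - \<delta>) (aI 2)) (aY \<delta>)) (Smul (1 - \<delta>) (Comp (aI 2) (aY \<delta>)))"
      by (rule comp_Smul_left) simp_all
    also have "abeq \<delta> 2 2 \<dots> (Smul (1 - \<delta>) (aY \<delta>))" by (rule ab_smul_cong, rule comp_aI_left) simp
    finally show "abeq \<delta> 2 2 (Comp (Smul (1 - \<delta>) (aI 2)) (aY \<delta>)) (Smul (1 - \<delta>) (aY \<delta>))" .
  qed
  also have "abeq \<delta> 2 2 \<dots> (asub (Comp (aY \<delta>) (Smul (1 - \<delta>) (aI 2))) (Comp (aY \<delta>) aH01))"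
  proof (rule asub_cong[OF _ abeq_refl])
    have "abeq \<delta> 2 2 (Comp (aY \<delta>) (Smul (1 - \<delta>) (aI 2))) (Smul (1 - \<delta>) (Comp (aY \<delta>) (aI 2)))"
      by (rule comp_Smul_right) simp_all
    also have "abeq \<delta> 2 2 \<dots> (Smul (1 - \<delta>) (aY \<delta>))" by (rule ab_smul_cong, rule comp_aI_right) simp
    finally show "abeq \<delta> 2 2 (Smul (1 - \<delta>) (aY \<delta>)) (Comp (aY \<delta>) (Smul (1 - \<delta>) (aI 2)))" by (rule ab_sym)
  qed simp
  also have "abeq \<delta> 2 2 \<dots> (Comp (aY \<delta>) (asub (Smul (1 - \<delta>) (aI 2)) aH01))"
    by (rule ab_sym, rule comp_asub_right) simp_all
  also have "abeq \<delta> 2 2 \<dots> (Comp (aY \<delta>) (aPhi01 \<delta>))"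
    by (rule comp_congR[OF ab_sym[OF aPhi01_eq]]) simp
  finally show ?thesis .
qed

lemma cap_bend_apow_HH: "cap_bend (apow HH m) = Comp aPi (aHpow01 m)"
  by (simp add: cap_bend_def aHpow01_def)
lemma cup_bend_apow_HH: "cup_bend (apow HH m) = Comp (aHpow01 m) aAmalg"
  by (simp add: cup_bend_def aHpow01_def)
lemma aZ_eq: "aZ m = Comp aPi (Comp (aHpow01 m) aAmalg)" by (simp add: aZ_def aHpow01_def)

text \<open>Relation (iii), bent along a cap or a cup.\<close>

lemma aPi_aH01_aX0: "abeq \<delta> 2 0 (Comp aPi (Comp aH01 aX0)) (Smul (-1) (Comp aPi aH01))"
proof -
  have t: "atype (Comp aPi (Comp aH01 aX0)) = Some (2, 0)" by simp
  have "abeq \<delta> 2 0 (Comp aPi (Comp aH01 aX0)) (cap_bend (cap_unbend (Comp aPi (Comp aH01 aX0))))"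
    by (rule ab_sym, rule cap_bend_unbend[OF t])
  also have "abeq \<delta> 2 0 \<dots> (cap_bend (atransp HH))"
    by (rule cap_bend_cong, rule ab_sym) (use atransp_eq_cap_unbend[of HH \<delta>] in \<open>simp add: aH01_def\<close>)
  also have "abeq \<delta> 2 0 \<dots> (cap_bend (Smul (-1) HH))" by (rule cap_bend_cong, rule ab_rel_iii)
  also have "abeq \<delta> 2 0 \<dots> (Smul (-1) (Comp aPi aH01))" unfolding cap_bend_HH[symmetric]
    by (rule cap_bend_Smul) simp
  finally show ?thesis .
qed

lemma aX0_aH01_aAmalg: "abeq \<delta> 0 2 (Comp aX0 (Comp aH01 aAmalg)) (Smul (-1) (Comp aH01 aAmalg))"
proof -
  have t: "atype (Comp aX0 (Comp aH01 aAmalg)) = Some (0, 2)" by simp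
  have "abeq \<delta> 0 2 (Comp aX0 (Comp aH01 aAmalg)) (cup_bend (cup_unbend (Comp aX0 (Comp aH01 aAmalg))))"
    by (rule ab_sym, rule cup_bend_unbend[OF t])
  also have "abeq \<delta> 0 2 \<dots> (cup_bend (atransp HH))"
    by (rule cup_bend_cong, rule ab_sym) (use atransp_eq_cup_unbend[of HH \<delta>] in \<open>simp add: aH01_def\<close>)
  also have "abeq \<delta> 0 2 \<dots> (cup_bend (Smul (-1) HH))" by (rule cup_bend_cong, rule ab_rel_iii)
  also have "abeq \<delta> 0 2 \<dots> (Smul (-1) (Comp aH01 aAmalg))" unfolding cup_bend_HH[symmetric]
    by (rule cup_bend_Smul) simp
  finally show ?thesis .
qed

text \<open>Bending turns \<open>Y\<close> into \<open>\<Phi>\<close>: \<open>\<Pi> H\<^sub>0\<^sub>2 = -\<Pi> H\<^sub>0\<^sub>1\<close> by (iii), and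
  \<open>\<Pi> H\<^sub>1\<^sub>2 = \<Pi> X\<^sub>0 - \<Pi> \<amalg>\<Pi> = (1 - \<delta>) \<Pi>\<close>.\<close>

lemma aPi_aY: "abeq \<delta> 2 0 (Comp aPi (aY \<delta>)) (Comp aPi (aPhi01 \<delta>))"
proof -
  have "abeq \<delta> 2 0 (Comp aPi (aY \<delta>)) (Add (Comp aPi aH02) (Comp aPi (aH12 \<delta>)))"
    unfolding aY_def by (rule comp_Add_right) simp_all
  also have "abeq \<delta> 2 0 \<dots> (Add (Smul (-1) (Comp aPi aH01)) (asub aPi (Smul \<delta> aPi)))"
  proof (rule ab_add_cong)
    have "abeq \<delta> 2 0 (Comp aPi aH02) (Comp (Comp aPi aX0) (Comp aH01 aX0))"
      unfolding aH02_def by (rule ab_sym, rule comp_assoc) simp_all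
    also have "abeq \<delta> 2 0 \<dots> (Comp aPi (Comp aH01 aX0))" by (rule comp_congL[OF aPi_aX0]) simp
    also have "abeq \<delta> 2 0 \<dots> (Smul (-1) (Comp aPi aH01))" by (rule aPi_aH01_aX0)
    finally show "abeq \<delta> 2 0 (Comp aPi aH02) (Smul (-1) (Comp aPi aH01))" .
    have "abeq \<delta> 2 0 (Comp aPi (aH12 \<delta>)) (Comp aPi (asub aX0 aE))" by (rule comp_congR[OF aH12_eq]) simp
    also have "abeq \<delta> 2 0 \<dots> (asub (Comp aPi aX0) (Comp aPi aE))" by (rule comp_asub_right) simp_all
    also have "abeq \<delta> 2 0 \<dots> (asub aPi (Smul \<delta> aPi))" by (rule asub_cong[OF aPi_aX0 aPi_aE])
    finally show "abeq \<delta> 2 0 (Comp aPi (aH12 \<delta>)) (asub aPi (Smul \<delta> aPi))" .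
  qed
  also have "abeq \<delta> 2 0 \<dots> (asub (Smul (1 - \<delta>) aPi) (Comp aPi aH01))"
    by (rule abeq_by_lin_coeff) (simp_all add: asub_def fun_eq_iff algebra_simps)
  also have "abeq \<delta> 2 0 \<dots> (asub (Comp aPi (Smul (1 - \<delta>) (aI 2))) (Comp aPi aH01))"
  proof (rule asub_cong[OF _ abeq_refl])
    have "abeq \<delta> 2 0 (Comp aPi (Smul (1 - \<delta>) (aI 2))) (Smul (1 - \<delta>) (Comp aPi (aI 2)))"
      by (rule comp_Smul_right) simp_all
    also have "abeq \<delta> 2 0 \<dots> (Smul (1 - \<delta>) aPi)" by (rule ab_smul_cong, rule comp_aI_right) simp
    finally show "abeq \<delta> 2 0 (Smul (1 - \<delta>) aPi) (Comp aPi (Smul (1 - \<delta>) (aI 2)))" by (rule ab_sym)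
  qed simp
  also have "abeq \<delta> 2 0 \<dots> (Comp aPi (asub (Smul (1 - \<delta>) (aI 2)) aH01))"
    by (rule ab_sym, rule comp_asub_right) simp_all
  also have "abeq \<delta> 2 0 \<dots> (Comp aPi (aPhi01 \<delta>))" by (rule comp_congR[OF ab_sym[OF aPhi01_eq]]) simp
  finally show ?thesis .
qed

lemma aY_aAmalg: "abeq \<delta> 0 2 (Comp (aY \<delta>) aAmalg) (Comp (aPhi01 \<delta>) aAmalg)"
proof -
  have "abeq \<delta> 0 2 (Comp (aY \<delta>) aAmalg) (Add (Comp aH02 aAmalg) (Comp (aH12 \<delta>) aAmalg))"
    unfolding aY_def by (rule comp_Add_left) simp_all
  also have "abeq \<delta> 0 2 \<dots> (Add (Smul (-1) (Comp aH01 aAmalg)) (asub aAmalg (Smul \<delta> aAmalg)))"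
  proof (rule ab_add_cong)
    have "abeq \<delta> 0 2 (Comp aH02 aAmalg) (Comp aX0 (Comp (Comp aH01 aX0) aAmalg))"
      unfolding aH02_def by (rule comp_assoc) simp_all
    also have "abeq \<delta> 0 2 \<dots> (Comp aX0 (Comp aH01 (Comp aX0 aAmalg)))"
      by (rule comp_congR, rule comp_assoc) simp_all
    also have "abeq \<delta> 0 2 \<dots> (Comp aX0 (Comp aH01 aAmalg))"
      by (rule comp_congR, rule comp_congR[OF aX0_aAmalg]) simp_all
    also have "abeq \<delta> 0 2 \<dots> (Smul (-1) (Comp aH01 aAmalg))" by (rule aX0_aH01_aAmalg)
    finally show "abeq \<delta> 0 2 (Comp aH02 aAmalg) (Smul (-1) (Comp aH01 aAmalg))" .
    have "abeq \<delta> 0 2 (Comp (aH12 \<delta>) aAmalg) (Comp (asub aX0 aE) aAmalg)"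
      by (rule comp_congL[OF aH12_eq]) simp
    also have "abeq \<delta> 0 2 \<dots> (asub (Comp aX0 aAmalg) (Comp aE aAmalg))" by (rule comp_asub_left) simp_all
    also have "abeq \<delta> 0 2 \<dots> (asub aAmalg (Smul \<delta> aAmalg))" by (rule asub_cong[OF aX0_aAmalg aE_aAmalg])
    finally show "abeq \<delta> 0 2 (Comp (aH12 \<delta>) aAmalg) (asub aAmalg (Smul \<delta> aAmalg))" .
  qed
  also have "abeq \<delta> 0 2 \<dots> (asub (Smul (1 - \<delta>) aAmalg) (Comp aH01 aAmalg))"
    by (rule abeq_by_lin_coeff) (simp_all add: asub_def fun_eq_iff algebra_simps)
  also have "abeq \<delta> 0 2 \<dots> (asub (Comp (Smul (1 - \<delta>) (aI 2)) aAmalg) (Comp aH01 aAmalg))"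
  proof (rule asub_cong[OF _ abeq_refl])
    have "abeq \<delta> 0 2 (Comp (Smul (1 - \<delta>) (aI 2)) aAmalg) (Smul (1 - \<delta>) (Comp (aI 2) aAmalg))"
      by (rule comp_Smul_left) simp_all
    also have "abeq \<delta> 0 2 \<dots> (Smul (1 - \<delta>) aAmalg)" by (rule ab_smul_cong, rule comp_aI_left) simp
    finally show "abeq \<delta> 0 2 (Smul (1 - \<delta>) aAmalg) (Comp (Smul (1 - \<delta>) (aI 2)) aAmalg)" by (rule ab_sym)
  qed simp
  also have "abeq \<delta> 0 2 \<dots> (Comp (asub (Smul (1 - \<delta>) (aI 2)) aH01) aAmalg)"
    by (rule ab_sym, rule comp_asub_left) simp_all
  also have "abeq \<delta> 0 2 \<dots> (Comp (aPhi01 \<delta>) aAmalg)" by (rule comp_congL[OF ab_sym[OF aPhi01_eq]]) simp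
  finally show ?thesis .
qed

lemma aHpow01_0: "abeq \<delta> 2 2 (aHpow01 0) (aI 2)"
  unfolding aHpow01_def apow_0 by (rule aI_1_tens_I)

lemma aHpow01_Suc: "abeq \<delta> 2 2 (aHpow01 (Suc m)) (Comp aH01 (aHpow01 m))"
  unfolding aHpow01_def apow_Suc aH01_def by (rule tens_I_comp) simp_all

lemma apow_Suc': "atype D = Some (1, 1) \<Longrightarrow> abeq \<delta> 1 1 (apow D (Suc n)) (Comp (apow D n) D)"
proof (induction n)
  case 0
  have "abeq \<delta> 1 1 (Comp D (aI 1)) D" by (rule comp_aI_right) (simp add: 0)
  also have "abeq \<delta> 1 1 D (Comp (aI 1) D)" by (rule ab_sym, rule comp_aI_left) (simp add: 0)
  finally show ?case by (simp add: apow_0 apow_Suc)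
next
  case (Suc n)
  have "abeq \<delta> 1 1 (apow D (Suc (Suc n))) (Comp D (Comp (apow D n) D))"
    unfolding apow_Suc[of D "Suc n"] by (rule comp_congR) (use Suc in simp_all)
  also have "abeq \<delta> 1 1 \<dots> (Comp (Comp D (apow D n)) D)"
    by (rule ab_sym, rule comp_assoc) (simp_all add: Suc)
  finally show ?case by (simp add: apow_Suc)
qed

lemma aHpow01_Suc': "abeq \<delta> 2 2 (aHpow01 (Suc m)) (Comp (aHpow01 m) aH01)"
proof -
  have "abeq \<delta> 2 2 (aHpow01 (Suc m)) (Tens (Comp (apow HH m) HH) 1 1 bI)"
    unfolding aHpow01_def by (rule tens_cong[where r=1 and s=1], rule apow_Suc') simp_all
  also have "abeq \<delta> 2 2 \<dots> (Comp (aHpow01 m) aH01)" unfolding aHpow01_def aH01_def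
    by (rule tens_I_comp) simp_all
  finally show ?thesis .
qed

lemma aHpow01_aY: "abeq \<delta> 2 2 (Comp (aHpow01 m) (aY \<delta>)) (Comp (aY \<delta>) (aHpow01 m))"
proof (induction m)
  case 0
  have "abeq \<delta> 2 2 (Comp (aHpow01 0) (aY \<delta>)) (Comp (aI 2) (aY \<delta>))"
    by (rule comp_congL[OF aHpow01_0]) simp
  also have "abeq \<delta> 2 2 \<dots> (aY \<delta>)" by (rule comp_aI_left) simp
  also have "abeq \<delta> 2 2 \<dots> (Comp (aY \<delta>) (aI 2))" by (rule ab_sym, rule comp_aI_right) simp
  also have "abeq \<delta> 2 2 \<dots> (Comp (aY \<delta>) (aHpow01 0))" by (rule comp_congR[OF ab_sym[OF aHpow01_0]]) simp
  finally show ?case .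
next
  case (Suc m)
  have "abeq \<delta> 2 2 (Comp (aHpow01 (Suc m)) (aY \<delta>)) (Comp (Comp aH01 (aHpow01 m)) (aY \<delta>))"
    by (rule comp_congL[OF aHpow01_Suc]) simp
  also have "abeq \<delta> 2 2 \<dots> (Comp aH01 (Comp (aHpow01 m) (aY \<delta>)))" by (rule comp_assoc) simp_all
  also have "abeq \<delta> 2 2 \<dots> (Comp aH01 (Comp (aY \<delta>) (aHpow01 m)))" by (rule comp_congR[OF Suc]) simp
  also have "abeq \<delta> 2 2 \<dots> (Comp (Comp aH01 (aY \<delta>)) (aHpow01 m))"
    by (rule ab_sym, rule comp_assoc) simp_all
  also have "abeq \<delta> 2 2 \<dots> (Comp (Comp (aY \<delta>) aH01) (aHpow01 m))" by (rule comp_congL[OF aH01_aY]) simp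
  also have "abeq \<delta> 2 2 \<dots> (Comp (aY \<delta>) (Comp aH01 (aHpow01 m)))" by (rule comp_assoc) simp_all
  also have "abeq \<delta> 2 2 \<dots> (Comp (aY \<delta>) (aHpow01 (Suc m)))"
    by (rule comp_congR[OF ab_sym[OF aHpow01_Suc]]) simp
  finally show ?case .
qed

definition commute :: "'k::comm_ring_1 \<Rightarrow> 'k abt \<Rightarrow> 'k abt \<Rightarrow> bool" where
  "commute \<delta> A B \<longleftrightarrow> abeq \<delta> 1 1 (Comp A B) (Comp B A)"

lemma commute_sym: "commute \<delta> A B \<Longrightarrow> commute \<delta> B A"
  unfolding commute_def by (rule ab_sym)

lemma commute_apow: "atype A = Some (1, 1) \<Longrightarrow> atype B = Some (1, 1) \<Longrightarrow> commute \<delta> A B \<Longrightarrow>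
  commute \<delta> (apow A n) B"
proof (induction n)
  case 0
  have "abeq \<delta> 1 1 (Comp (aI 1) B) B" by (rule comp_aI_left) (simp add: 0)
  also have "abeq \<delta> 1 1 B (Comp B (aI 1))" by (rule ab_sym, rule comp_aI_right) (simp add: 0)
  finally show ?case by (simp add: commute_def apow_0)
next
  case (Suc n)
  note t = Suc.prems(1,2)
  have c: "abeq \<delta> 1 1 (Comp (apow A n) B) (Comp B (apow A n))" using Suc by (simp add: commute_def)
  have c1: "abeq \<delta> 1 1 (Comp A B) (Comp B A)" using Suc.prems(3) by (simp add: commute_def)
  have "abeq \<delta> 1 1 (Comp (Comp A (apow A n)) B) (Comp A (Comp (apow A n) B))"
    by (rule comp_assoc) (simp_all add: t)
  also have "abeq \<delta> 1 1 \<dots> (Comp A (Comp B (apow A n)))" by (rule comp_congR[OF c]) (simp add: t)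
  also have "abeq \<delta> 1 1 \<dots> (Comp (Comp A B) (apow A n))"
    by (rule ab_sym, rule comp_assoc) (simp_all add: t)
  also have "abeq \<delta> 1 1 \<dots> (Comp (Comp B A) (apow A n))" by (rule comp_congL[OF c1]) (simp add: t)
  also have "abeq \<delta> 1 1 \<dots> (Comp B (Comp A (apow A n)))" by (rule comp_assoc) (simp_all add: t)
  finally show ?case by (simp add: commute_def apow_Suc)
qed

lemma commute_HH_aPhi: "commute \<delta> HH (aPhi \<delta>)"
proof -
  have "abeq \<delta> 1 1 (Comp HH (aPhi \<delta>)) (asub (Comp HH (Smul (1 - \<delta>) (aI 1))) (Comp HH HH))"
    unfolding aPhi_def by (rule comp_asub_right) simp_all
  also have "abeq \<delta> 1 1 \<dots> (asub (Smul (1 - \<delta>) HH) (Comp HH HH))"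
  proof (rule asub_cong[OF _ abeq_refl])
    have "abeq \<delta> 1 1 (Comp HH (Smul (1 - \<delta>) (aI 1))) (Smul (1 - \<delta>) (Comp HH (aI 1)))"
      by (rule comp_Smul_right) simp_all
    also have "abeq \<delta> 1 1 \<dots> (Smul (1 - \<delta>) HH)" by (rule ab_smul_cong, rule comp_aI_right) simp
    finally show "abeq \<delta> 1 1 (Comp HH (Smul (1 - \<delta>) (aI 1))) (Smul (1 - \<delta>) HH)" .
  qed simp
  also have "abeq \<delta> 1 1 \<dots> (asub (Comp (Smul (1 - \<delta>) (aI 1)) HH) (Comp HH HH))"
  proof (rule asub_cong[OF _ abeq_refl])
    have "abeq \<delta> 1 1 (Comp (Smul (1 - \<delta>) (aI 1)) HH) (Smul (1 - \<delta>) (Comp (aI 1) HH))"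
      by (rule comp_Smul_left) simp_all
    also have "abeq \<delta> 1 1 \<dots> (Smul (1 - \<delta>) HH)" by (rule ab_smul_cong, rule comp_aI_left) simp
    finally show "abeq \<delta> 1 1 (Smul (1 - \<delta>) HH) (Comp (Smul (1 - \<delta>) (aI 1)) HH)" by (rule ab_sym)
  qed simp
  also have "abeq \<delta> 1 1 \<dots> (Comp (aPhi \<delta>) HH)" unfolding aPhi_def
    by (rule ab_sym, rule comp_asub_left) simp_all
  finally show ?thesis by (simp add: commute_def)
qed

lemma commute_apow_HH_apow_aPhi: "commute \<delta> (apow HH i) (apow (aPhi \<delta>) k)"
proof -
  have "commute \<delta> (apow (aPhi \<delta>) k) HH" by (rule commute_apow, simp, simp, rule commute_sym[OF
      commute_HH_aPhi])
  then have c: "commute \<delta> HH (apow (aPhi \<delta>) k)" by (rule commute_sym)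
  show ?thesis by (rule commute_apow[OF _ _ c]) simp_all
qed

lemma commuteD: "commute \<delta> A B \<Longrightarrow> abeq \<delta> 1 1 (Comp A B) (Comp B A)" by (simp add: commute_def)

section \<open>Intertwining \<open>\<Phi>\<close> and \<open>Y\<close>\<close>

text \<open>Bending intertwines right multiplication by \<open>\<Phi>\<close> with right multiplication by \<open>Y\<close>
  on all morphisms built from powers of \<open>H\<close> (which commute with \<open>Y\<close> by (ii)) and the
  central elements \<open>Z \<otimes> I\<close>.\<close>

definition cap_compat :: "'k::comm_ring_1 \<Rightarrow> 'k abt \<Rightarrow> bool" where
  "cap_compat \<delta> A \<longleftrightarrow> abeq \<delta> 2 0 (Comp (cap_bend A) (aY \<delta>)) (cap_bend (Comp A (aPhi \<delta>)))"
definition cup_compat :: "'k::comm_ring_1 \<Rightarrow> 'k abt \<Rightarrow> bool" where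
  "cup_compat \<delta> A \<longleftrightarrow> abeq \<delta> 0 2 (Comp (aY \<delta>) (cup_bend A)) (cup_bend (Comp (aPhi \<delta>) A))"

lemma cap_compat_Add: "atype A = Some (1, 1) \<Longrightarrow> atype B = Some (1, 1) \<Longrightarrow> cap_compat \<delta> A \<Longrightarrow>
  cap_compat \<delta> B \<Longrightarrow> cap_compat \<delta> (Add A B)"
proof -
  assume t: "atype A = Some (1, 1)" "atype B = Some (1, 1)" and g: "cap_compat \<delta> A" "cap_compat \<delta> B"
  have "abeq \<delta> 2 0 (Comp (cap_bend (Add A B)) (aY \<delta>)) (Comp (Add (cap_bend A) (cap_bend B)) (aY \<delta>))"
    by (rule comp_congL[OF cap_bend_Add[OF t]]) simp
  also have "abeq \<delta> 2 0 \<dots> (Add (Comp (cap_bend A) (aY \<delta>)) (Comp (cap_bend B) (aY \<delta>)))"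
    by (rule comp_Add_left) (simp_all add: t)
  also have "abeq \<delta> 2 0 \<dots> (Add (cap_bend (Comp A (aPhi \<delta>))) (cap_bend (Comp B (aPhi \<delta>))))"
    using g by (intro ab_add_cong) (simp_all add: cap_compat_def)
  also have "abeq \<delta> 2 0 \<dots> (cap_bend (Add (Comp A (aPhi \<delta>)) (Comp B (aPhi \<delta>))))"
    by (rule ab_sym, rule cap_bend_Add) (simp_all add: t)
  also have "abeq \<delta> 2 0 \<dots> (cap_bend (Comp (Add A B) (aPhi \<delta>)))"
    by (rule cap_bend_cong, rule ab_sym, rule comp_Add_left) (simp_all add: t)
  finally show ?thesis by (simp add: cap_compat_def)
qed

lemma cap_compat_Smul: "atype A = Some (1, 1) \<Longrightarrow> cap_compat \<delta> A \<Longrightarrow> cap_compat \<delta> (Smul c A)"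
proof -
  assume t: "atype A = Some (1, 1)" and g: "cap_compat \<delta> A"
  have "abeq \<delta> 2 0 (Comp (cap_bend (Smul c A)) (aY \<delta>)) (Comp (Smul c (cap_bend A)) (aY \<delta>))"
    by (rule comp_congL[OF cap_bend_Smul[OF t]]) simp
  also have "abeq \<delta> 2 0 \<dots> (Smul c (Comp (cap_bend A) (aY \<delta>)))" by (rule comp_Smul_left) (simp_all add: t)
  also have "abeq \<delta> 2 0 \<dots> (Smul c (cap_bend (Comp A (aPhi \<delta>))))" using g
    by (intro ab_smul_cong) (simp add: cap_compat_def)
  also have "abeq \<delta> 2 0 \<dots> (cap_bend (Smul c (Comp A (aPhi \<delta>))))"
    by (rule ab_sym, rule cap_bend_Smul) (simp add: t)
  also have "abeq \<delta> 2 0 \<dots> (cap_bend (Comp (Smul c A) (aPhi \<delta>)))"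
    by (rule cap_bend_cong, rule ab_sym, rule comp_Smul_left) (simp_all add: t)
  finally show ?thesis by (simp add: cap_compat_def)
qed

lemma cap_compat_comp_aPhi: "atype A = Some (1, 1) \<Longrightarrow> cap_compat \<delta> A \<Longrightarrow> cap_compat \<delta> (Comp A (aPhi \<delta>))"
proof -
  assume t: "atype A = Some (1, 1)" and g: "cap_compat \<delta> A"
  have "abeq \<delta> 2 0 (Comp (cap_bend (Comp A (aPhi \<delta>))) (aY \<delta>)) (Comp (Comp (cap_bend A) (aPhi01 \<delta>))
      (aY \<delta>))"
    unfolding aPhi01_def by (rule comp_congL[OF cap_bend_Comp]) (simp_all add: t)
  also have "abeq \<delta> 2 0 \<dots> (Comp (cap_bend A) (Comp (aPhi01 \<delta>) (aY \<delta>)))"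
    by (rule comp_assoc) (simp_all add: t)
  also have "abeq \<delta> 2 0 \<dots> (Comp (cap_bend A) (Comp (aY \<delta>) (aPhi01 \<delta>)))"
    by (rule comp_congR[OF aPhi01_aY]) (simp add: t)
  also have "abeq \<delta> 2 0 \<dots> (Comp (Comp (cap_bend A) (aY \<delta>)) (aPhi01 \<delta>))"
    by (rule ab_sym, rule comp_assoc) (simp_all add: t)
  also have "abeq \<delta> 2 0 \<dots> (Comp (cap_bend (Comp A (aPhi \<delta>))) (aPhi01 \<delta>))" using g
    by (intro comp_congL) (simp_all add: cap_compat_def)
  also have "abeq \<delta> 2 0 \<dots> (cap_bend (Comp (Comp A (aPhi \<delta>)) (aPhi \<delta>)))"
    unfolding aPhi01_def by (rule ab_sym, rule cap_bend_Comp) (simp_all add: t)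
  finally show ?thesis by (simp add: cap_compat_def)
qed

lemma cap_compat_scalar: "atype Z = Some (0, 0) \<Longrightarrow> cap_compat \<delta> (Tens Z 1 1 bI)"
proof -
  assume t: "atype Z = Some (0, 0)"
  have "abeq \<delta> 2 0 (Comp (cap_bend (Tens Z 1 1 bI)) (aY \<delta>)) (Comp (Comp Z aPi) (aY \<delta>))"
    by (rule comp_congL[OF cap_bend_scalar[OF t]]) simp
  also have "abeq \<delta> 2 0 \<dots> (Comp Z (Comp aPi (aY \<delta>)))" by (rule comp_assoc) (simp_all add: t)
  also have "abeq \<delta> 2 0 \<dots> (Comp Z (Comp aPi (aPhi01 \<delta>)))" by (rule comp_congR[OF aPi_aY]) (simp add: t)
  also have "abeq \<delta> 2 0 \<dots> (Comp (Comp Z aPi) (aPhi01 \<delta>))"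
    by (rule ab_sym, rule comp_assoc) (simp_all add: t)
  also have "abeq \<delta> 2 0 \<dots> (Comp (cap_bend (Tens Z 1 1 bI)) (aPhi01 \<delta>))"
    by (rule comp_congL[OF ab_sym[OF cap_bend_scalar[OF t]]]) simp
  also have "abeq \<delta> 2 0 \<dots> (cap_bend (Comp (Tens Z 1 1 bI) (aPhi \<delta>)))"
    unfolding aPhi01_def by (rule ab_sym, rule cap_bend_Comp) (simp_all add: t)
  finally show ?thesis by (simp add: cap_compat_def)
qed

lemma cap_compat_apow_HH: "cap_compat \<delta> (apow HH i)"
proof -
  have "abeq \<delta> 2 0 (Comp (cap_bend (apow HH i)) (aY \<delta>)) (Comp (Comp aPi (aHpow01 i)) (aY \<delta>))"
    unfolding cap_bend_apow_HH by (rule abeq_refl) simp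
  also have "abeq \<delta> 2 0 \<dots> (Comp aPi (Comp (aHpow01 i) (aY \<delta>)))" by (rule comp_assoc) simp_all
  also have "abeq \<delta> 2 0 \<dots> (Comp aPi (Comp (aY \<delta>) (aHpow01 i)))" by (rule comp_congR[OF aHpow01_aY]) simp
  also have "abeq \<delta> 2 0 \<dots> (Comp (Comp aPi (aY \<delta>)) (aHpow01 i))"
    by (rule ab_sym, rule comp_assoc) simp_all
  also have "abeq \<delta> 2 0 \<dots> (Comp (Comp aPi (aPhi01 \<delta>)) (aHpow01 i))" by (rule comp_congL[OF aPi_aY]) simp
  also have "abeq \<delta> 2 0 \<dots> (cap_bend (Comp (aPhi \<delta>) (apow HH i)))"
  proof -
    have "abeq \<delta> 2 0 (cap_bend (Comp (aPhi \<delta>) (apow HH i))) (Comp (cap_bend (aPhi \<delta>)) (Tens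
        (apow HH i) 1 1 bI))"
      by (rule cap_bend_Comp) simp_all
    then show ?thesis unfolding cap_bend_def[of "aPhi \<delta>"] aPhi01_def aHpow01_def by (rule ab_sym)
  qed
  also have "abeq \<delta> 2 0 \<dots> (cap_bend (Comp (apow HH i) (aPhi \<delta>)))"
    by (rule cap_bend_cong, rule ab_sym, rule commuteD, rule commute_apow, simp, simp,
        rule commute_HH_aPhi)
  finally show ?thesis by (simp add: cap_compat_def)
qed

lemma cup_compat_Add: "atype A = Some (1, 1) \<Longrightarrow> atype B = Some (1, 1) \<Longrightarrow> cup_compat \<delta> A \<Longrightarrow>
  cup_compat \<delta> B \<Longrightarrow> cup_compat \<delta> (Add A B)"
proof -
  assume t: "atype A = Some (1, 1)" "atype B = Some (1, 1)" and g: "cup_compat \<delta> A" "cup_compat \<delta> B"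
  have "abeq \<delta> 0 2 (Comp (aY \<delta>) (cup_bend (Add A B))) (Comp (aY \<delta>) (Add (cup_bend A) (cup_bend B)))"
    by (rule comp_congR[OF cup_bend_Add[OF t]]) simp
  also have "abeq \<delta> 0 2 \<dots> (Add (Comp (aY \<delta>) (cup_bend A)) (Comp (aY \<delta>) (cup_bend B)))"
    by (rule comp_Add_right) (simp_all add: t)
  also have "abeq \<delta> 0 2 \<dots> (Add (cup_bend (Comp (aPhi \<delta>) A)) (cup_bend (Comp (aPhi \<delta>) B)))"
    using g by (intro ab_add_cong) (simp_all add: cup_compat_def)
  also have "abeq \<delta> 0 2 \<dots> (cup_bend (Add (Comp (aPhi \<delta>) A) (Comp (aPhi \<delta>) B)))"
    by (rule ab_sym, rule cup_bend_Add) (simp_all add: t)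
  also have "abeq \<delta> 0 2 \<dots> (cup_bend (Comp (aPhi \<delta>) (Add A B)))"
    by (rule cup_bend_cong, rule ab_sym, rule comp_Add_right) (simp_all add: t)
  finally show ?thesis by (simp add: cup_compat_def)
qed

lemma cup_compat_Smul: "atype A = Some (1, 1) \<Longrightarrow> cup_compat \<delta> A \<Longrightarrow> cup_compat \<delta> (Smul c A)"
proof -
  assume t: "atype A = Some (1, 1)" and g: "cup_compat \<delta> A"
  have "abeq \<delta> 0 2 (Comp (aY \<delta>) (cup_bend (Smul c A))) (Comp (aY \<delta>) (Smul c (cup_bend A)))"
    by (rule comp_congR[OF cup_bend_Smul[OF t]]) simp
  also have "abeq \<delta> 0 2 \<dots> (Smul c (Comp (aY \<delta>) (cup_bend A)))"
    by (rule comp_Smul_right) (simp_all add: t)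
  also have "abeq \<delta> 0 2 \<dots> (Smul c (cup_bend (Comp (aPhi \<delta>) A)))" using g
    by (intro ab_smul_cong) (simp add: cup_compat_def)
  also have "abeq \<delta> 0 2 \<dots> (cup_bend (Smul c (Comp (aPhi \<delta>) A)))"
    by (rule ab_sym, rule cup_bend_Smul) (simp add: t)
  also have "abeq \<delta> 0 2 \<dots> (cup_bend (Comp (aPhi \<delta>) (Smul c A)))"
    by (rule cup_bend_cong, rule ab_sym, rule comp_Smul_right) (simp_all add: t)
  finally show ?thesis by (simp add: cup_compat_def)
qed

lemma cup_compat_aPhi_comp: "atype A = Some (1, 1) \<Longrightarrow> cup_compat \<delta> A \<Longrightarrow> cup_compat \<delta> (Comp (aPhi \<delta>) A)"
proof -
  assume t: "atype A = Some (1, 1)" and g: "cup_compat \<delta> A"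
  have "abeq \<delta> 0 2 (Comp (aY \<delta>) (cup_bend (Comp (aPhi \<delta>) A))) (Comp (aY \<delta>) (Comp (aPhi01 \<delta>)
      (cup_bend A)))"
    unfolding aPhi01_def by (rule comp_congR[OF cup_bend_Comp]) (simp_all add: t)
  also have "abeq \<delta> 0 2 \<dots> (Comp (Comp (aY \<delta>) (aPhi01 \<delta>)) (cup_bend A))"
    by (rule ab_sym, rule comp_assoc) (simp_all add: t)
  also have "abeq \<delta> 0 2 \<dots> (Comp (Comp (aPhi01 \<delta>) (aY \<delta>)) (cup_bend A))"
    by (rule comp_congL[OF ab_sym[OF aPhi01_aY]]) (simp add: t)
  also have "abeq \<delta> 0 2 \<dots> (Comp (aPhi01 \<delta>) (Comp (aY \<delta>) (cup_bend A)))"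
    by (rule comp_assoc) (simp_all add: t)
  also have "abeq \<delta> 0 2 \<dots> (Comp (aPhi01 \<delta>) (cup_bend (Comp (aPhi \<delta>) A)))" using g
    by (intro comp_congR) (simp_all add: cup_compat_def)
  also have "abeq \<delta> 0 2 \<dots> (cup_bend (Comp (aPhi \<delta>) (Comp (aPhi \<delta>) A)))"
    unfolding aPhi01_def by (rule ab_sym, rule cup_bend_Comp) (simp_all add: t)
  finally show ?thesis by (simp add: cup_compat_def)
qed

lemma cup_compat_scalar: "atype Z = Some (0, 0) \<Longrightarrow> cup_compat \<delta> (Tens Z 1 1 bI)"
proof -
  assume t: "atype Z = Some (0, 0)"
  have "abeq \<delta> 0 2 (Comp (aY \<delta>) (cup_bend (Tens Z 1 1 bI))) (Comp (aY \<delta>) (Comp aAmalg Z))"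
    by (rule comp_congR[OF cup_bend_scalar[OF t]]) simp
  also have "abeq \<delta> 0 2 \<dots> (Comp (Comp (aY \<delta>) aAmalg) Z)"
    by (rule ab_sym, rule comp_assoc) (simp_all add: t)
  also have "abeq \<delta> 0 2 \<dots> (Comp (Comp (aPhi01 \<delta>) aAmalg) Z)"
    by (rule comp_congL[OF aY_aAmalg]) (simp add: t)
  also have "abeq \<delta> 0 2 \<dots> (Comp (aPhi01 \<delta>) (Comp aAmalg Z))" by (rule comp_assoc) (simp_all add: t)
  also have "abeq \<delta> 0 2 \<dots> (Comp (aPhi01 \<delta>) (cup_bend (Tens Z 1 1 bI)))"
    by (rule comp_congR[OF ab_sym[OF cup_bend_scalar[OF t]]]) simp
  also have "abeq \<delta> 0 2 \<dots> (cup_bend (Comp (aPhi \<delta>) (Tens Z 1 1 bI)))"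
    unfolding aPhi01_def by (rule ab_sym, rule cup_bend_Comp) (simp_all add: t)
  finally show ?thesis by (simp add: cup_compat_def)
qed

lemma cup_compat_apow_HH: "cup_compat \<delta> (apow HH i)"
proof -
  have "abeq \<delta> 0 2 (Comp (aY \<delta>) (cup_bend (apow HH i))) (Comp (aY \<delta>) (Comp (aHpow01 i) aAmalg))"
    unfolding cup_bend_apow_HH by (rule abeq_refl) simp
  also have "abeq \<delta> 0 2 \<dots> (Comp (Comp (aY \<delta>) (aHpow01 i)) aAmalg)"
    by (rule ab_sym, rule comp_assoc) simp_all
  also have "abeq \<delta> 0 2 \<dots> (Comp (Comp (aHpow01 i) (aY \<delta>)) aAmalg)"
    by (rule comp_congL[OF ab_sym[OF aHpow01_aY]]) simp
  also have "abeq \<delta> 0 2 \<dots> (Comp (aHpow01 i) (Comp (aY \<delta>) aAmalg))" by (rule comp_assoc) simp_all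
  also have "abeq \<delta> 0 2 \<dots> (Comp (aHpow01 i) (Comp (aPhi01 \<delta>) aAmalg))"
    by (rule comp_congR[OF aY_aAmalg]) simp
  also have "abeq \<delta> 0 2 \<dots> (Comp (Comp (aHpow01 i) (aPhi01 \<delta>)) aAmalg)"
    by (rule ab_sym, rule comp_assoc) simp_all
  also have "abeq \<delta> 0 2 \<dots> (cup_bend (Comp (apow HH i) (aPhi \<delta>)))"
  proof -
    have "abeq \<delta> 0 2 (cup_bend (Comp (apow HH i) (aPhi \<delta>))) (Comp (Tens (apow HH i) 1 1 bI)
        (cup_bend (aPhi \<delta>)))"
      by (rule cup_bend_Comp) simp_all
    also have "abeq \<delta> 0 2 \<dots> (Comp (Comp (aHpow01 i) (aPhi01 \<delta>)) aAmalg)"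
      unfolding cup_bend_def aHpow01_def aPhi01_def by (rule ab_sym, rule comp_assoc) simp_all
    finally show ?thesis by (rule ab_sym)
  qed
  also have "abeq \<delta> 0 2 \<dots> (cup_bend (Comp (aPhi \<delta>) (apow HH i)))"
    by (rule cup_bend_cong, rule commuteD, rule commute_apow, simp, simp, rule commute_HH_aPhi)
  finally show ?thesis by (simp add: cup_compat_def)
qed

lemma cap_compat_abeq: "abeq \<delta> 1 1 A B \<Longrightarrow> cap_compat \<delta> A \<Longrightarrow> cap_compat \<delta> B"
proof -
  assume e: "abeq \<delta> 1 1 A B" and "cap_compat \<delta> A"
  have "abeq \<delta> 2 0 (Comp (cap_bend B) (aY \<delta>)) (Comp (cap_bend A) (aY \<delta>))"
    by (rule comp_congL[OF cap_bend_cong[OF ab_sym[OF e]]]) simp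
  also have "abeq \<delta> 2 0 \<dots> (cap_bend (Comp A (aPhi \<delta>)))"
    using \<open>cap_compat \<delta> A\<close> by (simp add: cap_compat_def)
  also have "abeq \<delta> 2 0 \<dots> (cap_bend (Comp B (aPhi \<delta>)))"
    by (rule cap_bend_cong, rule comp_congL[OF e]) simp
  finally show ?thesis by (simp add: cap_compat_def)
qed

lemma cup_compat_abeq: "abeq \<delta> 1 1 A B \<Longrightarrow> cup_compat \<delta> A \<Longrightarrow> cup_compat \<delta> B"
proof -
  assume e: "abeq \<delta> 1 1 A B" and "cup_compat \<delta> A"
  have "abeq \<delta> 0 2 (Comp (aY \<delta>) (cup_bend B)) (Comp (aY \<delta>) (cup_bend A))"
    by (rule comp_congR[OF cup_bend_cong[OF ab_sym[OF e]]]) simp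
  also have "abeq \<delta> 0 2 \<dots> (cup_bend (Comp (aPhi \<delta>) A))"
    using \<open>cup_compat \<delta> A\<close> by (simp add: cup_compat_def)
  also have "abeq \<delta> 0 2 \<dots> (cup_bend (Comp (aPhi \<delta>) B))"
    by (rule cup_bend_cong, rule comp_congR[OF e]) simp
  finally show ?thesis by (simp add: cup_compat_def)
qed

lemma cap_compat_HH: "cap_compat \<delta> HH"
  by (rule cap_compat_abeq[OF _ cap_compat_apow_HH[of \<delta> 1]])
    (simp add: apow_def One_nat_def comp_aI_right)

lemma cup_compat_HH: "cup_compat \<delta> HH"
  by (rule cup_compat_abeq[OF _ cup_compat_apow_HH[of \<delta> 1]])
    (simp add: apow_def One_nat_def comp_aI_right)

lemma cap_compat_aG: "cap_compat \<delta> (aG i)"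
  unfolding aG_def asub_def by (intro cap_compat_Add cap_compat_Smul cap_compat_scalar
      cap_compat_apow_HH) simp_all
lemma cup_compat_aG: "cup_compat \<delta> (aG i)"
  unfolding aG_def asub_def by (intro cup_compat_Add cup_compat_Smul cup_compat_scalar
      cup_compat_apow_HH) simp_all

section \<open>The transpose of powers of \<open>H\<close>\<close>

text \<open>\<open>transp_rec \<delta> l\<close> will be shown to equal \<open>(H\<^sup>l\<^sup>+\<^sup>1)\<^sup>T\<close> (note the index shift);
  \<open>transp_rec'\<close> is the mirror recursion obtained by bending with cups.\<close>

fun transp_rec :: "'k::comm_ring_1 \<Rightarrow> nat \<Rightarrow> 'k abt" where
  "transp_rec \<delta> 0 = Smul (-1) HH"
| "transp_rec \<delta> (Suc l) = Add (Comp (transp_rec \<delta> l) (aPhi \<delta>)) (aG (Suc l))"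

fun transp_rec' :: "'k::comm_ring_1 \<Rightarrow> nat \<Rightarrow> 'k abt" where
  "transp_rec' \<delta> 0 = Smul (-1) HH"
| "transp_rec' \<delta> (Suc l) = Add (Comp (aPhi \<delta>) (transp_rec' \<delta> l)) (aG (Suc l))"

lemma atype_transp_rec[simp]: "atype (transp_rec \<delta> l) = Some (1, 1)" by (induction l) simp_all
lemma atype_transp_rec'[simp]: "atype (transp_rec' \<delta> l) = Some (1, 1)" by (induction l) simp_all

lemma cap_compat_transp_rec: "cap_compat \<delta> (transp_rec \<delta> l)"
  by (induction l) (auto intro!: cap_compat_Add cap_compat_Smul cap_compat_comp_aPhi cap_compat_HH
      cap_compat_aG)
lemma cup_compat_transp_rec': "cup_compat \<delta> (transp_rec' \<delta> l)"
  by (induction l) (auto intro!: cup_compat_Add cup_compat_Smul cup_compat_aPhi_comp cup_compat_HH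
      cup_compat_aG)

lemma aHpow01_1: "abeq \<delta> 2 2 (aHpow01 (Suc 0)) aH01"
proof -
  have "abeq \<delta> 2 2 (aHpow01 (Suc 0)) (Comp aH01 (aHpow01 0))" by (rule aHpow01_Suc)
  also have "abeq \<delta> 2 2 \<dots> (Comp aH01 (aI 2))" by (rule comp_congR[OF aHpow01_0]) simp
  also have "abeq \<delta> 2 2 \<dots> aH01" by (rule comp_aI_right) simp
  finally show ?thesis .
qed

lemma aPi_aHpow01_aI_minus_aE:
  "abeq \<delta> 2 0 (Comp aPi (Comp (aHpow01 m) (asub (aI 2) aE)))
     (asub (cap_bend (apow HH m)) (cap_bend (Tens (aZ m) 1 1 bI)))"
proof -
  have I: "abeq \<delta> 2 0 (Comp aPi (Comp (aHpow01 m) (aI 2))) (cap_bend (apow HH m))"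
    unfolding cap_bend_apow_HH by (rule comp_congR, rule comp_aI_right) simp_all
  have "abeq \<delta> 2 0 (Comp aPi (Comp (aHpow01 m) aE)) (Comp aPi (Comp (Comp (aHpow01 m) aAmalg) aPi))"
    unfolding aE_def by (rule comp_congR, rule ab_sym, rule comp_assoc) simp_all
  also have "abeq \<delta> 2 0 \<dots> (Comp (aZ m) aPi)" unfolding aZ_eq by (rule ab_sym, rule comp_assoc) simp_all
  also have "abeq \<delta> 2 0 \<dots> (cap_bend (Tens (aZ m) 1 1 bI))" by (rule ab_sym, rule cap_bend_scalar) simp
  finally have E: "abeq \<delta> 2 0 (Comp aPi (Comp (aHpow01 m) aE)) (cap_bend (Tens (aZ m) 1 1 bI))" .
  have "abeq \<delta> 2 0 (Comp aPi (Comp (aHpow01 m) (asub (aI 2) aE)))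
      (Comp aPi (asub (Comp (aHpow01 m) (aI 2)) (Comp (aHpow01 m) aE)))"
    by (rule comp_congR, rule comp_asub_right) simp_all
  also have "abeq \<delta> 2 0 \<dots> (asub (Comp aPi (Comp (aHpow01 m) (aI 2))) (Comp aPi (Comp (aHpow01 m) aE)))"
    by (rule comp_asub_right) simp_all
  also have "abeq \<delta> 2 0 \<dots> (asub (cap_bend (apow HH m)) (cap_bend (Tens (aZ m) 1 1 bI)))"
    by (rule asub_cong[OF I E])
  finally show ?thesis .
qed

lemma aI_minus_aE_aHpow01_aAmalg:
  "abeq \<delta> 0 2 (Comp (asub (aI 2) aE) (Comp (aHpow01 m) aAmalg))
     (asub (cup_bend (apow HH m)) (cup_bend (Tens (aZ m) 1 1 bI)))"
proof -
  have I: "abeq \<delta> 0 2 (Comp (aI 2) (Comp (aHpow01 m) aAmalg)) (cup_bend (apow HH m))"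
    unfolding cup_bend_apow_HH by (rule comp_aI_left) simp_all
  have "abeq \<delta> 0 2 (Comp aE (Comp (aHpow01 m) aAmalg)) (Comp aAmalg (Comp aPi (Comp
      (aHpow01 m) aAmalg)))"
    unfolding aE_def by (rule comp_assoc) simp_all
  also have "abeq \<delta> 0 2 \<dots> (cup_bend (Tens (aZ m) 1 1 bI))"
    unfolding aZ_eq[symmetric] by (rule ab_sym, rule cup_bend_scalar) simp
  finally have E: "abeq \<delta> 0 2 (Comp aE (Comp (aHpow01 m) aAmalg)) (cup_bend (Tens (aZ m) 1 1 bI))" .
  have "abeq \<delta> 0 2 (Comp (asub (aI 2) aE) (Comp (aHpow01 m) aAmalg))
      (asub (Comp (aI 2) (Comp (aHpow01 m) aAmalg)) (Comp aE (Comp (aHpow01 m) aAmalg)))"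
    by (rule comp_asub_left) simp_all
  also have "abeq \<delta> 0 2 \<dots> (asub (cup_bend (apow HH m)) (cup_bend (Tens (aZ m) 1 1 bI)))"
    by (rule asub_cong[OF I E])
  finally show ?thesis .
qed

text \<open>One factor is peeled off \<open>H\<^sup>m\<^sup>+\<^sup>1 \<otimes> I\<close> using \<open>H\<^sub>0\<^sub>1 X\<^sub>0 = X\<^sub>0 Y - (1 - \<amalg>\<Pi>)\<close>.\<close>

lemma aPi_aHpow01_Suc_aX0:
  "abeq \<delta> 2 0 (Comp aPi (Comp (aHpow01 (Suc m)) aX0))
     (asub (Comp (Comp aPi (Comp (aHpow01 m) aX0)) (aY \<delta>))
           (asub (cap_bend (apow HH m)) (cap_bend (Tens (aZ m) 1 1 bI))))"
proof -
  have "abeq \<delta> 2 0 (Comp aPi (Comp (aHpow01 (Suc m)) aX0)) (Comp aPi (Comp (aHpow01 m) (Comp aH01 aX0)))"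
    by (rule ab_trans, rule comp_congR, rule comp_congL[OF aHpow01_Suc'], simp_all,
        rule comp_congR, rule comp_assoc) simp_all
  also have "abeq \<delta> 2 0 \<dots> (Comp aPi (Comp (aHpow01 m) (asub (Comp aX0 (aY \<delta>)) (asub (aI 2) aE))))"
    by (rule comp_congR, rule comp_congR[OF aH01_aX0]) simp_all
  also have "abeq \<delta> 2 0 \<dots> (asub (Comp aPi (Comp (aHpow01 m) (Comp aX0 (aY \<delta>))))
      (Comp aPi (Comp (aHpow01 m) (asub (aI 2) aE))))"
    by (rule ab_trans, rule comp_congR, rule comp_asub_right, simp_all, rule comp_asub_right) simp_all
  also have "abeq \<delta> 2 0 \<dots> (asub (Comp (Comp aPi (Comp (aHpow01 m) aX0)) (aY \<delta>))
      (asub (cap_bend (apow HH m)) (cap_bend (Tens (aZ m) 1 1 bI))))"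
    by (rule asub_cong[OF _ aPi_aHpow01_aI_minus_aE], rule ab_trans, rule comp_congR, rule ab_sym,
        rule comp_assoc, simp_all, rule ab_sym, rule comp_assoc) simp_all
  finally show ?thesis .
qed

lemma aX0_aHpow01_Suc_aAmalg:
  "abeq \<delta> 0 2 (Comp aX0 (Comp (aHpow01 (Suc m)) aAmalg))
     (asub (Comp (aY \<delta>) (Comp aX0 (Comp (aHpow01 m) aAmalg)))
           (asub (cup_bend (apow HH m)) (cup_bend (Tens (aZ m) 1 1 bI))))"
proof -
  have "abeq \<delta> 0 2 (Comp aX0 (Comp (aHpow01 (Suc m)) aAmalg)) (Comp aX0 (Comp aH01 (Comp
      (aHpow01 m) aAmalg)))"
    by (rule ab_trans, rule comp_congR, rule comp_congL[OF aHpow01_Suc], simp_all,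
        rule comp_congR, rule comp_assoc) simp_all
  also have "abeq \<delta> 0 2 \<dots> (Comp (Comp aX0 aH01) (Comp (aHpow01 m) aAmalg))"
    by (rule ab_sym, rule comp_assoc) simp_all
  also have "abeq \<delta> 0 2 \<dots> (Comp (asub (Comp (aY \<delta>) aX0) (asub (aI 2) aE)) (Comp (aHpow01 m) aAmalg))"
    by (rule comp_congL[OF aX0_aH01]) simp
  also have "abeq \<delta> 0 2 \<dots> (asub (Comp (Comp (aY \<delta>) aX0) (Comp (aHpow01 m) aAmalg))
      (Comp (asub (aI 2) aE) (Comp (aHpow01 m) aAmalg)))"
    by (rule comp_asub_left) simp_all
  also have "abeq \<delta> 0 2 \<dots> (asub (Comp (aY \<delta>) (Comp aX0 (Comp (aHpow01 m) aAmalg)))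
      (asub (cup_bend (apow HH m)) (cup_bend (Tens (aZ m) 1 1 bI))))"
    by (rule asub_cong[OF _ aI_minus_aE_aHpow01_aAmalg], rule comp_assoc) simp_all
  finally show ?thesis .
qed

lemma cap_bend_transp_rec:
  "abeq \<delta> 2 0 (Comp aPi (Comp (aHpow01 (Suc l)) aX0)) (cap_bend (transp_rec \<delta> l))"
proof (induction l)
  case 0
  have "abeq \<delta> 2 0 (Comp aPi (Comp (aHpow01 (Suc 0)) aX0)) (Comp aPi (Comp aH01 aX0))"
    by (rule comp_congR, rule comp_congL[OF aHpow01_1]) simp_all
  also have "abeq \<delta> 2 0 \<dots> (Smul (-1) (Comp aPi aH01))" by (rule aPi_aH01_aX0)
  also have "abeq \<delta> 2 0 \<dots> (cap_bend (transp_rec \<delta> 0))"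
    unfolding cap_bend_HH[symmetric] transp_rec.simps by (rule ab_sym, rule cap_bend_Smul) simp
  finally show ?case .
next
  case (Suc l)
  let ?m = "Suc l" and ?R = "transp_rec \<delta> l"
  have "abeq \<delta> 2 0 (Comp (Comp aPi (Comp (aHpow01 ?m) aX0)) (aY \<delta>)) (Comp (cap_bend ?R) (aY \<delta>))"
    by (rule comp_congL[OF Suc.IH]) simp
  also have "abeq \<delta> 2 0 \<dots> (cap_bend (Comp ?R (aPhi \<delta>)))"
    using cap_compat_transp_rec[of \<delta> l] by (simp add: cap_compat_def)
  finally have Y: "abeq \<delta> 2 0 (Comp (Comp aPi (Comp (aHpow01 ?m) aX0)) (aY \<delta>)) (cap_bend (Comp ?R
      (aPhi \<delta>)))" .
  have "abeq \<delta> 2 0 (Comp aPi (Comp (aHpow01 (Suc ?m)) aX0))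
      (asub (cap_bend (Comp ?R (aPhi \<delta>))) (asub (cap_bend (apow HH ?m)) (cap_bend (Tens
          (aZ ?m) 1 1 bI))))"
    by (rule ab_trans[OF aPi_aHpow01_Suc_aX0 asub_cong[OF Y abeq_refl]]) simp
  also have "abeq \<delta> 2 0 \<dots> (Add (cap_bend (Comp ?R (aPhi \<delta>)))
      (asub (cap_bend (Tens (aZ ?m) 1 1 bI)) (cap_bend (apow HH ?m))))"
    by (rule abeq_by_lin_coeff) (simp_all add: asub_def fun_eq_iff algebra_simps)
  also have "abeq \<delta> 2 0 \<dots> (cap_bend (transp_rec \<delta> (Suc l)))"
    unfolding transp_rec.simps aG_def
    by (rule ab_trans, rule add_congR, rule ab_sym, rule cap_bend_asub, simp_all,
        rule ab_sym, rule cap_bend_Add) simp_all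
  finally show ?case .
qed

lemma cup_bend_transp_rec':
  "abeq \<delta> 0 2 (Comp aX0 (Comp (aHpow01 (Suc l)) aAmalg)) (cup_bend (transp_rec' \<delta> l))"
proof (induction l)
  case 0
  have "abeq \<delta> 0 2 (Comp aX0 (Comp (aHpow01 (Suc 0)) aAmalg)) (Comp aX0 (Comp aH01 aAmalg))"
    by (rule comp_congR, rule comp_congL[OF aHpow01_1]) simp_all
  also have "abeq \<delta> 0 2 \<dots> (Smul (-1) (Comp aH01 aAmalg))" by (rule aX0_aH01_aAmalg)
  also have "abeq \<delta> 0 2 \<dots> (cup_bend (transp_rec' \<delta> 0))"
    unfolding cup_bend_HH[symmetric] transp_rec'.simps by (rule ab_sym, rule cup_bend_Smul) simp
  finally show ?case .
next
  case (Suc l)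
  let ?m = "Suc l" and ?R = "transp_rec' \<delta> l"
  have "abeq \<delta> 0 2 (Comp (aY \<delta>) (Comp aX0 (Comp (aHpow01 ?m) aAmalg))) (Comp (aY \<delta>) (cup_bend ?R))"
    by (rule comp_congR[OF Suc.IH]) simp
  also have "abeq \<delta> 0 2 \<dots> (cup_bend (Comp (aPhi \<delta>) ?R))"
    using cup_compat_transp_rec'[of \<delta> l] by (simp add: cup_compat_def)
  finally have Y: "abeq \<delta> 0 2 (Comp (aY \<delta>) (Comp aX0 (Comp (aHpow01 ?m) aAmalg))) (cup_bend (Comp
      (aPhi \<delta>) ?R))" .
  have "abeq \<delta> 0 2 (Comp aX0 (Comp (aHpow01 (Suc ?m)) aAmalg))
      (asub (cup_bend (Comp (aPhi \<delta>) ?R)) (asub (cup_bend (apow HH ?m)) (cup_bend (Tens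
          (aZ ?m) 1 1 bI))))"
    by (rule ab_trans[OF aX0_aHpow01_Suc_aAmalg asub_cong[OF Y abeq_refl]]) simp
  also have "abeq \<delta> 0 2 \<dots> (Add (cup_bend (Comp (aPhi \<delta>) ?R))
      (asub (cup_bend (Tens (aZ ?m) 1 1 bI)) (cup_bend (apow HH ?m))))"
    by (rule abeq_by_lin_coeff) (simp_all add: asub_def fun_eq_iff algebra_simps)
  also have "abeq \<delta> 0 2 \<dots> (cup_bend (transp_rec' \<delta> (Suc l)))"
    unfolding transp_rec'.simps aG_def
    by (rule ab_trans, rule add_congR, rule ab_sym, rule cup_bend_asub, simp_all,
        rule ab_sym, rule cup_bend_Add) simp_all
  finally show ?case .
qed

lemma atransp_eq_transp_rec: "abeq \<delta> 1 1 (atransp (apow HH (Suc l))) (transp_rec \<delta> l)"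
proof -
  have "abeq \<delta> 1 1 (atransp (apow HH (Suc l))) (cap_unbend (Comp aPi (Comp (aHpow01 (Suc l)) aX0)))"
    unfolding aHpow01_def by (rule atransp_eq_cap_unbend) simp
  also have "abeq \<delta> 1 1 \<dots> (cap_unbend (cap_bend (transp_rec \<delta> l)))"
    by (rule cap_unbend_cong[OF cap_bend_transp_rec])
  also have "abeq \<delta> 1 1 \<dots> (transp_rec \<delta> l)" by (rule cap_unbend_bend) simp
  finally show ?thesis .
qed

lemma atransp_eq_transp_rec': "abeq \<delta> 1 1 (atransp (apow HH (Suc l))) (transp_rec' \<delta> l)"
proof -
  have "abeq \<delta> 1 1 (atransp (apow HH (Suc l))) (cup_unbend (Comp aX0 (Comp (aHpow01 (Suc l)) aAmalg)))"
    unfolding aHpow01_def by (rule atransp_eq_cup_unbend) simp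
  also have "abeq \<delta> 1 1 \<dots> (cup_unbend (cup_bend (transp_rec' \<delta> l)))"
    by (rule cup_unbend_cong[OF cup_bend_transp_rec'])
  also have "abeq \<delta> 1 1 \<dots> (transp_rec' \<delta> l)" by (rule cup_unbend_bend) simp
  finally show ?thesis .
qed

section \<open>Solving the recursions\<close>

lemma asum_Nil: "asum f [] = Zer 1 1" by (simp add: asum_def)
lemma asum_Cons: "asum f (x # xs) = Add (f x) (asum f xs)" by (simp add: asum_def)

lemma asum_snoc: "\<forall>i\<in>set (xs @ [x]). atype (f i) = Some (1, 1) \<Longrightarrow>
  abeq \<delta> 1 1 (asum f (xs @ [x])) (Add (asum f xs) (f x))"
proof (induction xs)
  case Nil
  then show ?case unfolding asum_Cons asum_Nil append.simps
    by (intro abeq_by_lin_coeff) (simp_all add: fun_eq_iff)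
next
  case (Cons y ys)
  then have t: "\<forall>i\<in>set (ys @ [x]). atype (f i) = Some (1, 1)" "atype (f y) = Some (1, 1)" by simp_all
  have "abeq \<delta> 1 1 (asum f ((y # ys) @ [x])) (Add (f y) (Add (asum f ys) (f x)))"
    unfolding append.simps asum_Cons by (rule add_congR[OF Cons.IH[OF t(1)]]) (simp add: t)
  also have "abeq \<delta> 1 1 \<dots> (Add (asum f (y # ys)) (f x))"
    unfolding asum_Cons using t by (intro abeq_by_lin_coeff) (simp_all add: fun_eq_iff algebra_simps)
  finally show ?case .
qed

lemma asum_cong: "\<forall>i\<in>set xs. abeq \<delta> 1 1 (f i) (g i) \<Longrightarrow> abeq \<delta> 1 1 (asum f xs) (asum g xs)"
proof (induction xs)
  case Nil then show ?case by (simp add: asum_Nil abeq_refl)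
next
  case (Cons x xs) then show ?case unfolding asum_Cons by (intro ab_add_cong) simp_all
qed

lemma comp_Zer_left: "atype D = Some (r, s) \<Longrightarrow> abeq \<delta> r t (Comp (Zer s t) D) (Zer r t)"
proof -
  assume t: "atype D = Some (r, s)"
  have "abeq \<delta> r t (Comp (Zer s t) D) (Comp (Smul 0 (Zer s t)) D)"
    by (rule comp_congL[OF ab_sym[OF Smul_0]]) (simp_all add: t)
  also have "abeq \<delta> r t \<dots> (Smul 0 (Comp (Zer s t) D))" by (rule comp_Smul_left) (simp_all add: t)
  also have "abeq \<delta> r t \<dots> (Zer r t)" by (rule Smul_0) (simp add: t)
  finally show ?thesis .
qed

lemma comp_Zer_right: "atype D = Some (s, t) \<Longrightarrow> abeq \<delta> r t (Comp D (Zer r s)) (Zer r t)"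
proof -
  assume t: "atype D = Some (s, t)"
  have "abeq \<delta> r t (Comp D (Zer r s)) (Comp D (Smul 0 (Zer r s)))"
    by (rule comp_congR[OF ab_sym[OF Smul_0]]) (simp_all add: t)
  also have "abeq \<delta> r t \<dots> (Smul 0 (Comp D (Zer r s)))" by (rule comp_Smul_right) (simp_all add: t)
  also have "abeq \<delta> r t \<dots> (Zer r t)" by (rule Smul_0) (simp add: t)
  finally show ?thesis .
qed

lemma comp_asum_left: "\<forall>i\<in>set xs. atype (f i) = Some (1, 1) \<Longrightarrow> atype D = Some (1, 1) \<Longrightarrow>
  abeq \<delta> 1 1 (Comp (asum f xs) D) (asum (\<lambda>i. Comp (f i) D) xs)"
proof (induction xs)
  case Nil show ?case unfolding asum_Nil by (rule comp_Zer_left) (use Nil.prems in simp)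
next
  case (Cons x xs)
  have "abeq \<delta> 1 1 (Comp (asum f (x # xs)) D) (Add (Comp (f x) D) (Comp (asum f xs) D))"
    unfolding asum_Cons by (rule comp_Add_left) (use Cons.prems in simp_all)
  also have "abeq \<delta> 1 1 \<dots> (asum (\<lambda>i. Comp (f i) D) (x # xs))"
    unfolding asum_Cons by (rule add_congR) (use Cons in simp_all)
  finally show ?case .
qed

lemma comp_asum_right: "\<forall>i\<in>set xs. atype (f i) = Some (1, 1) \<Longrightarrow> atype D = Some (1, 1) \<Longrightarrow>
  abeq \<delta> 1 1 (Comp D (asum f xs)) (asum (\<lambda>i. Comp D (f i)) xs)"
proof (induction xs)
  case Nil show ?case unfolding asum_Nil by (rule comp_Zer_right) (use Nil.prems in simp)
next
  case (Cons x xs)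
  have "abeq \<delta> 1 1 (Comp D (asum f (x # xs))) (Add (Comp D (f x)) (Comp D (asum f xs)))"
    unfolding asum_Cons by (rule comp_Add_right) (use Cons.prems in simp_all)
  also have "abeq \<delta> 1 1 \<dots> (asum (\<lambda>i. Comp D (f i)) (x # xs))"
    unfolding asum_Cons by (rule add_congR) (use Cons in simp_all)
  finally show ?case .
qed

lemma asum_asub: "\<forall>i\<in>set xs. atype (f i) = Some (1, 1) \<and> atype (g i) = Some (1, 1) \<Longrightarrow>
  abeq \<delta> 1 1 (asum (\<lambda>i. asub (f i) (g i)) xs) (asub (asum f xs) (asum g xs))"
proof (induction xs)
  case Nil then show ?case unfolding asum_Nil
    by (intro abeq_by_lin_coeff) (simp_all add: asub_def fun_eq_iff)
next
  case (Cons x xs)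
  then have t: "atype (f x) = Some (1, 1)" "atype (g x) = Some (1, 1)" "\<forall>i\<in>set xs. atype
      (f i) = Some (1, 1)"
    "\<forall>i\<in>set xs. atype (g i) = Some (1, 1)" by simp_all
  have "abeq \<delta> 1 1 (asum (\<lambda>i. asub (f i) (g i)) (x # xs)) (Add (asub (f x) (g x)) (asub (asum f xs)
      (asum g xs)))"
    unfolding asum_Cons by (rule add_congR) (use Cons in simp_all)
  also have "abeq \<delta> 1 1 \<dots> (asub (asum f (x # xs)) (asum g (x # xs)))"
    unfolding asum_Cons using t by (intro abeq_by_lin_coeff)
        (simp_all add: asub_def fun_eq_iff algebra_simps)
  finally show ?case .
qed

lemma asum_comp_apow_Suc_minus:
  assumes "\<forall>i\<in>set [1..<l + 1]. atype (f i) = Some (1, 1)" "atype D = Some (1, 1)"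
  shows "abeq \<delta> 1 1 (asum (\<lambda>i. Comp (f i) (apow D (Suc l - i))) [1..<l + 1])
           (Comp (asum (\<lambda>i. Comp (f i) (apow D (l - i))) [1..<l + 1]) D)"
proof -
  have "abeq \<delta> 1 1 (Comp (f i) (apow D (Suc l - i))) (Comp (Comp (f i) (apow D (l - i))) D)"
    if i: "i \<in> set [1..<l + 1]" for i
  proof -
    have "Suc l - i = Suc (l - i)" using i by auto
    then have "abeq \<delta> 1 1 (Comp (f i) (apow D (Suc l - i))) (Comp (f i) (Comp (apow D (l - i)) D))"
      using assms i by (auto intro: comp_congR apow_Suc')
    also have "abeq \<delta> 1 1 \<dots> (Comp (Comp (f i) (apow D (l - i))) D)"
      by (rule ab_sym, rule comp_assoc) (use assms i in simp_all)
    finally show ?thesis .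
  qed
  then have "abeq \<delta> 1 1 (asum (\<lambda>i. Comp (f i) (apow D (Suc l - i))) [1..<l + 1])
      (asum (\<lambda>i. Comp (Comp (f i) (apow D (l - i))) D) [1..<l + 1])"
    by (intro asum_cong ballI)
  also have "abeq \<delta> 1 1 \<dots> (Comp (asum (\<lambda>i. Comp (f i) (apow D (l - i))) [1..<l + 1]) D)"
    by (rule ab_sym, rule comp_asum_left) (use assms in simp_all)
  finally show ?thesis .
qed

lemma asum_apow_Suc_minus_comp:
  assumes "\<forall>i\<in>set [1..<l + 1]. atype (f i) = Some (1, 1)" "atype D = Some (1, 1)"
  shows "abeq \<delta> 1 1 (asum (\<lambda>i. Comp (apow D (Suc l - i)) (f i)) [1..<l + 1])
           (Comp D (asum (\<lambda>i. Comp (apow D (l - i)) (f i)) [1..<l + 1]))"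
proof -
  have "abeq \<delta> 1 1 (Comp (apow D (Suc l - i)) (f i)) (Comp D (Comp (apow D (l - i)) (f i)))"
    if i: "i \<in> set [1..<l + 1]" for i
  proof -
    have "apow D (Suc l - i) = Comp D (apow D (l - i))"
      using i by (simp add: Suc_diff_le apow_Suc)
    then show ?thesis by (simp only:) (rule comp_assoc; use assms i in simp)
  qed
  then have "abeq \<delta> 1 1 (asum (\<lambda>i. Comp (apow D (Suc l - i)) (f i)) [1..<l + 1])
      (asum (\<lambda>i. Comp D (Comp (apow D (l - i)) (f i))) [1..<l + 1])"
    by (intro asum_cong ballI)
  also have "abeq \<delta> 1 1 \<dots> (Comp D (asum (\<lambda>i. Comp (apow D (l - i)) (f i)) [1..<l + 1]))"
    by (rule ab_sym, rule comp_asum_right) (use assms in simp_all)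
  finally show ?thesis .
qed

lemma transp_rec_closed_form:
  "abeq \<delta> 1 1 (asub (asum (\<lambda>i. Comp (aG i) (apow (aPhi \<delta>) (l - i))) [1..<l + 1])
                    (Comp HH (apow (aPhi \<delta>) l)))
     (transp_rec \<delta> l)"
proof (induction l)
  case 0
  have "abeq \<delta> 1 1 (asub (Zer 1 1) (Comp HH (aI 1))) (asub (Zer 1 1) HH)"
    by (rule asub_cong, rule abeq_refl, simp, rule comp_aI_right) simp
  also have "abeq \<delta> 1 1 \<dots> (Smul (-1) HH)"
    by (intro abeq_by_lin_coeff) (simp_all add: asub_def fun_eq_iff)
  finally show ?case by (simp add: asum_Nil apow_0)
next
  case (Suc l)
  let ?P = "aPhi \<delta>"
  let ?S = "asum (\<lambda>i. Comp (aG i) (apow ?P (l - i))) [1..<l + 1]"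
  have split: "[1..<Suc l + 1] = [1..<l + 1] @ [Suc l]" by simp
  have last: "abeq \<delta> 1 1 (Comp (aG (Suc l)) (apow ?P 0)) (aG (Suc l))"
    unfolding apow_0 by (rule comp_aI_right) simp
  have H: "abeq \<delta> 1 1 (Comp HH (apow ?P (Suc l))) (Comp (Comp HH (apow ?P l)) ?P)"
    by (rule ab_trans, rule comp_congR, rule apow_Suc', simp_all, rule ab_sym, rule comp_assoc) simp_all
  have "abeq \<delta> 1 1 (asub (asum (\<lambda>i. Comp (aG i) (apow ?P (Suc l - i))) [1..<Suc l + 1])
        (Comp HH (apow ?P (Suc l))))
      (asub (Add (asum (\<lambda>i. Comp (aG i) (apow ?P (Suc l - i))) [1..<l + 1])
        (Comp (aG (Suc l)) (apow ?P 0))) (Comp (Comp HH (apow ?P l)) ?P))"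
    unfolding split
    by (rule asub_cong[OF _ H])
      (use asum_snoc[where f = "\<lambda>i. Comp (aG i) (apow ?P
          (Suc l - i))" and xs = "[1..<l + 1]" and x = "Suc l"] in simp)
  also have "abeq \<delta> 1 1 \<dots> (asub (Add (Comp ?S ?P) (aG (Suc l))) (Comp (Comp HH (apow ?P l)) ?P))"
    by (rule asub_cong, rule ab_add_cong[OF asum_comp_apow_Suc_minus last]) (simp_all add: abeq_refl)
  also have "abeq \<delta> 1 1 \<dots> (Add (asub (Comp ?S ?P) (Comp (Comp HH (apow ?P l)) ?P)) (aG (Suc l)))"
    by (intro abeq_by_lin_coeff) (simp_all add: asub_def fun_eq_iff algebra_simps)
  also have "abeq \<delta> 1 1 \<dots> (Add (Comp (asub ?S (Comp HH (apow ?P l))) ?P) (aG (Suc l)))"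
    by (rule add_congL, rule ab_sym, rule comp_asub_left) simp_all
  also have "abeq \<delta> 1 1 \<dots> (transp_rec \<delta> (Suc l))"
    unfolding transp_rec.simps by (rule add_congL, rule comp_congL[OF Suc.IH]) simp_all
  finally show ?case .
qed

lemma transp_rec'_closed_form:
  "abeq \<delta> 1 1 (asub (asum (\<lambda>i. Comp (apow (aPhi \<delta>) (l - i)) (aG i)) [1..<l + 1])
                    (Comp (apow (aPhi \<delta>) l) HH))
     (transp_rec' \<delta> l)"
proof (induction l)
  case 0
  have "abeq \<delta> 1 1 (asub (Zer 1 1) (Comp (aI 1) HH)) (asub (Zer 1 1) HH)"
    by (rule asub_cong, rule abeq_refl, simp, rule comp_aI_left) simp
  also have "abeq \<delta> 1 1 \<dots> (Smul (-1) HH)"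
    by (intro abeq_by_lin_coeff) (simp_all add: asub_def fun_eq_iff)
  finally show ?case by (simp add: asum_Nil apow_0)
next
  case (Suc l)
  let ?P = "aPhi \<delta>"
  let ?S = "asum (\<lambda>i. Comp (apow ?P (l - i)) (aG i)) [1..<l + 1]"
  have split: "[1..<Suc l + 1] = [1..<l + 1] @ [Suc l]" by simp
  have last: "abeq \<delta> 1 1 (Comp (apow ?P 0) (aG (Suc l))) (aG (Suc l))"
    unfolding apow_0 by (rule comp_aI_left) simp
  have H: "abeq \<delta> 1 1 (Comp (apow ?P (Suc l)) HH) (Comp ?P (Comp (apow ?P l) HH))"
    unfolding apow_Suc by (rule comp_assoc) simp_all
  have "abeq \<delta> 1 1 (asub (asum (\<lambda>i. Comp (apow ?P (Suc l - i)) (aG i)) [1..<Suc l + 1])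
        (Comp (apow ?P (Suc l)) HH))
      (asub (Add (asum (\<lambda>i. Comp (apow ?P (Suc l - i)) (aG i)) [1..<l + 1])
        (Comp (apow ?P 0) (aG (Suc l)))) (Comp ?P (Comp (apow ?P l) HH)))"
    unfolding split
    by (rule asub_cong[OF _ H])
      (use asum_snoc[where f = "\<lambda>i. Comp (apow ?P (Suc l - i))
          (aG i)" and xs = "[1..<l + 1]" and x = "Suc l"] in simp)
  also have "abeq \<delta> 1 1 \<dots> (asub (Add (Comp ?P ?S) (aG (Suc l))) (Comp ?P (Comp (apow ?P l) HH)))"
    by (rule asub_cong, rule ab_add_cong[OF asum_apow_Suc_minus_comp last]) (simp_all add: abeq_refl)
  also have "abeq \<delta> 1 1 \<dots> (Add (asub (Comp ?P ?S) (Comp ?P (Comp (apow ?P l) HH))) (aG (Suc l)))"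
    by (intro abeq_by_lin_coeff) (simp_all add: asub_def fun_eq_iff algebra_simps)
  also have "abeq \<delta> 1 1 \<dots> (Add (Comp ?P (asub ?S (Comp (apow ?P l) HH))) (aG (Suc l)))"
    by (rule add_congL, rule ab_sym, rule comp_asub_right) simp_all
  also have "abeq \<delta> 1 1 \<dots> (transp_rec' \<delta> (Suc l))"
    unfolding transp_rec'.simps by (rule add_congL, rule comp_congR[OF Suc.IH]) simp_all
  finally show ?case .
qed

lemma aG_commutator:
  "abeq \<delta> 1 1 (asub (Comp (aG i) (apow (aPhi \<delta>) k)) (Comp (apow (aPhi \<delta>) k) (aG i)))
     (asub (Comp (Tens (aZ i) 1 1 bI) (apow (aPhi \<delta>) k)) (Comp (apow (aPhi \<delta>) k) (Tens (aZ i) 1 1 bI)))"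
proof -
  let ?Z = "Tens (aZ i) 1 1 bI" and ?P = "apow (aPhi \<delta>) k" and ?H = "apow HH i"
  have "abeq \<delta> 1 1 (asub (Comp (aG i) ?P) (Comp ?P (aG i)))
     (asub (asub (Comp ?Z ?P) (Comp ?H ?P)) (asub (Comp ?P ?Z) (Comp ?P ?H)))"
    unfolding aG_def by (rule asub_cong, rule comp_asub_left, simp_all, rule comp_asub_right, simp_all)
  also have "abeq \<delta> 1 1 \<dots> (asub (asub (Comp ?Z ?P) (Comp ?P ?H)) (asub (Comp ?P ?Z) (Comp ?P ?H)))"
    by (rule asub_cong, rule asub_cong, rule abeq_refl, simp, rule commuteD,
        rule commute_apow_HH_apow_aPhi, rule abeq_refl, simp)
  also have "abeq \<delta> 1 1 \<dots> (asub (Comp ?Z ?P) (Comp ?P ?Z))"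
    by (intro abeq_by_lin_coeff) (simp_all add: asub_def fun_eq_iff algebra_simps)
  finally show ?thesis .
qed

text \<open>Both closed forms equal \<open>(H\<^sup>l\<^sup>+\<^sup>1)\<^sup>T\<close>; since \<open>H\<close> commutes with \<open>\<Phi>\<close>, their difference is
  the sum of the commutators \<open>[G\<^sub>i, \<Phi>\<^sup>l\<^sup>-\<^sup>i] = [Z\<^sub>i \<otimes> I, \<Phi>\<^sup>l\<^sup>-\<^sup>i]\<close>.\<close>

lemma aZ_commutator_sum_upto:
  "abeq \<delta> 1 1
     (asum (\<lambda>i. asub (Comp (Tens (aZ i) 1 1 bI) (apow (aPhi \<delta>) (l - i)))
                      (Comp (apow (aPhi \<delta>) (l - i)) (Tens (aZ i) 1 1 bI))) [1..<l + 1])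
     (Zer 1 1)"
proof -
  let ?P = "aPhi \<delta>"
  let ?S1 = "asum (\<lambda>i. Comp (aG i) (apow ?P (l - i))) [1..<l + 1]"
  let ?S2 = "asum (\<lambda>i. Comp (apow ?P (l - i)) (aG i)) [1..<l + 1]"
  let ?X = "Comp HH (apow ?P l)" and ?Y = "Comp (apow ?P l) HH"
  have closed_forms: "abeq \<delta> 1 1 (asub ?S1 ?X) (asub ?S2 ?Y)"
    by (rule ab_trans[OF ab_trans[OF transp_rec_closed_form ab_sym[OF atransp_eq_transp_rec]]
          ab_trans[OF atransp_eq_transp_rec' ab_sym[OF transp_rec'_closed_form]]])
  have XY: "abeq \<delta> 1 1 ?X ?Y"
    by (rule ab_sym, rule commuteD, rule commute_apow, simp_all, rule commute_sym, rule commute_HH_aPhi)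
  have "abeq \<delta> 1 1
      (asum (\<lambda>i. asub (Comp (Tens (aZ i) 1 1 bI) (apow ?P (l - i)))
                       (Comp (apow ?P (l - i)) (Tens (aZ i) 1 1 bI))) [1..<l + 1])
      (asum (\<lambda>i. asub (Comp (aG i) (apow ?P (l - i))) (Comp (apow ?P (l - i)) (aG i))) [1..<l + 1])"
    by (rule asum_cong, intro ballI, rule ab_sym, rule aG_commutator)
  also have "abeq \<delta> 1 1 \<dots> (asub ?S1 ?S2)" by (rule asum_asub) simp
  also have "abeq \<delta> 1 1 \<dots> (asub (asub ?S1 ?X) (asub ?S2 ?X))"
    by (intro abeq_by_lin_coeff) (simp_all add: asub_def fun_eq_iff algebra_simps)
  also have "abeq \<delta> 1 1 \<dots> (asub (asub ?S2 ?Y) (asub ?S2 ?Y))"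
    by (rule asub_cong[OF closed_forms], rule asub_cong[OF abeq_refl XY]) simp
  also have "abeq \<delta> 1 1 \<dots> (Zer 1 1)"
    by (intro abeq_by_lin_coeff) (simp_all add: asub_def fun_eq_iff algebra_simps)
  finally show ?thesis .
qed

lemma aZ_commutator_sum:
  "abeq \<delta> 1 1
     (asum (\<lambda>i. asub (Comp (Tens (aZ i) 1 1 bI) (apow (aPhi \<delta>) (l - i)))
                      (Comp (apow (aPhi \<delta>) (l - i)) (Tens (aZ i) 1 1 bI))) [1..<l])
     (Zer 1 1)"
proof (cases l)
  case 0
  then show ?thesis by (simp add: asum_Nil abeq_refl)
next
  case (Suc l')
  let ?C = "\<lambda>i. asub (Comp (Tens (aZ i) 1 1 bI) (apow (aPhi \<delta>) (l - i)))
                      (Comp (apow (aPhi \<delta>) (l - i)) (Tens (aZ i) 1 1 bI))"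
  have "abeq \<delta> 1 1 (?C l) (asub (Tens (aZ l) 1 1 bI) (Tens (aZ l) 1 1 bI))"
    unfolding diff_self_eq_0 apow_0 by (rule asub_cong, rule comp_aI_right, simp, rule comp_aI_left) simp
  also have "abeq \<delta> 1 1 \<dots> (Zer 1 1)" by (intro abeq_by_lin_coeff) (simp_all add: asub_def fun_eq_iff)
  finally have last: "abeq \<delta> 1 1 (?C l) (Zer 1 1)" .
  have split: "[1..<l + 1] = [1..<l] @ [l]"
    using Suc by (metis Suc_eq_plus1 le_add1 plus_1_eq_Suc upt_Suc_append)
  have "abeq \<delta> 1 1 (asum ?C [1..<l]) (Add (asum ?C [1..<l]) (?C l))"
    by (rule ab_sym, rule ab_trans, rule add_congR[OF last], simp, rule Add_Zer_right) simp
  also have "abeq \<delta> 1 1 \<dots> (asum ?C [1..<l + 1])"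
    unfolding split by (rule ab_sym, rule asum_snoc) simp
  also have "abeq \<delta> 1 1 \<dots> (Zer 1 1)" by (rule aZ_commutator_sum_upto)
  finally show ?thesis .
qed

theorem corollary2p18:
  fixes \<delta> :: "'k::comm_ring_1" and l :: nat
  shows "abeq \<delta> 1 1 (atransp (apow HH (l + 1)))
           (asub (asum (\<lambda>i. Comp (aG i) (apow (aPhi \<delta>) (l - i))) [1..<l + 1])
                 (Comp HH (apow (aPhi \<delta>) l)))
       \<and> abeq \<delta> 1 1 (atransp (apow HH (l + 1)))
           (asub (asum (\<lambda>i. Comp (apow (aPhi \<delta>) (l - i)) (aG i)) [1..<l + 1])
                 (Comp (apow (aPhi \<delta>) l) HH))
       \<and> abeq \<delta> 1 1
           (asum (\<lambda>i. asub (Comp (Tens (aZ i) 1 1 bI) (apow (aPhi \<delta>) (l - i)))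
                            (Comp (apow (aPhi \<delta>) (l - i)) (Tens (aZ i) 1 1 bI))) [1..<l])
           (Zer 1 1)"
proof (intro conjI)
  show "abeq \<delta> 1 1 (atransp (apow HH (l + 1)))
      (asub (asum (\<lambda>i. Comp (aG i) (apow (aPhi \<delta>) (l - i))) [1..<l + 1]) (Comp HH (apow (aPhi \<delta>) l)))"
    using ab_trans[OF atransp_eq_transp_rec ab_sym[OF transp_rec_closed_form]]
    by (simp add: Suc_eq_plus1)
  show "abeq \<delta> 1 1 (atransp (apow HH (l + 1)))
      (asub (asum (\<lambda>i. Comp (apow (aPhi \<delta>) (l - i)) (aG i)) [1..<l + 1]) (Comp (apow (aPhi \<delta>) l) HH))"
    using ab_trans[OF atransp_eq_transp_rec' ab_sym[OF transp_rec'_closed_form]]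
    by (simp add: Suc_eq_plus1)
qed (rule aZ_commutator_sum)

end
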